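(* Let $k$ be a field, let $A$ be a commutative algebra in the Delannoy category $\mathrm{\underline{Rep}}(\mathbb{G})$ over $k$, and let $U$ be an open subgroup of $\mathbb{G}$. Suppose $f:\mathrm{Res}^{\mathbb{G}}_U(A)\to\mathbf{1}$ is an algebra homomorphism in $\mathrm{\underline{Rep}}(U)$. Then there is an algebra homomorphism $g:A\to\mathcal{C}(\mathbb{G}/U)$ in $\mathrm{\underline{Rep}}(\mathbb{G})$, uniquely characterized by the identity $f=\epsilon\circ\mathrm{Res}^{\mathbb{G}}_U(g)$, where $\epsilon:\mathcal{C}(\mathbb{G}/U)\to\mathbf{1}$ (a morphism in $\mathrm{\underline{Rep}}(U)$) evaluates a function at the coset $1\in\mathbb{G}/U$.
   Context: $\mathbb{G}=\mathrm{Aut}(\mathbf{R},<)$ with topology in which pointwise stabilizers of finite subsets form a neighborhood basis of $1$. For an open subgroup $U$, $\mathrm{\underline{Rep}}(U)$ is the Karoubi envelope of Harman–Snowden's $\mathrm{\underline{Perm}}(U,\mu)$, $\mu$ the measure with $\mu(\mathbf{R}^{(n)})=(-1)^n$ (objects: Schwartz spaces $\mathcal{C}(X)$ for finitary smooth $U$-sets $X$; morphisms $\mathcal{C}(X)\to\mathcal{C}(Y)$: $U$-invariant functions on $Y\times X$ composed by $\mu$-convolution); $\mathrm{\underline{Rep}}(\mathbb{G})$ is the Delannoy category. $\mathrm{Res}^{\mathbb{G}}_U$ is the restriction tensor functor; it has an induction functor $\mathrm{Ind}_U^{\mathbb{G}}$ as both left and right adjoint, with $\mathrm{Ind}_U^{\mathbb{G}}(\mathbf{1})=\mathcal{C}(\mathbb{G}/U)$.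 Algebras are commutative, unital, associative. *)

theory Defs
  imports Complex_Main
begin

definition Gaut :: "(real \<Rightarrow> real) set" where
  "Gaut = {\<sigma>. bij \<sigma> \<and> strict_mono \<sigma>}"

text \<open>Pointwise stabilizer of a set of reals; for finite F these form a neighbourhood basis of 1.\<close>
definition pstab :: "real set \<Rightarrow> (real \<Rightarrow> real) set" where
  "pstab F = {\<sigma> \<in> Gaut. \<forall>t\<in>F. \<sigma> t = t}"

definition open_subgroup :: "(real \<Rightarrow> real) set \<Rightarrow> bool" where
  "open_subgroup U \<longleftrightarrow> U \<subseteq> Gaut \<and> id \<in> U \<and> (\<forall>\<sigma>\<in>U. \<forall>\<tau>\<in>U. \<sigma> \<circ> \<tau> \<in> U)
     \<and> (\<forall>\<sigma>\<in>U. inv \<sigma> \<in> U) \<and> (\<exists>F. finite F \<and> pstab F \<subseteq> U)"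

definition orbit :: "(real \<Rightarrow> real) set \<Rightarrow> ((real \<Rightarrow> real) \<Rightarrow> 'x \<Rightarrow> 'x) \<Rightarrow> 'x \<Rightarrow> 'x set" where
  "orbit V act x = (\<lambda>\<sigma>. act \<sigma> x) ` V"

definition orbits :: "(real \<Rightarrow> real) set \<Rightarrow> 'x set \<Rightarrow> ((real \<Rightarrow> real) \<Rightarrow> 'x \<Rightarrow> 'x) \<Rightarrow> 'x set set" where
  "orbits V X act = orbit V act ` X"

definition stab :: "(real \<Rightarrow> real) set \<Rightarrow> ((real \<Rightarrow> real) \<Rightarrow> 'x \<Rightarrow> 'x) \<Rightarrow> 'x \<Rightarrow> (real \<Rightarrow> real) set" where
  "stab V act x = {\<sigma> \<in> V. act \<sigma> x = x}"

definition uset :: "(real \<Rightarrow> real) set \<Rightarrow> 'x set \<Rightarrow> ((real \<Rightarrow> real) \<Rightarrow> 'x \<Rightarrow> 'x) \<Rightarrow> bool" where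
  "uset U X act \<longleftrightarrow>
     (\<forall>x\<in>X. act id x = x) \<and> (\<forall>\<sigma>\<in>U. \<forall>x\<in>X. act \<sigma> x \<in> X)
   \<and> (\<forall>\<sigma>\<in>U. \<forall>\<tau>\<in>U. \<forall>x\<in>X. act (\<sigma> \<circ> \<tau>) x = act \<sigma> (act \<tau> x))
   \<and> (\<forall>x\<in>X. \<exists>F. finite F \<and> pstab F \<subseteq> stab U act x)
   \<and> finite (orbits U X act)"

definition pact :: "((real \<Rightarrow> real) \<Rightarrow> 'x \<Rightarrow> 'x) \<Rightarrow> ((real \<Rightarrow> real) \<Rightarrow> 'y \<Rightarrow> 'y)
     \<Rightarrow> (real \<Rightarrow> real) \<Rightarrow> 'x \<times> 'y \<Rightarrow> 'x \<times> 'y" where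
  "pact a b \<sigma> p = (a \<sigma> (fst p), b \<sigma> (snd p))"

definition triv :: "(real \<Rightarrow> real) \<Rightarrow> unit \<Rightarrow> unit" where
  "triv \<sigma> x = x"

section \<open>The measure mu with mu(R^(n)) = (-1)^n and integration\<close>

definition fixpts :: "(real \<Rightarrow> real) set \<Rightarrow> real set" where
  "fixpts V = {t. \<forall>\<sigma>\<in>V. \<sigma> t = t}"

definition fun_stab :: "(real \<Rightarrow> real) set \<Rightarrow> 'y set \<Rightarrow> ((real \<Rightarrow> real) \<Rightarrow> 'y \<Rightarrow> 'y)
     \<Rightarrow> ('y \<Rightarrow> 'k) \<Rightarrow> (real \<Rightarrow> real) set" where
  "fun_stab U Y act \<phi> = {\<sigma> \<in> U. \<forall>y\<in>Y. \<phi> (act \<sigma> y) = \<phi> y}"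

text \<open>Integral of a smooth function phi over the U-set Y w.r.t. mu: phi is invariant under the
  open subgroup V = pstab(A) (A = fixpts V); a transitive V-set V/pstab(B) has measure (-1)^(|B|-|A|).\<close>
definition integral_mu :: "(real \<Rightarrow> real) set \<Rightarrow> 'y set \<Rightarrow> ((real \<Rightarrow> real) \<Rightarrow> 'y \<Rightarrow> 'y)
     \<Rightarrow> ('y \<Rightarrow> 'k::field) \<Rightarrow> 'k" where
  "integral_mu U Y act \<phi> =
     (let V = fun_stab U Y act \<phi> in
      \<Sum>Ob\<in>orbits V Y act. (let y = (SOME y. y \<in> Ob) in
          \<phi> y * (-1) ^ card (fixpts (stab V act y)) * (-1) ^ card (fixpts V)))"

section \<open>The category Perm(U,mu) and its Karoubi envelope Rep(U)\<close>

text \<open>Morphisms C(X) -> C(Y): U-invariant functions on Y x X (supported on Y x X).\<close>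
definition pmor :: "(real \<Rightarrow> real) set \<Rightarrow> 'x set \<Rightarrow> ((real \<Rightarrow> real) \<Rightarrow> 'x \<Rightarrow> 'x)
     \<Rightarrow> 'y set \<Rightarrow> ((real \<Rightarrow> real) \<Rightarrow> 'y \<Rightarrow> 'y) \<Rightarrow> ('y \<times> 'x \<Rightarrow> 'k::field) \<Rightarrow> bool" where
  "pmor U X actX Y actY \<phi> \<longleftrightarrow>
     (\<forall>\<sigma>\<in>U. \<forall>y\<in>Y. \<forall>x\<in>X. \<phi> (actY \<sigma> y, actX \<sigma> x) = \<phi> (y, x))
   \<and> (\<forall>y x. \<phi> (y, x) \<noteq> 0 \<longrightarrow> y \<in> Y \<and> x \<in> X)"

definition comp :: "(real \<Rightarrow> real) set \<Rightarrow> 'y set \<Rightarrow> ((real \<Rightarrow> real) \<Rightarrow> 'y \<Rightarrow> 'y)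
     \<Rightarrow> ('z \<times> 'y \<Rightarrow> 'k::field) \<Rightarrow> ('y \<times> 'x \<Rightarrow> 'k) \<Rightarrow> ('z \<times> 'x \<Rightarrow> 'k)" where
  "comp U Y actY \<psi> \<phi> = (\<lambda>(z, x). integral_mu U Y actY (\<lambda>y. \<psi> (z, y) * \<phi> (y, x)))"

definition ktensor :: "('y \<times> 'x \<Rightarrow> 'k::field) \<Rightarrow> ('y2 \<times> 'x2 \<Rightarrow> 'k)
     \<Rightarrow> ('y \<times> 'y2) \<times> ('x \<times> 'x2) \<Rightarrow> 'k" where
  "ktensor \<phi> \<psi> p = \<phi> (fst (fst p), fst (snd p)) * \<psi> (snd (fst p), snd (snd p))"

text \<open>Objects of the Karoubi envelope: (C(X), e) with e an idempotent endomorphism.\<close>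
definition kobj :: "(real \<Rightarrow> real) set \<Rightarrow> 'x set \<Rightarrow> ((real \<Rightarrow> real) \<Rightarrow> 'x \<Rightarrow> 'x)
     \<Rightarrow> ('x \<times> 'x \<Rightarrow> 'k::field) \<Rightarrow> bool" where
  "kobj U X act e \<longleftrightarrow> uset U X act \<and> pmor U X act X act e \<and> comp U X act e e = e"

definition kmor :: "(real \<Rightarrow> real) set \<Rightarrow> 'x set \<Rightarrow> ((real \<Rightarrow> real) \<Rightarrow> 'x \<Rightarrow> 'x) \<Rightarrow> ('x \<times> 'x \<Rightarrow> 'k::field)
     \<Rightarrow> 'y set \<Rightarrow> ((real \<Rightarrow> real) \<Rightarrow> 'y \<Rightarrow> 'y) \<Rightarrow> ('y \<times> 'y \<Rightarrow> 'k) \<Rightarrow> ('y \<times> 'x \<Rightarrow> 'k) \<Rightarrow> bool" where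
  "kmor U X actX e Y actY e' \<phi> \<longleftrightarrow>
     pmor U X actX Y actY \<phi> \<and> comp U Y actY e' \<phi> = \<phi> \<and> comp U X actX \<phi> e = \<phi>"

text \<open>Unit object 1 = C(point).\<close>
definition unit_e :: "unit \<times> unit \<Rightarrow> 'k::field" where "unit_e p = 1"
definition unit_m :: "unit \<times> (unit \<times> unit) \<Rightarrow> 'k::field" where "unit_m p = 1"
definition unit_u :: "unit \<times> unit \<Rightarrow> 'k::field" where "unit_u p = 1"

definition assoc_k :: "('x \<times> 'x \<Rightarrow> 'k::field) \<Rightarrow> ('x \<times> ('x \<times> 'x)) \<times> (('x \<times> 'x) \<times> 'x) \<Rightarrow> 'k" where
  "assoc_k e p = (case p of ((x1, (x2, x3)), ((y1, y2), y3)) \<Rightarrow> e (x1, y1) * e (x2, y2) * e (x3, y3))"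

definition swap_k :: "('x \<times> 'x \<Rightarrow> 'k::field) \<Rightarrow> ('x \<times> 'x) \<times> ('x \<times> 'x) \<Rightarrow> 'k" where
  "swap_k e p = (case p of ((x1, x2), (y1, y2)) \<Rightarrow> e (x1, y2) * e (x2, y1))"

definition lunit_inv_k :: "('x \<times> 'x \<Rightarrow> 'k::field) \<Rightarrow> (unit \<times> 'x) \<times> 'x \<Rightarrow> 'k" where
  "lunit_inv_k e p = (case p of ((_, x), y) \<Rightarrow> e (x, y))"

definition comm_alg :: "(real \<Rightarrow> real) set \<Rightarrow> 'x set \<Rightarrow> ((real \<Rightarrow> real) \<Rightarrow> 'x \<Rightarrow> 'x)
     \<Rightarrow> ('x \<times> 'x \<Rightarrow> 'k::field) \<Rightarrow> ('x \<times> ('x \<times> 'x) \<Rightarrow> 'k) \<Rightarrow> ('x \<times> unit \<Rightarrow> 'k) \<Rightarrow> bool" where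
  "comm_alg U X act e m u \<longleftrightarrow>
     kobj U X act e
   \<and> kmor U (X \<times> X) (pact act act) (ktensor e e) X act e m
   \<and> kmor U {()} triv unit_e X act e u
   \<and> comp U (X \<times> X) (pact act act) m (ktensor m e)
       = comp U (X \<times> X) (pact act act) m
           (comp U (X \<times> (X \<times> X)) (pact act (pact act act)) (ktensor e m) (assoc_k e))
   \<and> comp U (X \<times> X) (pact act act) m (swap_k e) = m
   \<and> comp U (X \<times> X) (pact act act) m
       (comp U ({()} \<times> X) (pact triv act) (ktensor u e) (lunit_inv_k e)) = e"

definition alg_hom :: "(real \<Rightarrow> real) set
     \<Rightarrow> 'x set \<Rightarrow> ((real \<Rightarrow> real) \<Rightarrow> 'x \<Rightarrow> 'x) \<Rightarrow> ('x \<times> 'x \<Rightarrow> 'k::field) \<Rightarrow> ('x \<times> ('x \<times> 'x) \<Rightarrow> 'k) \<Rightarrow> ('x \<times> unit \<Rightarrow> 'k)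
     \<Rightarrow> 'y set \<Rightarrow> ((real \<Rightarrow> real) \<Rightarrow> 'y \<Rightarrow> 'y) \<Rightarrow> ('y \<times> 'y \<Rightarrow> 'k) \<Rightarrow> ('y \<times> ('y \<times> 'y) \<Rightarrow> 'k) \<Rightarrow> ('y \<times> unit \<Rightarrow> 'k)
     \<Rightarrow> ('y \<times> 'x \<Rightarrow> 'k) \<Rightarrow> bool" where
  "alg_hom U X actX e m u Y actY e' m' u' h \<longleftrightarrow>
     kmor U X actX e Y actY e' h
   \<and> comp U X actX h m = comp U (Y \<times> Y) (pact actY actY) m' (ktensor h h)
   \<and> comp U X actX h u = u'"

definition cosets :: "(real \<Rightarrow> real) set \<Rightarrow> (real \<Rightarrow> real) set set" where
  "cosets U = {(\<lambda>\<tau>. \<sigma> \<circ> \<tau>) ` U | \<sigma>. \<sigma> \<in> Gaut}"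

definition coset_act :: "(real \<Rightarrow> real) \<Rightarrow> (real \<Rightarrow> real) set \<Rightarrow> (real \<Rightarrow> real) set" where
  "coset_act \<sigma> C = (\<lambda>\<tau>. \<sigma> \<circ> \<tau>) ` C"

definition CGU_e :: "(real \<Rightarrow> real) set \<Rightarrow> (real \<Rightarrow> real) set \<times> (real \<Rightarrow> real) set \<Rightarrow> 'k::field" where
  "CGU_e U p = (if fst p = snd p \<and> fst p \<in> cosets U then 1 else 0)"

definition CGU_m :: "(real \<Rightarrow> real) set
     \<Rightarrow> (real \<Rightarrow> real) set \<times> ((real \<Rightarrow> real) set \<times> (real \<Rightarrow> real) set) \<Rightarrow> 'k::field" where
  "CGU_m U p = (if fst p = fst (snd p) \<and> fst p = snd (snd p) \<and> fst p \<in> cosets U then 1 else 0)"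

definition CGU_u :: "(real \<Rightarrow> real) set \<Rightarrow> (real \<Rightarrow> real) set \<times> unit \<Rightarrow> 'k::field" where
  "CGU_u U p = (if fst p \<in> cosets U then 1 else 0)"

definition eps :: "(real \<Rightarrow> real) set \<Rightarrow> unit \<times> (real \<Rightarrow> real) set \<Rightarrow> 'k::field" where
  "eps U p = (if snd p = U then 1 else 0)"

end

(* The integral against mu of a smooth function is a finite sum over the orbits of an open
   subgroup V = pstab A, an orbit V/pstab B contributing (-1)^(|B| - |A|).  The heart of the
   matter is that this sum does not depend on V: refining pstab C to pstab (insert a C) splits an
   orbit with stabilizer pstab D into orbits indexed by the points and the gaps of D lying in the
   cut of a, with signs -1 and +1, and there is exactly one more gap than points.  Hence the
   integral over a G-set may be computed over any open subgroup, and it is invariant under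
   translations.

   Frobenius reciprocity then becomes explicit: the transpose of f is g (sigma U, x) = f (sigma^-1 x).
   Composing g with any G-equivariant kernel k gives the induction of the composite of f with k,
   so g inherits multiplicativity and unitality from f, and eps o g = f because eps evaluates at
   the coset U.  A G-invariant kernel on G/U x X is determined by its values at the coset U,
   which gives uniqueness. *)

theory Submission
  imports Defs "HOL-Library.FuncSet"
begin

section \<open>Order automorphisms of the real line\<close>

lemma Gaut_less: "\<sigma> \<in> Gaut \<Longrightarrow> \<sigma> x < \<sigma> y \<longleftrightarrow> x < y"
  by (simp add: Gaut_def strict_mono_less)

lemma Gaut_eq: "\<sigma> \<in> Gaut \<Longrightarrow> \<sigma> x = \<sigma> y \<longleftrightarrow> x = y"
  by (simp add: Gaut_def strict_mono_eq)

lemma Gaut_id[simp]: "id \<in> Gaut"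
  by (simp add: Gaut_def strict_mono_def)

lemma Gaut_comp[simp]: "\<sigma> \<in> Gaut \<Longrightarrow> \<tau> \<in> Gaut \<Longrightarrow> \<sigma> \<circ> \<tau> \<in> Gaut"
  by (auto simp: Gaut_def bij_comp strict_mono_def)

lemma Gaut_f_inv_f[simp]: "\<sigma> \<in> Gaut \<Longrightarrow> \<sigma> (inv \<sigma> x) = x"
  by (simp add: Gaut_def bij_def surj_f_inv_f)

lemma Gaut_inv_f_f[simp]: "\<sigma> \<in> Gaut \<Longrightarrow> inv \<sigma> (\<sigma> x) = x"
  by (simp add: Gaut_def bij_def inv_f_f)

lemma Gaut_inv[simp]: "\<sigma> \<in> Gaut \<Longrightarrow> inv \<sigma> \<in> Gaut"
proof -
  assume a: "\<sigma> \<in> Gaut"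
  have "bij (inv \<sigma>)" using a by (simp add: Gaut_def bij_imp_bij_inv)
  moreover have "strict_mono (inv \<sigma>)"
    unfolding strict_mono_def
  proof (intro allI impI)
    fix x y :: real assume "x < y"
    then have "\<sigma> (inv \<sigma> x) < \<sigma> (inv \<sigma> y)" using a by simp
    then show "inv \<sigma> x < inv \<sigma> y" using Gaut_less[OF a] by blast
  qed
  ultimately show ?thesis by (simp add: Gaut_def)
qed

lemma Gaut_comp_inv[simp]: "\<sigma> \<in> Gaut \<Longrightarrow> \<sigma> \<circ> inv \<sigma> = id"
  by (rule ext) simp

lemma Gaut_inv_comp[simp]: "\<sigma> \<in> Gaut \<Longrightarrow> inv \<sigma> \<circ> \<sigma> = id"
  by (rule ext) simp

lemma Gaut_inv_inv[simp]: "\<sigma> \<in> Gaut \<Longrightarrow> inv (inv \<sigma>) = \<sigma>"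
  by (simp add: Gaut_def inv_inv_eq)

lemma Gaut_inv_comp_distrib: "\<sigma> \<in> Gaut \<Longrightarrow> \<tau> \<in> Gaut \<Longrightarrow> inv (\<sigma> \<circ> \<tau>) = inv \<tau> \<circ> inv \<sigma>"
  by (simp add: Gaut_def o_inv_distrib)

lemma card_image_Gaut: "\<rho> \<in> Gaut \<Longrightarrow> card (\<rho> ` D) = card D"
  by (rule card_image) (metis Gaut_eq inj_onI)

lemma sgn_diff_Gaut: "\<sigma> \<in> Gaut \<Longrightarrow> sgn (\<sigma> x - \<sigma> x') = sgn (x - x')"
  using Gaut_less[of \<sigma> x x'] Gaut_less[of \<sigma> x' x] Gaut_eq[of \<sigma> x x']
  by (auto simp: sgn_real_def)

lemma sgn_diff_Gaut_inv: "\<sigma> \<in> Gaut \<Longrightarrow> sgn (\<sigma> d - a) = sgn (d - inv \<sigma> a)"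
  using sgn_diff_Gaut[of \<sigma> d "inv \<sigma> a"] by simp

text \<open>The piecewise linear automorphism fixing everything outside \<open>[l, r]\<close> and moving \<open>s\<close> to \<open>c\<close>.\<close>

definition bump :: "real \<Rightarrow> real \<Rightarrow> real \<Rightarrow> real \<Rightarrow> real \<Rightarrow> real" where
  "bump l r s c x = (if x \<le> l then x else if x \<le> s then l + (x - l) * ((c - l) / (s - l))
     else if x \<le> r then c + (x - s) * ((r - c) / (r - s)) else x)"

lemma bump_below: "x \<le> l \<Longrightarrow> bump l r s c x = x" by (simp add: bump_def)
lemma bump_left: "l < x \<Longrightarrow> x \<le> s \<Longrightarrow> bump l r s c x = l + (x - l) * ((c - l) / (s - l))"
  by (simp add: bump_def)
lemma bump_right: "l < s \<Longrightarrow> s < x \<Longrightarrow> x \<le> r \<Longrightarrow> bump l r s c x = c + (x - s) * ((r - c) / (r - s))"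
  by (simp add: bump_def)
lemma bump_above: "l < s \<Longrightarrow> s < r \<Longrightarrow> r < x \<Longrightarrow> bump l r s c x = x"
  by (simp add: bump_def)

lemma bump_strict_mono:
  assumes "l < s" "s < r" "l < c" "c < r"
  shows "strict_mono (bump l r s c)"
  unfolding strict_mono_def
proof (intro allI impI)
  fix x y :: real assume xy: "x < y"
  have p1: "(c - l) / (s - l) > 0" using assms by simp
  have p2: "(r - c) / (r - s) > 0" using assms by simp
  have A: "l + (x - l) * ((c - l) / (s - l)) \<le> c" if "x \<le> s" for x
  proof -
    have "(x - l) * ((c - l) / (s - l)) \<le> (s - l) * ((c - l) / (s - l))"
      using that p1 by (intro mult_right_mono) auto
    also have "\<dots> = c - l" using assms by simp
    finally show ?thesis by simp
  qed
  have A2: "l < l + (x - l) * ((c - l) / (s - l))" if "l < x" for x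
    using that p1 mult_pos_pos[of "x - l" "(c - l) / (s - l)"] by linarith
  have B: "c < c + (x - s) * ((r - c) / (r - s))" if "s < x" for x
    using that p2 mult_pos_pos[of "x - s" "(r - c) / (r - s)"] by linarith
  have B2: "c + (x - s) * ((r - c) / (r - s)) \<le> r" if "x \<le> r" for x
  proof -
    have "(x - s) * ((r - c) / (r - s)) \<le> (r - s) * ((r - c) / (r - s))"
      using that p2 by (intro mult_right_mono) auto
    also have "\<dots> = r - c" using assms by simp
    finally show ?thesis by simp
  qed
  have m1: "(x - l) * ((c - l) / (s - l)) < (y - l) * ((c - l) / (s - l))"
    using xy p1 by (intro mult_strict_right_mono) auto
  have m2: "(x - s) * ((r - c) / (r - s)) < (y - s) * ((r - c) / (r - s))"
    using xy p2 by (intro mult_strict_right_mono) auto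
  have vx: "(x \<le> l \<and> bump l r s c x = x) \<or> (l < x \<and> x \<le> s \<and> bump l r s c x = l + (x - l) * ((c - l) / (s - l)))
     \<or> (s < x \<and> x \<le> r \<and> bump l r s c x = c + (x - s) * ((r - c) / (r - s))) \<or> (r < x \<and> bump l r s c x = x)"
    using bump_below[of x l r s c] bump_left[of l x s r c] bump_right[of l s x r c] bump_above[of l s r x c] assms by linarith
  have vy: "(y \<le> l \<and> bump l r s c y = y) \<or> (l < y \<and> y \<le> s \<and> bump l r s c y = l + (y - l) * ((c - l) / (s - l)))
     \<or> (s < y \<and> y \<le> r \<and> bump l r s c y = c + (y - s) * ((r - c) / (r - s))) \<or> (r < y \<and> bump l r s c y = y)"
    using bump_below[of y l r s c] bump_left[of l y s r c] bump_right[of l s y r c] bump_above[of l s r y c] assms by linarith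
  show "bump l r s c x < bump l r s c y"
    using vx vy A[of x] A2[of x] A2[of y] B[of x] B[of y] B2[of x] B2[of y] m1 m2 xy assms by linarith
qed

lemma bump_inverse:
  assumes "l < s" "s < r" "l < c" "c < r"
  shows "bump l r c s (bump l r s c x) = x"
proof -
  have p1: "(c - l) / (s - l) > 0" using assms by simp
  have p2: "(r - c) / (r - s) > 0" using assms by simp
  consider "x \<le> l" | "l < x" "x \<le> s" | "s < x" "x \<le> r" | "r < x" by linarith
  then show ?thesis
  proof cases
    case 1 then show ?thesis by (simp add: bump_below)
  next
    case 2
    define y where "y = l + (x - l) * ((c - l) / (s - l))"
    have "(x - l) * ((c - l) / (s - l)) \<le> (s - l) * ((c - l) / (s - l))"
      using 2 p1 by (intro mult_right_mono) auto
    also have "\<dots> = c - l" using assms by simp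
    finally have yc: "y \<le> c" by (simp add: y_def)
    have yl: "l < y" using 2 p1 mult_pos_pos[of "x - l" "(c - l) / (s - l)"] unfolding y_def by linarith
    have "bump l r s c x = y" using 2 by (simp add: bump_left y_def)
    moreover have "bump l r c s y = l + (y - l) * ((s - l) / (c - l))"
      using yc yl by (simp add: bump_left)
    moreover have "(y - l) * ((s - l) / (c - l)) = x - l"
    proof -
      have k: "((c - l) / (s - l)) * ((s - l) / (c - l)) = 1" using assms by simp
      have "(y - l) * ((s - l) / (c - l)) = (x - l) * (((c - l) / (s - l)) * ((s - l) / (c - l)))"
        unfolding y_def by (simp only: mult.assoc add_diff_cancel_left')
      then show ?thesis using k by simp
    qed
    ultimately show ?thesis by simp
  next
    case 3
    define y where "y = c + (x - s) * ((r - c) / (r - s))"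
    have "(x - s) * ((r - c) / (r - s)) \<le> (r - s) * ((r - c) / (r - s))"
      using 3 p2 by (intro mult_right_mono) auto
    also have "\<dots> = r - c" using assms by simp
    finally have yr: "y \<le> r" by (simp add: y_def)
    have yc: "c < y" using 3 p2 mult_pos_pos[of "x - s" "(r - c) / (r - s)"] unfolding y_def by linarith
    have "bump l r s c x = y" using 3 assms by (simp add: bump_right y_def)
    moreover have "bump l r c s y = s + (y - c) * ((r - s) / (r - c))"
      using yc yr assms by (simp add: bump_right)
    moreover have "(y - c) * ((r - s) / (r - c)) = x - s"
    proof -
      have k: "((r - c) / (r - s)) * ((r - s) / (r - c)) = 1" using assms by simp
      have "(y - c) * ((r - s) / (r - c)) = (x - s) * (((r - c) / (r - s)) * ((r - s) / (r - c)))"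
        unfolding y_def by (simp only: mult.assoc add_diff_cancel_left')
      then show ?thesis using k by simp
    qed
    ultimately show ?thesis by simp
  next
    case 4 then show ?thesis using assms by (simp add: bump_above)
  qed
qed

lemma bump_Gaut:
  assumes "l < s" "s < r" "l < c" "c < r"
  shows "bump l r s c \<in> Gaut"
proof -
  have i1: "bump l r c s \<circ> bump l r s c = id"
    by (rule ext) (simp add: bump_inverse assms)
  have i2: "bump l r s c \<circ> bump l r c s = id"
    by (rule ext) (simp add: bump_inverse assms)
  have "bij (bump l r s c)"
    using i1 i2 by (rule o_bij)
  then show ?thesis using bump_strict_mono[OF assms] by (simp add: Gaut_def)
qed

lemma bump_moves_s: "l < s \<Longrightarrow> s < r \<Longrightarrow> bump l r s c s = c"
  by (simp add: bump_left)

lemma bump_outside: "x \<le> l \<or> r \<le> x \<Longrightarrow> l < s \<Longrightarrow> s < r \<Longrightarrow> l < c \<Longrightarrow> c < r \<Longrightarrow> bump l r s c x = x"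
proof -
  assume a: "x \<le> l \<or> r \<le> x" "l < s" "s < r" "l < c" "c < r"
  show ?thesis
  proof (cases "x = r")
    case True
    have "(r - s) * ((r - c) / (r - s)) = r - c" using a by simp
    then show ?thesis using True a by (simp add: bump_right)
  next
    case False then show ?thesis using a by (auto simp: bump_below bump_above)
  qed
qed

lemma exists_other_point_same_cut:
  fixes t :: real
  assumes "finite S" "t \<notin> S"
  shows "\<exists>c. c \<noteq> t \<and> (\<forall>u\<in>S. (u < t \<longleftrightarrow> u < c) \<and> (t < u \<longleftrightarrow> c < u))"
proof (cases "{u\<in>S. t < u} = {}")
  case True
  show ?thesis
  proof (rule exI[of _ "t + 1"], rule conjI)
    show "t + 1 \<noteq> t" by simp
    show "\<forall>u\<in>S. (u < t \<longleftrightarrow> u < t + 1) \<and> (t < u \<longleftrightarrow> t + 1 < u)"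
    proof
      fix u assume u: "u \<in> S"
      then have "\<not> t < u" "u \<noteq> t" using True assms by auto
      then show "(u < t \<longleftrightarrow> u < t + 1) \<and> (t < u \<longleftrightarrow> t + 1 < u)" by auto
    qed
  qed
next
  case False
  define m where "m = Min {u\<in>S. t < u}"
  have fin: "finite {u\<in>S. t < u}" using assms by simp
  have mt: "t < m" using Min_in[OF fin False] m_def by auto
  have mle: "m \<le> u" if "u \<in> S" "t < u" for u using Min_le[OF fin] that m_def by auto
  show ?thesis
  proof (rule exI[of _ "(t + m) / 2"], rule conjI)
    show "(t + m) / 2 \<noteq> t" using mt by simp
    show "\<forall>u\<in>S. (u < t \<longleftrightarrow> u < (t + m) / 2) \<and> (t < u \<longleftrightarrow> (t + m) / 2 < u)"
    proof
      fix u assume u: "u \<in> S"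
      have "u \<noteq> t" using u assms by auto
      then show "(u < t \<longleftrightarrow> u < (t + m) / 2) \<and> (t < u \<longleftrightarrow> (t + m) / 2 < u)"
        using mle[OF u] mt by (cases "t < u") auto
    qed
  qed
qed

lemma Gaut_move_point:
  assumes "finite S" "s \<notin> S" "\<forall>t\<in>S. (t < s \<longleftrightarrow> t < c) \<and> (s < t \<longleftrightarrow> c < t)"
  shows "\<exists>\<tau>\<in>Gaut. (\<forall>t\<in>S. \<tau> t = t) \<and> \<tau> s = c"
proof (cases "s = c")
  case True then show ?thesis by (intro bexI[of _ id]) auto
next
  case False
  define lo where "lo = min s c"
  define hi where "hi = max s c"
  define L where "L = {t\<in>S. t < lo}"
  define R where "R = {t\<in>S. hi < t}"
  define l where "l = (if L = {} then lo - 1 else Max L)"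
  define r where "r = (if R = {} then hi + 1 else Min R)"
  have finL: "finite L" "finite R" using assms(1) by (auto simp: L_def R_def)
  have l_lt: "l < lo"
    using Max_in[OF finL(1)] by (auto simp: l_def L_def)
  have r_gt: "hi < r"
    using Min_in[OF finL(2)] by (auto simp: r_def R_def)
  have S_out: "t \<le> l \<or> r \<le> t" if t: "t \<in> S" for t
  proof -
    have ts: "t \<noteq> s" using t assms(2) by auto
    have c1: "t < s \<longleftrightarrow> t < c" and c2: "s < t \<longleftrightarrow> c < t" using assms(3) t by auto
    have "t < lo \<or> hi < t"
      using ts c1 c2 False unfolding lo_def hi_def by (auto simp: min_def max_def split: if_splits)
    then show ?thesis
    proof
      assume "t < lo"
      then have "t \<in> L" using t by (simp add: L_def)
      then show ?thesis using Max_ge[OF finL(1)] by (auto simp: l_def)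
    next
      assume "hi < t"
      then have "t \<in> R" using t by (simp add: R_def)
      then show ?thesis using Min_le[OF finL(2)] by (auto simp: r_def)
    qed
  qed
  have b: "l < s" "s < r" "l < c" "c < r"
    using l_lt r_gt unfolding lo_def hi_def by auto
  show ?thesis
  proof (intro bexI[of _ "bump l r s c"] conjI ballI)
    show "bump l r s c \<in> Gaut" using bump_Gaut[OF b] .
    show "bump l r s c s = c" using bump_moves_s b by simp
    fix t assume "t \<in> S"
    then show "bump l r s c t = t" using bump_outside[OF _ b] S_out by blast
  qed
qed

lemma Gaut_extend_strict_mono_on:
  assumes "finite S" "\<forall>x\<in>S. \<forall>y\<in>S. x < y \<longrightarrow> p x < p y"
  shows "\<exists>\<sigma>\<in>Gaut. \<forall>x\<in>S. \<sigma> x = p x"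
  using assms
proof (induction S rule: finite_induct)
  case empty
  then show ?case by (intro bexI[of _ id]) auto
next
  case (insert s S)
  from insert obtain \<rho> where \<rho>: "\<rho> \<in> Gaut" "\<forall>x\<in>S. \<rho> x = p x" by auto
  define c where "c = inv \<rho> (p s)"
  have "\<forall>t\<in>S. (t < s \<longleftrightarrow> t < c) \<and> (s < t \<longleftrightarrow> c < t)"
  proof
    fix t assume t: "t \<in> S"
    have ts: "t \<noteq> s" using t insert by auto
    have e1: "t < c \<longleftrightarrow> \<rho> t < \<rho> c" using Gaut_less[OF \<rho>(1)] by simp
    have e2: "c < t \<longleftrightarrow> \<rho> c < \<rho> t" using Gaut_less[OF \<rho>(1)] by simp
    have rc: "\<rho> c = p s" using \<rho>(1) by (simp add: c_def)
    have rt: "\<rho> t = p t" using \<rho>(2) t by simp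
    have m1: "t < s \<Longrightarrow> p t < p s" and m2: "s < t \<Longrightarrow> p s < p t"
      using insert.prems t by auto
    show "(t < s \<longleftrightarrow> t < c) \<and> (s < t \<longleftrightarrow> c < t)"
      using e1 e2 rc rt m1 m2 ts by (metis less_asym linorder_neqE)
  qed
  then obtain \<tau> where \<tau>: "\<tau> \<in> Gaut" "\<forall>t\<in>S. \<tau> t = t" "\<tau> s = c"
    using Gaut_move_point[OF insert.hyps(1,2)] by blast
  show ?case
  proof (intro bexI[of _ "\<rho> \<circ> \<tau>"] ballI)
    show "\<rho> \<circ> \<tau> \<in> Gaut" using \<rho>(1) \<tau>(1) by simp
    fix x assume "x \<in> insert s S"
    then show "(\<rho> \<circ> \<tau>) x = p x"
      using \<tau> \<rho> by (auto simp: c_def)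
  qed
qed

lemma pstab_antimono: "A \<subseteq> B \<Longrightarrow> pstab B \<subseteq> pstab A"
  by (auto simp: pstab_def)

lemma pstab_subset_Gaut: "pstab A \<subseteq> Gaut" by (auto simp: pstab_def)

lemma fixpts_pstab:
  assumes "finite S"
  shows "fixpts (pstab S) = S"
proof
  show "S \<subseteq> fixpts (pstab S)" by (auto simp: fixpts_def pstab_def)
  show "fixpts (pstab S) \<subseteq> S"
  proof
    fix t assume t: "t \<in> fixpts (pstab S)"
    show "t \<in> S"
    proof (rule ccontr)
      assume "t \<notin> S"
      then obtain c where c: "c \<noteq> t" "\<forall>u\<in>S. (u < t \<longleftrightarrow> u < c) \<and> (t < u \<longleftrightarrow> c < u)"
        using exists_other_point_same_cut[OF assms] by blast
      obtain \<tau> where "\<tau> \<in> Gaut" "\<forall>u\<in>S. \<tau> u = u" "\<tau> t = c"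
        using Gaut_move_point[OF assms \<open>t \<notin> S\<close> c(2)] by blast
      then have "\<tau> \<in> pstab S" by (simp add: pstab_def)
      then have "\<tau> t = t" using t by (simp add: fixpts_def)
      then show False using \<open>\<tau> t = c\<close> c(1) by simp
    qed
  qed
qed

lemma pstab_homogeneous:
  assumes "finite A" "finite I"
    and ta: "\<forall>i\<in>I. \<forall>a\<in>A. sgn (e i - a) = sgn (e' i - a)"
    and tb: "\<forall>i\<in>I. \<forall>j\<in>I. sgn (e i - e j) = sgn (e' i - e' j)"
  shows "\<exists>\<rho>\<in>pstab A. \<forall>i\<in>I. \<rho> (e i) = e' i"
proof -
  define S where "S = A \<union> e ` I"
  define p where "p s = (if s \<in> A then s else e' (SOME i. i \<in> I \<and> e i = s))" for s
  have eq_iff_sgn: "x = y \<longleftrightarrow> sgn (x - y) = 0" for x y :: real by (simp add: sgn_real_def)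
  have less_iff_sgn: "x < y \<longleftrightarrow> sgn (x - y) = -1" for x y :: real by (simp add: sgn_real_def)
  have pa: "p a = a" if "a \<in> A" for a using that by (simp add: p_def)
  have pe: "p (e i) = e' i" if i: "i \<in> I" for i
  proof (cases "e i \<in> A")
    case True
    then have "sgn (e' i - e i) = 0" using ta i by (metis eq_iff_sgn)
    then have "e' i = e i" using eq_iff_sgn by blast
    then show ?thesis using True by (simp add: p_def)
  next
    case False
    define j where "j = (SOME j. j \<in> I \<and> e j = e i)"
    have j: "j \<in> I \<and> e j = e i" unfolding j_def by (rule someI_ex) (use i in auto)
    then have "sgn (e' j - e' i) = 0" using tb i by (metis eq_iff_sgn)
    then have "e' j = e' i" using eq_iff_sgn by blast
    then show ?thesis using False j by (simp add: p_def j_def[symmetric])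
  qed
  have swap: "sgn (u - v) = - sgn (v - u)" for u v :: real by (simp add: sgn_real_def)
  have sgn_p: "sgn (p x - p y) = sgn (x - y)" if x: "x \<in> S" and y: "y \<in> S" for x y
  proof -
    consider "x \<in> A" "y \<in> A" | j where "x \<in> A" "j \<in> I" "y = e j"
      | i where "i \<in> I" "x = e i" "y \<in> A" | i j where "i \<in> I" "j \<in> I" "x = e i" "y = e j"
      using x y unfolding S_def by blast
    then show ?thesis
    proof cases
      case 1
      then show ?thesis by (simp add: pa)
    next
      case (2 j)
      then show ?thesis using ta swap[of x "e' j"] swap[of x "e j"] by (simp add: pa pe)
    next
      case (3 i)
      then show ?thesis using ta by (simp add: pa pe)
    next
      case (4 i j)
      then show ?thesis using tb by (simp add: pe)
    qed
  qed
  have "\<forall>x\<in>S. \<forall>y\<in>S. x < y \<longrightarrow> p x < p y"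
    using sgn_p less_iff_sgn by metis
  moreover have "finite S" using assms by (simp add: S_def)
  ultimately obtain \<rho> where \<rho>: "\<rho> \<in> Gaut" "\<forall>x\<in>S. \<rho> x = p x"
    using Gaut_extend_strict_mono_on by blast
  show ?thesis
  proof (intro bexI[of _ \<rho>] ballI)
    show "\<rho> \<in> pstab A" using \<rho> pa by (simp add: pstab_def S_def)
    fix i assume "i \<in> I" then show "\<rho> (e i) = e' i" using \<rho> pe by (simp add: S_def)
  qed
qed

definition subgrp :: "(real \<Rightarrow> real) set \<Rightarrow> bool" where
  "subgrp H \<longleftrightarrow> H \<subseteq> Gaut \<and> id \<in> H \<and> (\<forall>\<sigma>\<in>H. \<forall>\<tau>\<in>H. \<sigma> \<circ> \<tau> \<in> H) \<and> (\<forall>\<sigma>\<in>H. inv \<sigma> \<in> H)"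

lemma subgrp_imp_Gaut: "subgrp P \<Longrightarrow> \<rho> \<in> P \<Longrightarrow> \<rho> \<in> Gaut" by (auto simp: subgrp_def)
lemma subgrp_comp: "subgrp P \<Longrightarrow> \<rho> \<in> P \<Longrightarrow> \<pi> \<in> P \<Longrightarrow> \<rho> \<circ> \<pi> \<in> P" by (auto simp: subgrp_def)
lemma subgrp_inv: "subgrp P \<Longrightarrow> \<rho> \<in> P \<Longrightarrow> inv \<rho> \<in> P" by (auto simp: subgrp_def)
lemma subgrp_id: "subgrp P \<Longrightarrow> id \<in> P" by (auto simp: subgrp_def)

lemma subgrp_pstab: "subgrp (pstab A)"
  unfolding subgrp_def pstab_def by (auto, metis Gaut_inv_f_f)

lemma subgrp_Gaut: "subgrp Gaut"
  by (auto simp: subgrp_def)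

lemma fixpts_antimono: "H \<subseteq> K \<Longrightarrow> fixpts K \<subseteq> fixpts H"
  by (auto simp: fixpts_def)

lemma subgrp_move_point_side:
  assumes H: "subgrp H" and fin: "finite S" "finite T" and PT: "pstab T \<subseteq> H" and s: "s \<notin> T"
    and c: "c \<noteq> s"
  shows "\<exists>\<nu>\<in>H. (\<forall>t\<in>S - {s}. \<nu> t = t) \<and> \<nu> s \<noteq> s \<and> (\<nu> s < s \<longleftrightarrow> c < s)"
proof -
  have "finite (S - {s} \<union> T)" "s \<notin> S - {s} \<union> T" using fin s by auto
  then have "s \<notin> fixpts (pstab (S - {s} \<union> T))" using fixpts_pstab by metis
  then obtain \<mu> where \<mu>: "\<mu> \<in> pstab (S - {s} \<union> T)" "\<mu> s \<noteq> s" by (auto simp: fixpts_def)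
  have \<mu>H: "\<mu> \<in> H" using \<mu>(1) PT pstab_antimono[of T "S - {s} \<union> T"] by auto
  have \<mu>G: "\<mu> \<in> Gaut" and \<mu>S: "\<forall>t\<in>S - {s}. \<mu> t = t" using \<mu>(1) by (auto simp: pstab_def)
  show ?thesis
  proof (cases "\<mu> s < s \<longleftrightarrow> c < s")
    case True
    then show ?thesis using \<mu>H \<mu>S \<mu>(2) by blast
  next
    case False
    have "inv \<mu> s < s \<longleftrightarrow> s < \<mu> s" using Gaut_less[OF \<mu>G, of "inv \<mu> s" s] \<mu>G by simp
    moreover have "\<forall>t\<in>S - {s}. inv \<mu> t = t" using \<mu>S \<mu>G by (metis Gaut_inv_f_f)
    moreover have "inv \<mu> s \<noteq> s" using \<mu>(2) \<mu>G by (metis Gaut_f_inv_f)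
    ultimately show ?thesis using subgrp_inv[OF H \<mu>H] False \<mu>(2) c by (intro bexI[of _ "inv \<mu>"]) auto
  qed
qed

lemma pstab_remove_point:
  assumes H: "subgrp H" and fin: "finite S" "finite T"
    and PS: "pstab S \<subseteq> H" and PT: "pstab T \<subseteq> H" and s: "s \<in> S" "s \<notin> T"
  shows "pstab (S - {s}) \<subseteq> H"
proof
  fix \<tau> assume "\<tau> \<in> pstab (S - {s})"
  then have \<tau>G: "\<tau> \<in> Gaut" and \<tau>S: "\<forall>t\<in>S - {s}. \<tau> t = t" by (auto simp: pstab_def)
  show "\<tau> \<in> H"
  proof (cases "\<tau> s = s")
    case True
    then have "\<tau> \<in> pstab S" using \<tau>G \<tau>S by (auto simp: pstab_def)
    then show ?thesis using PS by auto
  next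
    case False
    obtain \<nu> where \<nu>: "\<nu> \<in> H" "\<forall>t\<in>S - {s}. \<nu> t = t" "\<nu> s \<noteq> s" "\<nu> s < s \<longleftrightarrow> \<tau> s < s"
      using subgrp_move_point_side[OF H fin PT s(2) False] by blast
    have \<nu>G: "\<nu> \<in> Gaut" using subgrp_imp_Gaut[OF H \<nu>(1)] .
    have \<nu>s: "\<nu> s \<notin> S"
    proof
      assume "\<nu> s \<in> S"
      then have "\<nu> (\<nu> s) = \<nu> s" using \<nu>(2,3) by auto
      then show False using \<nu>(3) Gaut_eq[OF \<nu>G] by blast
    qed
    have cut: "\<forall>t\<in>S. (t < \<nu> s \<longleftrightarrow> t < \<tau> s) \<and> (\<nu> s < t \<longleftrightarrow> \<tau> s < t)"
    proof
      fix t assume t: "t \<in> S"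
      show "(t < \<nu> s \<longleftrightarrow> t < \<tau> s) \<and> (\<nu> s < t \<longleftrightarrow> \<tau> s < t)"
      proof (cases "t = s")
        case True
        then show ?thesis using \<nu>(3,4) False by auto
      next
        case False
        then have \<nu>t: "\<nu> t = t" and \<tau>t: "\<tau> t = t" using t \<nu>(2) \<tau>S by auto
        have "t < \<nu> s \<longleftrightarrow> t < s" "\<nu> s < t \<longleftrightarrow> s < t"
          using Gaut_less[OF \<nu>G, of t s] Gaut_less[OF \<nu>G, of s t] by (simp_all only: \<nu>t)
        moreover have "t < \<tau> s \<longleftrightarrow> t < s" "\<tau> s < t \<longleftrightarrow> s < t"
          using Gaut_less[OF \<tau>G, of t s] Gaut_less[OF \<tau>G, of s t] by (simp_all only: \<tau>t)
        ultimately show ?thesis by blast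
      qed
    qed
    obtain \<pi> where \<pi>: "\<pi> \<in> Gaut" "\<forall>t\<in>S. \<pi> t = t" "\<pi> (\<nu> s) = \<tau> s"
      using Gaut_move_point[OF fin(1) \<nu>s cut] by blast
    define h where "h = \<pi> \<circ> \<nu>"
    have "\<pi> \<in> H" using \<pi>(1,2) PS by (auto simp: pstab_def)
    then have hH: "h \<in> H" using subgrp_comp[OF H _ \<nu>(1)] by (simp add: h_def)
    have hG: "h \<in> Gaut" using subgrp_imp_Gaut[OF H hH] .
    have h\<tau>: "h t = \<tau> t" if t: "t \<in> S" for t
    proof (cases "t = s")
      case True
      then show ?thesis using \<pi>(3) by (simp add: h_def)
    next
      case False
      then show ?thesis using \<pi>(2) \<nu>(2) \<tau>S t by (simp add: h_def)
    qed
    have "\<forall>t\<in>S. (inv h \<circ> \<tau>) t = t" using h\<tau> Gaut_inv_f_f[OF hG] by (metis comp_apply)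
    then have "inv h \<circ> \<tau> \<in> pstab S" using hG \<tau>G by (simp add: pstab_def)
    then have "inv h \<circ> \<tau> \<in> H" using PS by blast
    then have "h \<circ> (inv h \<circ> \<tau>) \<in> H" using subgrp_comp[OF H hH] by simp
    moreover have "h \<circ> (inv h \<circ> \<tau>) = \<tau>" using hG by (simp add: fun_eq_iff)
    ultimately show ?thesis by simp
  qed
qed

lemma Gaut_fixes_invariant_finite:
  assumes "finite F" "h \<in> Gaut" "h ` F = F"
  shows "\<forall>x\<in>F. h x = x"
proof (rule ccontr)
  assume "\<not> (\<forall>x\<in>F. h x = x)"
  then have D: "{x\<in>F. h x \<noteq> x} \<noteq> {}" by auto
  have finD: "finite {x\<in>F. h x \<noteq> x}" using assms(1) by simp
  define m where "m = Min {x\<in>F. h x \<noteq> x}"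
  have m: "m \<in> F" "h m \<noteq> m" using Min_in[OF finD D] m_def by auto
  have mmin: "\<And>x. x \<in> F \<Longrightarrow> h x \<noteq> x \<Longrightarrow> m \<le> x" using Min_le[OF finD] m_def by auto
  have hmF: "h m \<in> F" using assms(3) m(1) by auto
  have gt: "m < h m"
  proof (rule ccontr)
    assume "\<not> m < h m"
    then have lt: "h m < m" using m(2) by simp
    have "h (h m) = h m" using mmin[OF hmF] lt by force
    then have "h m = m" using Gaut_eq[OF assms(2)] by blast
    then show False using m(2) by simp
  qed
  obtain y where y: "y \<in> F" "h y = m" using assms(3) m(1) by (metis imageE)
  have "y \<noteq> m" using y m(2) by auto
  show False
  proof (cases "y < m")
    case True
    then have "h y = y" using mmin[OF y(1)] by force
    then show False using y \<open>y \<noteq> m\<close> by simp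
  next
    case False
    then have "m < y" using \<open>y \<noteq> m\<close> by simp
    then have "h m < h y" using Gaut_less[OF assms(2)] by simp
    then show False using gt y by simp
  qed
qed

lemma pstab_inv_image_subset:
  assumes H: "subgrp H" and h: "h \<in> H" and PF: "pstab F \<subseteq> H"
  shows "pstab (inv h ` F) \<subseteq> H"
proof
  fix \<rho> assume \<rho>: "\<rho> \<in> pstab (inv h ` F)"
  have hG: "h \<in> Gaut" using subgrp_imp_Gaut[OF H h] .
  have "h \<circ> \<rho> \<circ> inv h \<in> pstab F" using \<rho> hG by (auto simp: pstab_def)
  then have "inv h \<circ> (h \<circ> \<rho> \<circ> inv h) \<circ> h \<in> H"
    using PF subgrp_comp[OF H] subgrp_inv[OF H h] h by blast
  moreover have "inv h \<circ> (h \<circ> \<rho> \<circ> inv h) \<circ> h = \<rho>" using hG by (simp add: fun_eq_iff)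
  ultimately show "\<rho> \<in> H" by simp
qed

text \<open>Induction on \<open>card F\<close>: if some \<open>h \<in> H\<close> moves a point of \<open>F\<close>, then \<open>F \<noteq> h\<^sup>-\<^sup>1 F\<close>,
  and a point of \<open>F - h\<^sup>-\<^sup>1 F\<close> can be dropped from \<open>F\<close>.\<close>

lemma pstab_fixpts_subset:
  assumes H: "subgrp H"
  shows "finite F \<Longrightarrow> pstab F \<subseteq> H \<Longrightarrow> pstab (fixpts H) \<subseteq> H"
proof (induction "card F" arbitrary: F rule: less_induct)
  case less
  have fixF: "fixpts H \<subseteq> F" using fixpts_antimono[OF less.prems(2)] fixpts_pstab[OF less.prems(1)] by simp
  show ?case
  proof (cases "F \<subseteq> fixpts H")
    case True
    then have "fixpts H = F" using fixF by auto
    then show ?thesis using less.prems by simp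
  next
    case False
    then obtain f h where fh: "f \<in> F" "h \<in> H" "h f \<noteq> f" by (auto simp: fixpts_def)
    have hG: "h \<in> Gaut" using subgrp_imp_Gaut[OF H fh(2)] .
    define T where "T = inv h ` F"
    have finT: "finite T" using less.prems(1) by (simp add: T_def)
    have "F \<noteq> T"
    proof
      assume FT: "F = T"
      have "h ` T = F" using hG by (force simp: T_def image_comp)
      then have "h ` F = F" using FT by simp
      then show False using Gaut_fixes_invariant_finite[OF less.prems(1) hG] fh by auto
    qed
    moreover have "card T = card F" using card_image_Gaut[of "inv h" F] hG by (simp add: T_def)
    ultimately obtain s where s: "s \<in> F" "s \<notin> T" using card_subset_eq[OF finT, of F] by auto
    have "pstab (F - {s}) \<subseteq> H"
      using pstab_remove_point[OF H less.prems(1) finT less.prems(2) _ s]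
        pstab_inv_image_subset[OF H fh(2) less.prems(2)] by (simp add: T_def)
    moreover have "card (F - {s}) < card F" using s(1) less.prems(1) by (meson card_Diff1_less)
    ultimately show ?thesis using less.hyps[of "F - {s}"] less.prems(1) by blast
  qed
qed

lemma subgrp_eq_pstab_fixpts:
  assumes "subgrp H" "finite F" "pstab F \<subseteq> H"
  shows "H = pstab (fixpts H)" "fixpts H \<subseteq> F" "finite (fixpts H)"
proof -
  show "fixpts H \<subseteq> F" using fixpts_antimono[OF assms(3)] fixpts_pstab[OF assms(2)] by simp
  then show "finite (fixpts H)" using assms(2) finite_subset by blast
  have "H \<subseteq> pstab (fixpts H)" using assms(1) by (auto simp: subgrp_def pstab_def fixpts_def)
  then show "H = pstab (fixpts H)" using pstab_fixpts_subset[OF assms] by auto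
qed

definition gact :: "'y set \<Rightarrow> ((real \<Rightarrow> real) \<Rightarrow> 'y \<Rightarrow> 'y) \<Rightarrow> bool" where
  "gact Y act \<longleftrightarrow> (\<forall>y\<in>Y. act id y = y) \<and> (\<forall>\<sigma>\<in>Gaut. \<forall>y\<in>Y. act \<sigma> y \<in> Y)
     \<and> (\<forall>\<sigma>\<in>Gaut. \<forall>\<tau>\<in>Gaut. \<forall>y\<in>Y. act (\<sigma> \<circ> \<tau>) y = act \<sigma> (act \<tau> y))"

lemma uset_gact: "uset Gaut Y act \<Longrightarrow> gact Y act"
  by (simp add: uset_def gact_def)

lemma gact_id: "gact Y act \<Longrightarrow> y \<in> Y \<Longrightarrow> act id y = y" by (simp add: gact_def)
lemma gact_closed: "gact Y act \<Longrightarrow> \<sigma> \<in> Gaut \<Longrightarrow> y \<in> Y \<Longrightarrow> act \<sigma> y \<in> Y" by (simp add: gact_def)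
lemma gact_comp: "gact Y act \<Longrightarrow> \<sigma> \<in> Gaut \<Longrightarrow> \<tau> \<in> Gaut \<Longrightarrow> y \<in> Y \<Longrightarrow> act (\<sigma> \<circ> \<tau>) y = act \<sigma> (act \<tau> y)"
  by (simp add: gact_def)

lemma gact_inv_act: "gact Y act \<Longrightarrow> \<sigma> \<in> Gaut \<Longrightarrow> y \<in> Y \<Longrightarrow> act (inv \<sigma>) (act \<sigma> y) = y"
  by (metis Gaut_inv Gaut_inv_comp gact_comp gact_id)

lemma gact_act_inv: "gact Y act \<Longrightarrow> \<sigma> \<in> Gaut \<Longrightarrow> y \<in> Y \<Longrightarrow> act \<sigma> (act (inv \<sigma>) y) = y"
  by (metis Gaut_inv Gaut_comp_inv gact_comp gact_id)

lemma orbit_self: "subgrp P \<Longrightarrow> gact Y act \<Longrightarrow> y \<in> Y \<Longrightarrow> y \<in> orbit P act y"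
  unfolding orbit_def by (rule image_eqI[of _ _ id]) (simp_all add: gact_id subgrp_id)

lemma orbit_sub: "subgrp P \<Longrightarrow> gact Y act \<Longrightarrow> y \<in> Y \<Longrightarrow> orbit P act y \<subseteq> Y"
proof
  fix z assume P: "subgrp P" and g: "gact Y act" and y: "y \<in> Y" and z: "z \<in> orbit P act y"
  then obtain \<sigma> where "\<sigma> \<in> P" "z = act \<sigma> y" by (auto simp: orbit_def)
  then show "z \<in> Y" using gact_closed[OF g subgrp_imp_Gaut[OF P] y] by simp
qed

lemma orbit_move:
  assumes P: "subgrp P" and g: "gact Y act" and y: "y \<in> Y" and \<rho>: "\<rho> \<in> P"
  shows "orbit P act (act \<rho> y) = orbit P act y"
proof
  show "orbit P act (act \<rho> y) \<subseteq> orbit P act y"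
  proof
    fix z assume "z \<in> orbit P act (act \<rho> y)"
    then obtain \<pi> where \<pi>: "\<pi> \<in> P" "z = act \<pi> (act \<rho> y)" by (auto simp: orbit_def)
    then have "z = act (\<pi> \<circ> \<rho>) y" using gact_comp[OF g subgrp_imp_Gaut[OF P \<pi>(1)] subgrp_imp_Gaut[OF P \<rho>] y] by simp
    then show "z \<in> orbit P act y" using subgrp_comp[OF P \<pi>(1) \<rho>] by (auto simp: orbit_def)
  qed
  show "orbit P act y \<subseteq> orbit P act (act \<rho> y)"
  proof
    fix z assume "z \<in> orbit P act y"
    then obtain \<pi> where \<pi>: "\<pi> \<in> P" "z = act \<pi> y" by (auto simp: orbit_def)
    have rG: "\<rho> \<in> Gaut" using P \<rho> by (rule subgrp_imp_Gaut)
    have "act (\<pi> \<circ> inv \<rho>) (act \<rho> y) = act \<pi> (act (inv \<rho>) (act \<rho> y))"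
      using gact_comp[OF g subgrp_imp_Gaut[OF P \<pi>(1)] Gaut_inv[OF rG] gact_closed[OF g rG y]] .
    also have "\<dots> = z" using gact_inv_act[OF g rG y] \<pi> by simp
    finally show "z \<in> orbit P act (act \<rho> y)"
      using subgrp_comp[OF P \<pi>(1) subgrp_inv[OF P \<rho>]] by (auto simp: orbit_def intro!: image_eqI[where x="\<pi> \<circ> inv \<rho>"])
  qed
qed

lemma orbit_eq:
  assumes P: "subgrp P" and g: "gact Y act" and y: "y \<in> Y" and z: "z \<in> orbit P act y"
  shows "orbit P act z = orbit P act y"
  using z orbit_move[OF P g y] by (auto simp: orbit_def)

lemma stab_subgrp:
  assumes P: "subgrp P" and g: "gact Y act" and y: "y \<in> Y"
  shows "subgrp (stab P act y)"
  unfolding subgrp_def stab_def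
proof (intro conjI ballI)
  show "{\<sigma> \<in> P. act \<sigma> y = y} \<subseteq> Gaut" using P by (auto simp: subgrp_def)
  show "id \<in> {\<sigma> \<in> P. act \<sigma> y = y}" using P g y by (simp add: subgrp_id gact_id)
  fix \<sigma> assume s: "\<sigma> \<in> {\<sigma> \<in> P. act \<sigma> y = y}"
  then show "inv \<sigma> \<in> {\<sigma> \<in> P. act \<sigma> y = y}"
    using subgrp_inv[OF P] gact_inv_act[OF g subgrp_imp_Gaut[OF P] y] by force
  fix \<tau> assume t: "\<tau> \<in> {\<sigma> \<in> P. act \<sigma> y = y}"
  show "\<sigma> \<circ> \<tau> \<in> {\<sigma> \<in> P. act \<sigma> y = y}"
    using s t subgrp_comp[OF P] gact_comp[OF g subgrp_imp_Gaut[OF P] subgrp_imp_Gaut[OF P] y] by auto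
qed

definition cut_type :: "real set \<Rightarrow> real set \<Rightarrow> (real \<Rightarrow> real) \<Rightarrow> (real \<times> real \<Rightarrow> real)" where
  "cut_type A B \<sigma> = restrict (\<lambda>(b, a). sgn (\<sigma> b - a)) (B \<times> A)"

lemma cut_type_in: "cut_type A B \<sigma> \<in> PiE (B \<times> A) (\<lambda>_. {-1, 0, 1})"
  unfolding cut_type_def by (auto simp: PiE_def extensional_def Pi_def sgn_real_def split: if_splits)

lemma orbit_eq_if_cut_type_eq:
  assumes g: "gact Y act" and y: "y \<in> Y" and fin: "finite A" "finite B"
    and B: "pstab B \<subseteq> stab Gaut act y" and \<sigma>: "\<sigma> \<in> Gaut" "\<sigma>' \<in> Gaut"
    and t: "cut_type A B \<sigma> = cut_type A B \<sigma>'"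
  shows "orbit (pstab A) act (act \<sigma>' y) = orbit (pstab A) act (act \<sigma> y)"
proof -
  have ta: "\<forall>b\<in>B. \<forall>a\<in>A. sgn (\<sigma> b - a) = sgn (\<sigma>' b - a)"
  proof (intro ballI)
    fix b a assume "b \<in> B" "a \<in> A"
    then show "sgn (\<sigma> b - a) = sgn (\<sigma>' b - a)"
      using fun_cong[OF t, of "(b, a)"] by (simp add: cut_type_def)
  qed
  have tb: "\<forall>b\<in>B. \<forall>b'\<in>B. sgn (\<sigma> b - \<sigma> b') = sgn (\<sigma>' b - \<sigma>' b')"
    using sgn_diff_Gaut[OF \<sigma>(1)] sgn_diff_Gaut[OF \<sigma>(2)] by simp
  obtain \<rho> where \<rho>: "\<rho> \<in> pstab A" "\<forall>b\<in>B. \<rho> (\<sigma> b) = \<sigma>' b"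
    using pstab_homogeneous[OF fin ta tb] by blast
  have \<rho>G: "\<rho> \<in> Gaut" using \<rho>(1) by (simp add: pstab_def)
  have "inv \<sigma>' \<circ> (\<rho> \<circ> \<sigma>) \<in> pstab B"
    using \<rho>(2) \<rho>G \<sigma> by (auto simp: pstab_def)
  then have fx: "act (inv \<sigma>' \<circ> (\<rho> \<circ> \<sigma>)) y = y" using B by (auto simp: stab_def)
  have "act \<sigma>' y = act \<sigma>' (act (inv \<sigma>' \<circ> (\<rho> \<circ> \<sigma>)) y)" using fx by simp
  also have "\<dots> = act (\<sigma>' \<circ> (inv \<sigma>' \<circ> (\<rho> \<circ> \<sigma>))) y"
    using gact_comp[OF g \<sigma>(2) _ y, of "inv \<sigma>' \<circ> (\<rho> \<circ> \<sigma>)"] \<rho>G \<sigma> by simp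
  also have "\<sigma>' \<circ> (inv \<sigma>' \<circ> (\<rho> \<circ> \<sigma>)) = \<rho> \<circ> \<sigma>" using \<sigma>(2) by (simp add: fun_eq_iff)
  also have "act (\<rho> \<circ> \<sigma>) y = act \<rho> (act \<sigma> y)" using gact_comp[OF g \<rho>G \<sigma>(1) y] .
  finally have "act \<sigma>' y = act \<rho> (act \<sigma> y)" .
  then show ?thesis using orbit_move[OF subgrp_pstab g gact_closed[OF g \<sigma>(1) y] \<rho>(1)] by simp
qed

text \<open>The \<open>pstab A\<close>-orbit of \<open>\<sigma> y\<close> only depends on the \<open>Gaut\<close>-orbit of \<open>y\<close> and on the
  relative order of \<open>\<sigma> B\<close> and \<open>A\<close>, where \<open>pstab B\<close> fixes a chosen point of that orbit.\<close>

lemma finite_orbits_pstab: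
  assumes u: "uset Gaut Y act" and A: "finite A"
  shows "finite (orbits (pstab A) Y act)"
proof -
  have g: "gact Y act" using u by (rule uset_gact)
  define R where "R = orbits Gaut Y act"
  have finR: "finite R" using u by (simp add: uset_def R_def)
  define rp where "rp Ob = (SOME y. y \<in> Ob \<inter> Y)" for Ob :: "'a set"
  define bs where "bs Ob = (SOME B. finite B \<and> pstab B \<subseteq> stab Gaut act (rp Ob))" for Ob :: "'a set"
  define \<Phi> where "\<Phi> p = orbit (pstab A) act (act (SOME \<sigma>. \<sigma> \<in> Gaut \<and> cut_type A (bs (fst p)) \<sigma> = snd p) (rp (fst p)))"
    for p :: "'a set \<times> (real \<times> real \<Rightarrow> real)"
  have sub: "orbits (pstab A) Y act \<subseteq> \<Phi> ` (SIGMA Ob:R. PiE (bs Ob \<times> A) (\<lambda>_. {-1, 0, 1}))"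
  proof
    fix Q assume "Q \<in> orbits (pstab A) Y act"
    then obtain y where y: "y \<in> Y" "Q = orbit (pstab A) act y" by (auto simp: orbits_def)
    define Ob where "Ob = orbit Gaut act y"
    have OR: "Ob \<in> R" using y by (simp add: R_def orbits_def Ob_def)
    have "y \<in> Ob \<inter> Y" using y orbit_self[OF subgrp_Gaut g] by (simp add: Ob_def)
    then have rpO: "rp Ob \<in> Ob \<inter> Y" unfolding rp_def by (rule someI)
    then obtain \<tau> where \<tau>: "\<tau> \<in> Gaut" "rp Ob = act \<tau> y" by (auto simp: Ob_def orbit_def)
    have "\<exists>B. finite B \<and> pstab B \<subseteq> stab Gaut act (rp Ob)" using u rpO by (simp add: uset_def)
    then have bsO: "finite (bs Ob) \<and> pstab (bs Ob) \<subseteq> stab Gaut act (rp Ob)"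
      unfolding bs_def by (rule someI_ex)
    define \<sigma> where "\<sigma> = inv \<tau>"
    have \<sigma>G: "\<sigma> \<in> Gaut" using \<tau> by (simp add: \<sigma>_def)
    have y_eq: "y = act \<sigma> (rp Ob)" using \<tau> gact_inv_act[OF g \<tau>(1) y(1)] by (simp add: \<sigma>_def)
    define t where "t = cut_type A (bs Ob) \<sigma>"
    define \<sigma>' where "\<sigma>' = (SOME \<sigma>'. \<sigma>' \<in> Gaut \<and> cut_type A (bs Ob) \<sigma>' = t)"
    have \<sigma>': "\<sigma>' \<in> Gaut \<and> cut_type A (bs Ob) \<sigma>' = t"
      unfolding \<sigma>'_def by (rule someI[of _ \<sigma>]) (simp add: \<sigma>G t_def)
    have "\<Phi> (Ob, t) = orbit (pstab A) act (act \<sigma>' (rp Ob))" by (simp add: \<Phi>_def \<sigma>'_def)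
    also have "\<dots> = orbit (pstab A) act (act \<sigma> (rp Ob))"
      using orbit_eq_if_cut_type_eq[OF g _ A _ _ \<sigma>G, of "rp Ob" "bs Ob" \<sigma>'] rpO bsO \<sigma>' by (simp add: t_def)
    also have "\<dots> = Q" using y y_eq by simp
    finally have "Q = \<Phi> (Ob, t)" by simp
    moreover have "(Ob, t) \<in> (SIGMA Ob:R. PiE (bs Ob \<times> A) (\<lambda>_. {-1, 0, 1}))"
      using OR cut_type_in by (simp add: t_def)
    ultimately show "Q \<in> \<Phi> ` (SIGMA Ob:R. PiE (bs Ob \<times> A) (\<lambda>_. {-1, 0, 1}))" by blast
  qed
  have "finite (SIGMA Ob:R. PiE (bs Ob \<times> A) (\<lambda>_. {-1::real, 0, 1}))"
  proof (rule finite_SigmaI[OF finR])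
    fix Ob assume "Ob \<in> R"
    then obtain y where y: "y \<in> Y" "Ob = orbit Gaut act y" by (auto simp: R_def orbits_def)
    have "y \<in> Ob \<inter> Y" using y orbit_self[OF subgrp_Gaut g] by simp
    then have rpO: "rp Ob \<in> Ob \<inter> Y" unfolding rp_def by (rule someI)
    have "\<exists>B. finite B \<and> pstab B \<subseteq> stab Gaut act (rp Ob)" using u rpO by (simp add: uset_def)
    then have "finite (bs Ob)" unfolding bs_def by (metis (mono_tags, lifting) someI_ex)
    then show "finite (PiE (bs Ob \<times> A) (\<lambda>_. {-1::real, 0, 1}))" using A by (intro finite_PiE) auto
  qed
  then show ?thesis using sub finite_subset by blast
qed

lemma finite_orbits_subgrp:
  assumes u: "uset Gaut Y act" and A: "finite A" and P: "subgrp P" "pstab A \<subseteq> P"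
  shows "finite (orbits P Y act)"
proof -
  have g: "gact Y act" using u by (rule uset_gact)
  have "orbits P Y act \<subseteq> (\<lambda>Q. orbit P act (SOME y. y \<in> Q \<inter> Y)) ` orbits (pstab A) Y act"
  proof
    fix Q assume "Q \<in> orbits P Y act"
    then obtain y where y: "y \<in> Y" "Q = orbit P act y" by (auto simp: orbits_def)
    define Q' where "Q' = orbit (pstab A) act y"
    have "y \<in> Q' \<inter> Y" using y orbit_self[OF subgrp_pstab g] by (simp add: Q'_def)
    then have z: "(SOME y. y \<in> Q' \<inter> Y) \<in> Q' \<inter> Y" by (rule someI)
    then have "(SOME y. y \<in> Q' \<inter> Y) \<in> orbit P act y" using P(2) by (auto simp: Q'_def orbit_def)
    then have "orbit P act (SOME y. y \<in> Q' \<inter> Y) = Q" using orbit_eq[OF P(1) g y(1)] y by simp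
    moreover have "Q' \<in> orbits (pstab A) Y act" using y by (simp add: orbits_def Q'_def)
    ultimately show "Q \<in> (\<lambda>Q. orbit P act (SOME y. y \<in> Q \<inter> Y)) ` orbits (pstab A) Y act" by force
  qed
  then show ?thesis using finite_orbits_pstab[OF u A] finite_subset by blast
qed

definition orbit_term :: "(real \<Rightarrow> real) set \<Rightarrow> ((real \<Rightarrow> real) \<Rightarrow> 'y \<Rightarrow> 'y) \<Rightarrow> ('y \<Rightarrow> 'k::field) \<Rightarrow> 'y set \<Rightarrow> 'k" where
  "orbit_term P act \<phi> Ob = \<phi> (SOME y. y \<in> Ob) * (-1) ^ card (fixpts (stab P act (SOME y. y \<in> Ob))) * (-1) ^ card (fixpts P)"

definition orbit_sum :: "(real \<Rightarrow> real) set \<Rightarrow> 'y set \<Rightarrow> ((real \<Rightarrow> real) \<Rightarrow> 'y \<Rightarrow> 'y) \<Rightarrow> ('y \<Rightarrow> 'k::field) \<Rightarrow> 'k" where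
  "orbit_sum P Y act \<phi> = (\<Sum>Ob\<in>orbits P Y act. orbit_term P act \<phi> Ob)"

lemma integral_mu_eq_orbit_sum: "integral_mu U Y act \<phi> = orbit_sum (fun_stab U Y act \<phi>) Y act \<phi>"
  by (simp add: integral_mu_def orbit_sum_def orbit_term_def Let_def)

lemma fun_stab_subgrp:
  assumes W: "subgrp W" and g: "gact Y act"
  shows "subgrp (fun_stab W Y act \<phi>)"
  unfolding subgrp_def fun_stab_def
proof (intro conjI ballI)
  show "{\<sigma> \<in> W. \<forall>y\<in>Y. \<phi> (act \<sigma> y) = \<phi> y} \<subseteq> Gaut" using W by (auto simp: subgrp_def)
  show "id \<in> {\<sigma> \<in> W. \<forall>y\<in>Y. \<phi> (act \<sigma> y) = \<phi> y}" using W g by (simp add: subgrp_id gact_id)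
  fix \<sigma> assume s: "\<sigma> \<in> {\<sigma> \<in> W. \<forall>y\<in>Y. \<phi> (act \<sigma> y) = \<phi> y}"
  then have sW: "\<sigma> \<in> W" and sG: "\<sigma> \<in> Gaut" and sp: "\<forall>y\<in>Y. \<phi> (act \<sigma> y) = \<phi> y"
    using subgrp_imp_Gaut[OF W] by auto
  have "\<forall>y\<in>Y. \<phi> (act (inv \<sigma>) y) = \<phi> y"
  proof
    fix y assume y: "y \<in> Y"
    have "\<phi> (act (inv \<sigma>) y) = \<phi> (act \<sigma> (act (inv \<sigma>) y))"
      using sp gact_closed[OF g Gaut_inv[OF sG] y] by simp
    then show "\<phi> (act (inv \<sigma>) y) = \<phi> y" using gact_act_inv[OF g sG y] by simp
  qed
  then show "inv \<sigma> \<in> {\<sigma> \<in> W. \<forall>y\<in>Y. \<phi> (act \<sigma> y) = \<phi> y}" using subgrp_inv[OF W sW] by simp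
  fix \<tau> assume t: "\<tau> \<in> {\<sigma> \<in> W. \<forall>y\<in>Y. \<phi> (act \<sigma> y) = \<phi> y}"
  then have tW: "\<tau> \<in> W" and tG: "\<tau> \<in> Gaut" and tp: "\<forall>y\<in>Y. \<phi> (act \<tau> y) = \<phi> y"
    using subgrp_imp_Gaut[OF W] by auto
  have "\<forall>y\<in>Y. \<phi> (act (\<sigma> \<circ> \<tau>) y) = \<phi> y"
    using sp tp gact_comp[OF g sG tG] gact_closed[OF g tG] by simp
  then show "\<sigma> \<circ> \<tau> \<in> {\<sigma> \<in> W. \<forall>y\<in>Y. \<phi> (act \<sigma> y) = \<phi> y}" using subgrp_comp[OF W sW tW] by simp
qed

lemma some_in_orbit:
  assumes P: "subgrp P" and g: "gact Y act" and Ob: "Ob \<in> orbits P Y act"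
  shows "(SOME y. y \<in> Ob) \<in> Ob" "(SOME y. y \<in> Ob) \<in> Y" "Ob = orbit P act (SOME y. y \<in> Ob)"
proof -
  obtain y where y: "y \<in> Y" "Ob = orbit P act y" using Ob by (auto simp: orbits_def)
  have "y \<in> Ob" using orbit_self[OF P g y(1)] y by simp
  then show r: "(SOME y. y \<in> Ob) \<in> Ob" by (rule someI)
  then show "(SOME y. y \<in> Ob) \<in> Y" using orbit_sub[OF P g y(1)] y by auto
  show "Ob = orbit P act (SOME y. y \<in> Ob)" using orbit_eq[OF P g y(1)] r y by simp
qed

lemma fun_stab_cong:
  assumes W: "W \<subseteq> Gaut" and g: "gact Y act" and eq: "\<forall>y\<in>Y. \<phi> y = \<psi> y"
  shows "fun_stab W Y act \<phi> = fun_stab W Y act \<psi>"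
  using eq gact_closed[OF g] W by (auto simp: fun_stab_def)

lemma integral_cong:
  assumes W: "subgrp W" and g: "gact Y act" and eq: "\<forall>y\<in>Y. \<phi> y = \<psi> y"
  shows "integral_mu W Y act \<phi> = integral_mu W Y act \<psi>"
proof -
  have fs: "fun_stab W Y act \<phi> = fun_stab W Y act \<psi>"
    using fun_stab_cong[OF _ g eq] W by (auto simp: subgrp_def)
  define P where "P = fun_stab W Y act \<psi>"
  have P: "subgrp P" using fun_stab_subgrp[OF W g] by (simp add: P_def)
  have "orbit_sum P Y act \<phi> = orbit_sum P Y act \<psi>"
    unfolding orbit_sum_def orbit_term_def using some_in_orbit(2)[OF P g] eq by (intro sum.cong) auto
  then show ?thesis using fs by (simp add: integral_mu_eq_orbit_sum P_def)
qed

lemma integral_zero: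
  assumes W: "subgrp W" and g: "gact Y act" and eq: "\<forall>y\<in>Y. \<phi> y = 0"
  shows "integral_mu W Y act \<phi> = 0"
proof -
  define P where "P = fun_stab W Y act \<phi>"
  have P: "subgrp P" using fun_stab_subgrp[OF W g] by (simp add: P_def)
  have "orbit_sum P Y act \<phi> = 0"
    unfolding orbit_sum_def orbit_term_def using some_in_orbit(2)[OF P g] eq by (intro sum.neutral) auto
  then show ?thesis by (simp add: integral_mu_eq_orbit_sum P_def)
qed

lemma orbit_sum_delta:
  fixes \<phi> :: "'y \<Rightarrow> 'k::field"
  assumes P: "subgrp P" and u: "uset Gaut Y act" and A: "finite A" "pstab A \<subseteq> P"
    and y0: "y0 \<in> Y" and supp: "\<forall>y\<in>Y. y \<noteq> y0 \<longrightarrow> \<phi> y = 0" and fix0: "\<forall>\<rho>\<in>P. act \<rho> y0 = y0"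
  shows "orbit_sum P Y act \<phi> = \<phi> y0"
proof -
  have g: "gact Y act" using u by (rule uset_gact)
  have fin: "finite (orbits P Y act)" using finite_orbits_subgrp[OF u A(1) P A(2)] .
  have o0: "orbit P act y0 = {y0}" using fix0 subgrp_id[OF P] by (auto simp: orbit_def)
  have mem: "{y0} \<in> orbits P Y act" using o0 y0 by (auto simp: orbits_def)
  have "orbit_sum P Y act \<phi> = orbit_term P act \<phi> {y0}"
    unfolding orbit_sum_def
  proof (rule sum.remove[OF fin mem, THEN trans], simp, rule sum.neutral, intro ballI)
    fix Ob assume Ob: "Ob \<in> orbits P Y act - {{y0}}"
    have r: "(SOME y. y \<in> Ob) \<in> Ob" "(SOME y. y \<in> Ob) \<in> Y" "Ob = orbit P act (SOME y. y \<in> Ob)"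
      using some_in_orbit[OF P g] Ob by auto
    have "(SOME y. y \<in> Ob) \<noteq> y0"
    proof
      assume "(SOME y. y \<in> Ob) = y0"
      then have "Ob = {y0}" using r(3) o0 by simp
      then show False using Ob by simp
    qed
    then show "orbit_term P act \<phi> Ob = 0" using supp r(2) by (simp add: orbit_term_def)
  qed
  also have "\<dots> = \<phi> y0"
  proof -
    have "stab P act y0 = P" using fix0 by (auto simp: stab_def)
    moreover have "((-1::'k) ^ card (fixpts P)) * (-1) ^ card (fixpts P) = 1"
      by (simp add: power_add[symmetric])
    ultimately show ?thesis by (simp add: orbit_term_def mult.assoc)
  qed
  finally show ?thesis .
qed

lemma integral_delta:
  assumes W: "subgrp W" and u: "uset Gaut Y act" and A: "finite A"
    and AW: "\<forall>\<rho>\<in>pstab A. \<rho> \<in> W \<and> (\<forall>y\<in>Y. \<phi> (act \<rho> y) = \<phi> y)"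
    and y0: "y0 \<in> Y" and supp: "\<forall>y\<in>Y. y \<noteq> y0 \<longrightarrow> \<phi> y = 0"
  shows "integral_mu W Y act \<phi> = \<phi> y0"
proof (cases "\<phi> y0 = 0")
  case True
  have g: "gact Y act" using u by (rule uset_gact)
  have "integral_mu W Y act \<phi> = 0" using integral_zero[OF W g] supp True by metis
  then show ?thesis using True by simp
next
  case False
  have g: "gact Y act" using u by (rule uset_gact)
  define P where "P = fun_stab W Y act \<phi>"
  have P: "subgrp P" using fun_stab_subgrp[OF W g] by (simp add: P_def)
  have fix0: "\<forall>\<rho>\<in>P. act \<rho> y0 = y0"
  proof
    fix \<rho> assume \<rho>: "\<rho> \<in> P"
    then have "\<phi> (act \<rho> y0) = \<phi> y0" using y0 by (simp add: P_def fun_stab_def)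
    moreover have "act \<rho> y0 \<in> Y" using gact_closed[OF g subgrp_imp_Gaut[OF P \<rho>] y0] .
    ultimately show "act \<rho> y0 = y0" using supp False by metis
  qed
  have "pstab A \<subseteq> P" using AW by (auto simp: P_def fun_stab_def)
  then show ?thesis using orbit_sum_delta[OF P u A _ y0 supp fix0] by (simp add: integral_mu_eq_orbit_sum P_def)
qed

lemma integral_single:
  fixes \<phi> :: "'y \<Rightarrow> 'k::field"
  assumes W: "subgrp W" and fx: "\<forall>\<sigma>\<in>W. act \<sigma> y0 = y0"
  shows "integral_mu W {y0} act \<phi> = \<phi> y0"
proof -
  define P where "P = fun_stab W {y0} act \<phi>"
  have PW: "P = W" using fx by (auto simp: P_def fun_stab_def)
  have o0: "orbit P act y0 = {y0}" using fx subgrp_id[OF W] PW by (auto simp: orbit_def)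
  have "orbits P {y0} act = {{y0}}" using o0 by (simp add: orbits_def)
  moreover have "stab P act y0 = P" using fx PW by (auto simp: stab_def)
  moreover have "((-1::'k) ^ card (fixpts P)) * (-1) ^ card (fixpts P) = 1"
    by (simp add: power_add[symmetric])
  ultimately show ?thesis by (simp add: integral_mu_eq_orbit_sum P_def[symmetric] orbit_sum_def orbit_term_def mult.assoc)
qed

lemma gact_pact: "gact Y1 a1 \<Longrightarrow> gact Y2 a2 \<Longrightarrow> gact (Y1 \<times> Y2) (pact a1 a2)"
  by (auto simp: gact_def pact_def)

lemma smooth_pact:
  assumes u1: "uset Gaut Y1 a1" and u2: "uset Gaut Y2 a2" and p: "p \<in> Y1 \<times> Y2"
  shows "\<exists>F. finite F \<and> pstab F \<subseteq> stab Gaut (pact a1 a2) p"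
proof -
  obtain F1 where F1: "finite F1" "pstab F1 \<subseteq> stab Gaut a1 (fst p)" using u1 p by (auto simp: uset_def)
  obtain F2 where F2: "finite F2" "pstab F2 \<subseteq> stab Gaut a2 (snd p)" using u2 p by (auto simp: uset_def)
  have "pstab (F1 \<union> F2) \<subseteq> stab Gaut (pact a1 a2) p"
  proof
    fix \<rho> assume "\<rho> \<in> pstab (F1 \<union> F2)"
    then have "\<rho> \<in> pstab F1" "\<rho> \<in> pstab F2" by (auto simp: pstab_def)
    then show "\<rho> \<in> stab Gaut (pact a1 a2) p" using F1 F2 by (auto simp: stab_def pact_def prod_eq_iff)
  qed
  then show ?thesis using F1 F2 by blast
qed

lemma orbits_pact_subset:
  assumes g1: "gact Y1 a1" and g2: "gact Y2 a2"
  shows "orbits Gaut (Y1 \<times> Y2) (pact a1 a2) \<subseteq>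
    (\<Union>r\<in>(\<lambda>Ob. SOME y. y \<in> Ob) ` orbits Gaut Y1 a1.
      (\<lambda>Q. orbit Gaut (pact a1 a2) (r, SOME z. z \<in> Q)) ` orbits (stab Gaut a1 r) Y2 a2)"
proof
  have g: "gact (Y1 \<times> Y2) (pact a1 a2)" using gact_pact[OF g1 g2] .
  fix Q0 assume "Q0 \<in> orbits Gaut (Y1 \<times> Y2) (pact a1 a2)"
  then obtain y1 y2 where y: "y1 \<in> Y1" "y2 \<in> Y2" "Q0 = orbit Gaut (pact a1 a2) (y1, y2)"
    by (auto simp: orbits_def)
  define Ob1 where "Ob1 = orbit Gaut a1 y1"
  define r where "r = (SOME y. y \<in> Ob1)"
  have Ob1: "Ob1 \<in> orbits Gaut Y1 a1" using y by (simp add: orbits_def Ob1_def)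
  have r: "r \<in> Ob1" "r \<in> Y1" using some_in_orbit[OF subgrp_Gaut g1 Ob1] by (auto simp: r_def)
  then obtain \<tau> where \<tau>: "\<tau> \<in> Gaut" "r = a1 \<tau> y1" by (auto simp: Ob1_def orbit_def)
  define z2 where "z2 = a2 \<tau> y2"
  have z2: "z2 \<in> Y2" using gact_closed[OF g2 \<tau>(1) y(2)] by (simp add: z2_def)
  define Q where "Q = orbit (stab Gaut a1 r) a2 z2"
  have Q: "Q \<in> orbits (stab Gaut a1 r) Y2 a2" using z2 by (simp add: orbits_def Q_def)
  have "(SOME z. z \<in> Q) \<in> Q"
    using some_in_orbit[OF stab_subgrp[OF subgrp_Gaut g1 r(2)] g2 Q] by simp
  then obtain \<pi> where \<pi>: "\<pi> \<in> Gaut" "a1 \<pi> r = r" "(SOME z. z \<in> Q) = a2 \<pi> z2"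
    by (auto simp: Q_def orbit_def stab_def)
  have "orbit Gaut (pact a1 a2) (r, SOME z. z \<in> Q) = orbit Gaut (pact a1 a2) (pact a1 a2 \<pi> (r, z2))"
    using \<pi> by (simp add: pact_def)
  also have "\<dots> = orbit Gaut (pact a1 a2) (r, z2)"
    using orbit_move[OF subgrp_Gaut g _ \<pi>(1)] r(2) z2 by simp
  also have "(r, z2) = pact a1 a2 \<tau> (y1, y2)" using \<tau> by (simp add: pact_def z2_def)
  also have "orbit Gaut (pact a1 a2) (pact a1 a2 \<tau> (y1, y2)) = Q0"
    using orbit_move[OF subgrp_Gaut g _ \<tau>(1)] y by simp
  finally have Q0: "Q0 = orbit Gaut (pact a1 a2) (r, SOME z. z \<in> Q)" by simp
  have "r \<in> (\<lambda>Ob. SOME y. y \<in> Ob) ` orbits Gaut Y1 a1" using Ob1 by (simp add: r_def)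
  then show "Q0 \<in> (\<Union>r\<in>(\<lambda>Ob. SOME y. y \<in> Ob) ` orbits Gaut Y1 a1.
      (\<lambda>Q. orbit Gaut (pact a1 a2) (r, SOME z. z \<in> Q)) ` orbits (stab Gaut a1 r) Y2 a2)"
    using Q Q0 by blast
qed

lemma uset_prod:
  assumes u1: "uset Gaut Y1 a1" and u2: "uset Gaut Y2 a2"
  shows "uset Gaut (Y1 \<times> Y2) (pact a1 a2)"
proof -
  have g1: "gact Y1 a1" and g2: "gact Y2 a2" using u1 u2 by (auto intro: uset_gact)
  have "finite (orbits (stab Gaut a1 r) Y2 a2)" if r: "r \<in> (\<lambda>Ob. SOME y. y \<in> Ob) ` orbits Gaut Y1 a1" for r
  proof -
    obtain Ob where "Ob \<in> orbits Gaut Y1 a1" "r = (SOME y. y \<in> Ob)" using r by blast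
    then have r: "r \<in> Y1" using some_in_orbit(2)[OF subgrp_Gaut g1] by simp
    obtain F where F: "finite F" "pstab F \<subseteq> stab Gaut a1 r" using u1 r by (auto simp: uset_def)
    show ?thesis using finite_orbits_subgrp[OF u2 F(1) stab_subgrp[OF subgrp_Gaut g1 r] F(2)] .
  qed
  moreover have "finite (orbits Gaut Y1 a1)" using u1 by (simp add: uset_def)
  ultimately have "finite (\<Union>r\<in>(\<lambda>Ob. SOME y. y \<in> Ob) ` orbits Gaut Y1 a1.
      (\<lambda>Q. orbit Gaut (pact a1 a2) (r, SOME z. z \<in> Q)) ` orbits (stab Gaut a1 r) Y2 a2)"
    by simp
  then have "finite (orbits Gaut (Y1 \<times> Y2) (pact a1 a2))"
    by (rule finite_subset[OF orbits_pact_subset[OF g1 g2]])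
  then show ?thesis using gact_pact[OF g1 g2] smooth_pact[OF u1 u2] by (simp add: uset_def gact_def)
qed

lemma open_subgroup_subgrp: "open_subgroup U \<Longrightarrow> subgrp U"
  by (simp add: open_subgroup_def subgrp_def)

lemma open_subgroup_pstab: "open_subgroup U \<Longrightarrow> \<exists>F. finite F \<and> pstab F \<subseteq> U"
  by (simp add: open_subgroup_def)

lemma coset_of_mem:
  assumes U: "subgrp U" and k: "\<kappa> \<in> U"
  shows "(\<lambda>\<tau>. \<kappa> \<circ> \<tau>) ` U = U"
proof
  show "(\<lambda>\<tau>. \<kappa> \<circ> \<tau>) ` U \<subseteq> U" using subgrp_comp[OF U k] by auto
  show "U \<subseteq> (\<lambda>\<tau>. \<kappa> \<circ> \<tau>) ` U"
  proof
    fix \<tau> assume t: "\<tau> \<in> U"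
    have kG: "\<kappa> \<in> Gaut" using subgrp_imp_Gaut[OF U k] .
    have "\<kappa> \<circ> (inv \<kappa> \<circ> \<tau>) = \<tau>" using kG by (simp add: fun_eq_iff)
    moreover have "inv \<kappa> \<circ> \<tau> \<in> U" using subgrp_comp[OF U subgrp_inv[OF U k] t] .
    ultimately show "\<tau> \<in> (\<lambda>\<tau>. \<kappa> \<circ> \<tau>) ` U" by (metis image_eqI)
  qed
qed

lemma coset_act_img: "coset_act \<sigma> ((\<lambda>\<tau>. \<rho> \<circ> \<tau>) ` U) = (\<lambda>\<tau>. (\<sigma> \<circ> \<rho>) \<circ> \<tau>) ` U"
  by (simp add: coset_act_def image_image o_assoc)

lemma coset_eq_iff:
  assumes U: "subgrp U" and \<sigma>: "\<sigma> \<in> Gaut" and \<rho>: "\<rho> \<in> Gaut"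
  shows "(\<lambda>\<tau>. \<sigma> \<circ> \<tau>) ` U = (\<lambda>\<tau>. \<rho> \<circ> \<tau>) ` U \<longleftrightarrow> inv \<rho> \<circ> \<sigma> \<in> U"
proof
  assume eq: "(\<lambda>\<tau>. \<sigma> \<circ> \<tau>) ` U = (\<lambda>\<tau>. \<rho> \<circ> \<tau>) ` U"
  have "\<sigma> \<in> (\<lambda>\<tau>. \<sigma> \<circ> \<tau>) ` U" using subgrp_id[OF U] by (metis comp_id image_eqI)
  then obtain \<tau> where t: "\<tau> \<in> U" "\<sigma> = \<rho> \<circ> \<tau>" using eq by auto
  then have "inv \<rho> \<circ> \<sigma> = \<tau>" using \<rho> by (simp add: fun_eq_iff)
  then show "inv \<rho> \<circ> \<sigma> \<in> U" using t by simp
next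
  assume k: "inv \<rho> \<circ> \<sigma> \<in> U"
  have e: "\<rho> \<circ> (inv \<rho> \<circ> \<sigma>) = \<sigma>" using \<rho> by (simp add: fun_eq_iff)
  have "(\<lambda>\<tau>. \<sigma> \<circ> \<tau>) ` U = (\<lambda>\<tau>. (\<rho> \<circ> (inv \<rho> \<circ> \<sigma>)) \<circ> \<tau>) ` U"
    by (simp only: e)
  also have "\<dots> = coset_act \<rho> ((\<lambda>\<tau>. (inv \<rho> \<circ> \<sigma>) \<circ> \<tau>) ` U)" by (simp add: coset_act_img)
  also have "\<dots> = coset_act \<rho> U" using coset_of_mem[OF U k] by simp
  also have "\<dots> = (\<lambda>\<tau>. \<rho> \<circ> \<tau>) ` U" by (simp add: coset_act_def)
  finally show "(\<lambda>\<tau>. \<sigma> \<circ> \<tau>) ` U = (\<lambda>\<tau>. \<rho> \<circ> \<tau>) ` U" .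
qed

lemma U_in_cosets: "U \<in> cosets U"
  unfolding cosets_def by (rule CollectI, rule exI[of _ id]) (simp add: image_comp)

lemma cosets_iff: "C \<in> cosets U \<longleftrightarrow> (\<exists>\<sigma>\<in>Gaut. C = (\<lambda>\<tau>. \<sigma> \<circ> \<tau>) ` U)"
  by (auto simp: cosets_def)

lemma coset_act_id: "coset_act id C = C" by (simp add: coset_act_def)

lemma coset_act_comp: "coset_act (\<sigma> \<circ> \<tau>) C = coset_act \<sigma> (coset_act \<tau> C)"
  by (simp add: coset_act_def image_image o_assoc)

lemma coset_act_closed: "\<sigma> \<in> Gaut \<Longrightarrow> C \<in> cosets U \<Longrightarrow> coset_act \<sigma> C \<in> cosets U"
  by (auto simp: cosets_iff coset_act_img)

lemma gact_cosets: "gact (cosets U) coset_act"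
  by (simp add: gact_def coset_act_id coset_act_comp coset_act_closed)

lemma uset_cosets:
  assumes U: "open_subgroup U"
  shows "uset Gaut (cosets U) coset_act"
proof -
  have Us: "subgrp U" using open_subgroup_subgrp[OF U] .
  obtain F where F: "finite F" "pstab F \<subseteq> U" using open_subgroup_pstab[OF U] by blast
  have smooth: "\<forall>C\<in>cosets U. \<exists>F. finite F \<and> pstab F \<subseteq> stab Gaut coset_act C"
  proof
    fix C assume "C \<in> cosets U"
    then obtain \<sigma> where \<sigma>: "\<sigma> \<in> Gaut" "C = (\<lambda>\<tau>. \<sigma> \<circ> \<tau>) ` U" by (auto simp: cosets_iff)
    have "pstab (\<sigma> ` F) \<subseteq> stab Gaut coset_act C"
    proof
      fix \<rho> assume \<rho>: "\<rho> \<in> pstab (\<sigma> ` F)"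
      have \<rho>G: "\<rho> \<in> Gaut" using \<rho> by (simp add: pstab_def)
      have "inv \<sigma> \<circ> (\<rho> \<circ> \<sigma>) \<in> pstab F" using \<rho> \<sigma>(1) \<rho>G by (auto simp: pstab_def)
      then have k: "inv \<sigma> \<circ> (\<rho> \<circ> \<sigma>) \<in> U" using F by auto
      have "coset_act \<rho> C = (\<lambda>\<tau>. (\<rho> \<circ> \<sigma>) \<circ> \<tau>) ` U" using \<sigma> by (simp add: coset_act_img)
      also have "\<dots> = C" using coset_eq_iff[OF Us _ \<sigma>(1), of "\<rho> \<circ> \<sigma>"] k \<rho>G \<sigma> by simp
      finally show "\<rho> \<in> stab Gaut coset_act C" using \<rho>G by (simp add: stab_def)
    qed
    then show "\<exists>F. finite F \<and> pstab F \<subseteq> stab Gaut coset_act C" using F(1) by blast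
  qed
  have "orbits Gaut (cosets U) coset_act \<subseteq> {orbit Gaut coset_act U}"
  proof
    fix Q assume "Q \<in> orbits Gaut (cosets U) coset_act"
    then obtain C where C: "C \<in> cosets U" "Q = orbit Gaut coset_act C" by (auto simp: orbits_def)
    then obtain \<sigma> where \<sigma>: "\<sigma> \<in> Gaut" "C = (\<lambda>\<tau>. \<sigma> \<circ> \<tau>) ` U" by (auto simp: cosets_iff)
    then have "C = coset_act \<sigma> U" by (simp add: coset_act_def)
    then have "Q = orbit Gaut coset_act U"
      using orbit_move[OF subgrp_Gaut gact_cosets U_in_cosets \<sigma>(1)] C by simp
    then show "Q \<in> {orbit Gaut coset_act U}" by simp
  qed
  then have "finite (orbits Gaut (cosets U) coset_act)" using finite_subset by blast
  then show ?thesis using smooth gact_cosets by (simp add: uset_def gact_def)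
qed

section \<open>Independence of the integral from the subgroup\<close>

lemma exists_between_notin:
  fixes x y :: real
  assumes "x < y" "finite D"
  shows "\<exists>q. x < q \<and> q < y \<and> q \<notin> D"
proof -
  have "infinite {x<..<y}" using assms(1) by simp
  then have "infinite ({x<..<y} - D)" using assms(2) by (meson Diff_infinite_finite)
  then have "{x<..<y} - D \<noteq> {}" by (metis finite.emptyI)
  then show ?thesis by auto
qed

lemma stab_pstab_act:
  assumes g: "gact Y act" and y: "y \<in> Y" and \<rho>: "\<rho> \<in> pstab C"
    and HD: "stab (pstab C) act y = pstab D" and CD: "C \<subseteq> D"
  shows "stab (pstab C) act (act \<rho> y) = pstab (\<rho> ` D)"
proof -
  have \<rho>G: "\<rho> \<in> Gaut" and \<rho>C: "\<forall>c\<in>C. \<rho> c = c" using \<rho> by (auto simp: pstab_def)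
  have ry: "act \<rho> y \<in> Y" using gact_closed[OF g \<rho>G y] .
  show ?thesis
  proof
    show "stab (pstab C) act (act \<rho> y) \<subseteq> pstab (\<rho> ` D)"
    proof
      fix \<sigma> assume s: "\<sigma> \<in> stab (pstab C) act (act \<rho> y)"
      then have sP: "\<sigma> \<in> pstab C" and sf: "act \<sigma> (act \<rho> y) = act \<rho> y" by (auto simp: stab_def)
      have sG: "\<sigma> \<in> Gaut" using sP by (simp add: pstab_def)
      define \<kappa> where "\<kappa> = inv \<rho> \<circ> \<sigma> \<circ> \<rho>"
      have kP: "\<kappa> \<in> pstab C" unfolding \<kappa>_def
        using subgrp_comp[OF subgrp_pstab subgrp_comp[OF subgrp_pstab subgrp_inv[OF subgrp_pstab \<rho>] sP] \<rho>] .
      have "act \<kappa> y = act (inv \<rho>) (act \<sigma> (act \<rho> y))"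
        unfolding \<kappa>_def using gact_comp[OF g] \<rho>G sG y gact_closed[OF g] by simp
      also have "\<dots> = y" using sf gact_inv_act[OF g \<rho>G y] by simp
      finally have "\<kappa> \<in> pstab D" using kP HD by (auto simp: stab_def)
      then have "\<forall>d\<in>D. inv \<rho> (\<sigma> (\<rho> d)) = d" by (simp add: pstab_def \<kappa>_def)
      then have "\<forall>d\<in>D. \<sigma> (\<rho> d) = \<rho> d" using \<rho>G by (metis Gaut_f_inv_f)
      then show "\<sigma> \<in> pstab (\<rho> ` D)" using sG by (simp add: pstab_def)
    qed
    show "pstab (\<rho> ` D) \<subseteq> stab (pstab C) act (act \<rho> y)"
    proof
      fix \<sigma> assume s: "\<sigma> \<in> pstab (\<rho> ` D)"
      have sG: "\<sigma> \<in> Gaut" and sD: "\<forall>d\<in>D. \<sigma> (\<rho> d) = \<rho> d" using s by (auto simp: pstab_def)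
      have sP: "\<sigma> \<in> pstab C" using sG sD CD \<rho>C by (auto simp: pstab_def) (metis subsetD)
      define \<kappa> where "\<kappa> = inv \<rho> \<circ> \<sigma> \<circ> \<rho>"
      have kG: "\<kappa> \<in> Gaut" using \<rho>G sG by (simp add: \<kappa>_def)
      have "\<kappa> \<in> pstab D" using kG sD \<rho>G by (simp add: pstab_def \<kappa>_def)
      then have kf: "act \<kappa> y = y" using HD by (auto simp: stab_def)
      have "\<sigma> \<circ> \<rho> = \<rho> \<circ> \<kappa>" using \<rho>G by (simp add: \<kappa>_def fun_eq_iff)
      then have "act \<sigma> (act \<rho> y) = act \<rho> (act \<kappa> y)"
        using gact_comp[OF g sG \<rho>G y] gact_comp[OF g \<rho>G kG y] by simp
      then show "\<sigma> \<in> stab (pstab C) act (act \<rho> y)" using kf sP by (simp add: stab_def)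
    qed
  qed
qed

lemma stab_pstab_eq_pstab_fixpts:
  assumes u: "uset Gaut Y act" and y: "y \<in> Y" and C: "finite C"
  shows "stab (pstab C) act y = pstab (fixpts (stab (pstab C) act y))"
    "finite (fixpts (stab (pstab C) act y))" "C \<subseteq> fixpts (stab (pstab C) act y)"
proof -
  have g: "gact Y act" using u by (rule uset_gact)
  have Hs: "subgrp (stab (pstab C) act y)" using stab_subgrp[OF subgrp_pstab g y] .
  obtain B where B: "finite B" "pstab B \<subseteq> stab Gaut act y" using u y by (auto simp: uset_def)
  have "pstab (C \<union> B) \<subseteq> stab (pstab C) act y"
    using B(2) pstab_antimono[of C "C \<union> B"] pstab_antimono[of B "C \<union> B"] by (auto simp: stab_def)
  moreover have fCB: "finite (C \<union> B)" using B(1) C by simp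
  ultimately show "stab (pstab C) act y = pstab (fixpts (stab (pstab C) act y))"
    "finite (fixpts (stab (pstab C) act y))"
    using subgrp_eq_pstab_fixpts[OF Hs fCB] by blast+
  have "stab (pstab C) act y \<subseteq> pstab C" by (auto simp: stab_def)
  then show "C \<subseteq> fixpts (stab (pstab C) act y)" using fixpts_antimono fixpts_pstab[OF C] by metis
qed

lemma Int_pstab: "pstab A \<inter> pstab B = pstab (A \<union> B)"
  by (auto simp: pstab_def)

lemma stab_subset_eq_inter: "P' \<subseteq> P \<Longrightarrow> stab P' act z = P' \<inter> stab P act z"
  by (auto simp: stab_def)

text \<open>A single \<open>P\<close>-orbit \<open>P y\<close>, with \<open>P = pstab C\<close> and \<open>stab P y = pstab D\<close>, splits into
  \<open>P'\<close>-orbits for \<open>P' = pstab (insert a C)\<close>.  The \<open>P'\<close>-orbit of \<open>\<rho> y\<close> is determined by the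
  position of \<open>\<rho>\<^sup>-\<^sup>1 a\<close> relative to \<open>D\<close>, which \<open>cut_code\<close> records either as a point of \<open>D\<close>
  (\<open>Inl\<close>) or as the gap below the next point of \<open>D\<close> (\<open>Inr\<close>, with \<open>None\<close> for the top gap).
  \<open>P'\<close> has one fixed point more than \<open>P\<close>, and so does the stabilizer of \<open>\<rho> y\<close> when
  \<open>\<rho>\<^sup>-\<^sup>1 a\<close> lies in a gap, but not when it is a point; whence the weights \<open>+1\<close> and \<open>-1\<close>,
  which sum to \<open>1\<close> over all codes.\<close>

definition code_weight :: "real + real option \<Rightarrow> 'k::field" where
  "code_weight t = (case t of Inl _ \<Rightarrow> - 1 | Inr _ \<Rightarrow> 1)"

locale orbit_refinement =
  fixes Y :: "'y set" and act :: "(real \<Rightarrow> real) \<Rightarrow> 'y \<Rightarrow> 'y" and C :: "real set" and a :: real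
    and y :: 'y and D :: "real set"
  assumes u: "uset Gaut Y act" and finC: "finite C" and aC: "a \<notin> C" and y: "y \<in> Y"
    and HD: "stab (pstab C) act y = pstab D" and finD: "finite D" and CD: "C \<subseteq> D"
begin

abbreviation "P \<equiv> pstab C"
abbreviation "P' \<equiv> pstab (insert a C)"

definition same_cut :: "real set" where
  "same_cut = {q. \<forall>c\<in>C. (c < q \<longleftrightarrow> c < a) \<and> (q < c \<longleftrightarrow> a < c)}"

definition D_cut :: "real set" where "D_cut = D \<inter> same_cut"

definition next_D :: "real \<Rightarrow> real option" where
  "next_D q = (if {e\<in>D_cut. q < e} = {} then None else Some (Min {e\<in>D_cut. q < e}))"

definition cut_code :: "real \<Rightarrow> real + real option" where
  "cut_code q = (if q \<in> D then Inl q else Inr (next_D q))"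

lemma gact_Y: "gact Y act" using u by (rule uset_gact)

lemma P'_subset_P: "P' \<subseteq> P" by (rule pstab_antimono) auto

lemma finite_D_cut: "finite D_cut" using finD by (simp add: D_cut_def)

lemma a_same_cut: "a \<in> same_cut" by (simp add: same_cut_def)

lemma same_cut_notin: "q \<in> same_cut \<Longrightarrow> q \<notin> C"
proof
  assume q: "q \<in> same_cut" "q \<in> C"
  then have "(q < q \<longleftrightarrow> q < a) \<and> (q < q \<longleftrightarrow> a < q)" by (auto simp: same_cut_def)
  then have "q = a" by auto
  then show False using aC q(2) by simp
qed

lemma same_cut_convex: "u \<in> same_cut \<Longrightarrow> v \<in> same_cut \<Longrightarrow> u \<le> q \<Longrightarrow> q \<le> v \<Longrightarrow> q \<in> same_cut"
  unfolding same_cut_def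
proof (intro CollectI ballI)
  fix c assume u: "u \<in> {q. \<forall>c\<in>C. (c < q \<longleftrightarrow> c < a) \<and> (q < c \<longleftrightarrow> a < c)}"
    and v: "v \<in> {q. \<forall>c\<in>C. (c < q \<longleftrightarrow> c < a) \<and> (q < c \<longleftrightarrow> a < c)}"
    and uq: "u \<le> q" and qv: "q \<le> v" and c: "c \<in> C"
  have u1: "c < u \<longleftrightarrow> c < a" "u < c \<longleftrightarrow> a < c" using u c by auto
  have v1: "c < v \<longleftrightarrow> c < a" "v < c \<longleftrightarrow> a < c" using v c by auto
  show "(c < q \<longleftrightarrow> c < a) \<and> (q < c \<longleftrightarrow> a < c)"
    using u1 v1 uq qv by linarith
qed

lemma inv_a_same_cut: "\<rho> \<in> P \<Longrightarrow> inv \<rho> a \<in> same_cut"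
proof -
  assume \<rho>: "\<rho> \<in> P"
  have \<rho>G: "\<rho> \<in> Gaut" and \<rho>C: "\<forall>c\<in>C. \<rho> c = c" using \<rho> by (auto simp: pstab_def)
  show ?thesis unfolding same_cut_def
  proof (intro CollectI ballI)
    fix c assume c: "c \<in> C"
    have "c < inv \<rho> a \<longleftrightarrow> \<rho> c < \<rho> (inv \<rho> a)" using Gaut_less[OF \<rho>G] by simp
    moreover have "inv \<rho> a < c \<longleftrightarrow> \<rho> (inv \<rho> a) < \<rho> c" using Gaut_less[OF \<rho>G] by simp
    ultimately show "(c < inv \<rho> a \<longleftrightarrow> c < a) \<and> (inv \<rho> a < c \<longleftrightarrow> a < c)" using \<rho>C c \<rho>G by simp
  qed
qed

lemma same_cut_realize:
  assumes q: "q \<in> same_cut"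
  shows "\<exists>\<rho>\<in>P. inv \<rho> a = q"
proof -
  obtain \<rho> where \<rho>: "\<rho> \<in> Gaut" "\<forall>t\<in>C. \<rho> t = t" "\<rho> q = a"
    using Gaut_move_point[OF finC same_cut_notin[OF q]] q by (auto simp: same_cut_def)
  then have "\<rho> \<in> P" by (simp add: pstab_def)
  moreover have "inv \<rho> a = q" using \<rho> by (metis Gaut_inv_f_f)
  ultimately show ?thesis by blast
qed

lemma same_cut_transfer: "u \<in> same_cut \<Longrightarrow> \<forall>t\<in>C. (t < u \<longleftrightarrow> t < v) \<and> (u < t \<longleftrightarrow> v < t) \<Longrightarrow> v \<in> same_cut"
  by (auto simp: same_cut_def)

lemma same_cut_right: "u \<in> same_cut \<Longrightarrow> \<exists>v. u < v \<and> v \<in> same_cut"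
proof -
  assume u: "u \<in> same_cut"
  have uC: "u \<notin> C" using same_cut_notin[OF u] .
  show ?thesis
  proof (cases "{t\<in>C. u < t} = {}")
    case True
    have "\<forall>t\<in>C. (t < u \<longleftrightarrow> t < u + 1) \<and> (u < t \<longleftrightarrow> u + 1 < t)"
    proof
      fix t assume t: "t \<in> C"
      then have "t \<noteq> u" "\<not> u < t" using uC True by auto
      then show "(t < u \<longleftrightarrow> t < u + 1) \<and> (u < t \<longleftrightarrow> u + 1 < t)" by auto
    qed
    then show ?thesis using same_cut_transfer[OF u] by (intro exI[of _ "u + 1"]) auto
  next
    case False
    have fin: "finite {t\<in>C. u < t}" using finC by simp
    define m where "m = Min {t\<in>C. u < t}"
    have mt: "u < m" using Min_in[OF fin False] m_def by auto
    have mle: "m \<le> t" if "t \<in> C" "u < t" for t using Min_le[OF fin] that m_def by auto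
    have "\<forall>t\<in>C. (t < u \<longleftrightarrow> t < (u + m) / 2) \<and> (u < t \<longleftrightarrow> (u + m) / 2 < t)"
    proof
      fix t assume t: "t \<in> C"
      have "t \<noteq> u" using t uC by auto
      then show "(t < u \<longleftrightarrow> t < (u + m) / 2) \<and> (u < t \<longleftrightarrow> (u + m) / 2 < t)"
        using mle[OF t] mt by (cases "u < t") auto
    qed
    then show ?thesis using same_cut_transfer[OF u] mt by (intro exI[of _ "(u + m) / 2"]) auto
  qed
qed

lemma same_cut_left: "u \<in> same_cut \<Longrightarrow> \<exists>v. v < u \<and> v \<in> same_cut"
proof -
  assume u: "u \<in> same_cut"
  have uC: "u \<notin> C" using same_cut_notin[OF u] .
  show ?thesis
  proof (cases "{t\<in>C. t < u} = {}")
    case True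
    have "\<forall>t\<in>C. (t < u \<longleftrightarrow> t < u - 1) \<and> (u < t \<longleftrightarrow> u - 1 < t)"
    proof
      fix t assume t: "t \<in> C"
      then have "t \<noteq> u" "\<not> t < u" using uC True by auto
      then show "(t < u \<longleftrightarrow> t < u - 1) \<and> (u < t \<longleftrightarrow> u - 1 < t)" by auto
    qed
    then show ?thesis using same_cut_transfer[OF u] by (intro exI[of _ "u - 1"]) auto
  next
    case False
    have fin: "finite {t\<in>C. t < u}" using finC by simp
    define m where "m = Max {t\<in>C. t < u}"
    have mt: "m < u" using Max_in[OF fin False] m_def by auto
    have mle: "t \<le> m" if "t \<in> C" "t < u" for t using Max_ge[OF fin] that m_def by auto
    have "\<forall>t\<in>C. (t < u \<longleftrightarrow> t < (u + m) / 2) \<and> (u < t \<longleftrightarrow> (u + m) / 2 < t)"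
    proof
      fix t assume t: "t \<in> C"
      have "t \<noteq> u" using t uC by auto
      then show "(t < u \<longleftrightarrow> t < (u + m) / 2) \<and> (u < t \<longleftrightarrow> (u + m) / 2 < t)"
        using mle[OF t] mt by (cases "t < u") auto
    qed
    then show ?thesis using same_cut_transfer[OF u] mt by (intro exI[of _ "(u + m) / 2"]) auto
  qed
qed

lemma same_orbit_if:
  assumes \<rho>1: "\<rho>1 \<in> P" and \<rho>2: "\<rho>2 \<in> P"
    and rel: "\<forall>d\<in>D. (d < inv \<rho>1 a \<longleftrightarrow> d < inv \<rho>2 a) \<and> (d = inv \<rho>1 a \<longleftrightarrow> d = inv \<rho>2 a)"
  shows "act \<rho>2 y \<in> orbit P' act (act \<rho>1 y)"
proof -
  have G1: "\<rho>1 \<in> Gaut" and C1: "\<forall>c\<in>C. \<rho>1 c = c" using \<rho>1 by (auto simp: pstab_def)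
  have G2: "\<rho>2 \<in> Gaut" and C2: "\<forall>c\<in>C. \<rho>2 c = c" using \<rho>2 by (auto simp: pstab_def)
  have ta: "\<forall>d\<in>D. \<forall>c\<in>insert a C. sgn (\<rho>1 d - c) = sgn (\<rho>2 d - c)"
  proof (intro ballI)
    fix d c assume d: "d \<in> D" and c: "c \<in> insert a C"
    show "sgn (\<rho>1 d - c) = sgn (\<rho>2 d - c)"
    proof (cases "c = a")
      case True
      have r1: "d < inv \<rho>1 a \<longleftrightarrow> d < inv \<rho>2 a" and r2: "d = inv \<rho>1 a \<longleftrightarrow> d = inv \<rho>2 a"
        using rel d by auto
      have "sgn (d - inv \<rho>1 a) = sgn (d - inv \<rho>2 a)"
        unfolding sgn_real_def using r1 r2 by (auto simp: not_less_iff_gr_or_eq)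
      then show ?thesis using True sgn_diff_Gaut_inv[OF G1] sgn_diff_Gaut_inv[OF G2] by simp
    next
      case False
      then have cC: "c \<in> C" using c by simp
      have "sgn (\<rho>1 d - \<rho>1 c) = sgn (\<rho>2 d - \<rho>2 c)" using sgn_diff_Gaut[OF G1] sgn_diff_Gaut[OF G2] by simp
      then show ?thesis using C1 C2 cC by simp
    qed
  qed
  have tb: "\<forall>d\<in>D. \<forall>d'\<in>D. sgn (\<rho>1 d - \<rho>1 d') = sgn (\<rho>2 d - \<rho>2 d')"
    using sgn_diff_Gaut[OF G1] sgn_diff_Gaut[OF G2] by simp
  have finA: "finite (insert a C)" using finC by simp
  obtain \<pi> where \<pi>: "\<pi> \<in> P'" "\<forall>d\<in>D. \<pi> (\<rho>1 d) = \<rho>2 d"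
    using pstab_homogeneous[OF finA finD ta tb] by blast
  have \<pi>G: "\<pi> \<in> Gaut" using \<pi>(1) by (simp add: pstab_def)
  have "\<forall>d\<in>D. (inv \<rho>2 \<circ> (\<pi> \<circ> \<rho>1)) d = d"
    using \<pi>(2) G2 by simp
  moreover have "inv \<rho>2 \<circ> (\<pi> \<circ> \<rho>1) \<in> Gaut" using \<pi>G G1 G2 by simp
  ultimately have "inv \<rho>2 \<circ> (\<pi> \<circ> \<rho>1) \<in> pstab D" by (simp add: pstab_def)
  then have fx: "act (inv \<rho>2 \<circ> (\<pi> \<circ> \<rho>1)) y = y" using HD by (auto simp: stab_def)
  have "act \<rho>2 y = act \<rho>2 (act (inv \<rho>2 \<circ> (\<pi> \<circ> \<rho>1)) y)" using fx by simp
  also have "\<dots> = act (\<rho>2 \<circ> (inv \<rho>2 \<circ> (\<pi> \<circ> \<rho>1))) y"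
    using gact_comp[OF gact_Y G2 _ y, of "inv \<rho>2 \<circ> (\<pi> \<circ> \<rho>1)"] \<pi>G G1 G2 by simp
  also have "\<rho>2 \<circ> (inv \<rho>2 \<circ> (\<pi> \<circ> \<rho>1)) = \<pi> \<circ> \<rho>1" using G2 by (simp add: fun_eq_iff)
  also have "act (\<pi> \<circ> \<rho>1) y = act \<pi> (act \<rho>1 y)" using gact_comp[OF gact_Y \<pi>G G1 y] .
  finally show ?thesis using \<pi>(1) by (auto simp: orbit_def)
qed

lemma same_orbit_only_if:
  assumes \<rho>1: "\<rho>1 \<in> P" and \<rho>2: "\<rho>2 \<in> P" and o: "act \<rho>2 y \<in> orbit P' act (act \<rho>1 y)"
  shows "\<forall>d\<in>D. (d < inv \<rho>1 a \<longleftrightarrow> d < inv \<rho>2 a) \<and> (d = inv \<rho>1 a \<longleftrightarrow> d = inv \<rho>2 a)"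
proof -
  have G1: "\<rho>1 \<in> Gaut" using \<rho>1 by (auto simp: pstab_def)
  have G2: "\<rho>2 \<in> Gaut" using \<rho>2 by (auto simp: pstab_def)
  obtain \<pi> where \<pi>: "\<pi> \<in> P'" "act \<rho>2 y = act \<pi> (act \<rho>1 y)" using o by (auto simp: orbit_def)
  have \<pi>G: "\<pi> \<in> Gaut" and \<pi>a: "\<pi> a = a" using \<pi>(1) by (auto simp: pstab_def)
  have \<pi>P: "\<pi> \<in> P" using \<pi>(1) P'_subset_P by auto
  define \<kappa> where "\<kappa> = inv \<rho>2 \<circ> (\<pi> \<circ> \<rho>1)"
  have kP: "\<kappa> \<in> P" unfolding \<kappa>_def
    using subgrp_comp[OF subgrp_pstab subgrp_inv[OF subgrp_pstab \<rho>2] subgrp_comp[OF subgrp_pstab \<pi>P \<rho>1]] .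
  have "act \<kappa> y = act (inv \<rho>2) (act \<pi> (act \<rho>1 y))"
    unfolding \<kappa>_def using gact_comp[OF gact_Y] G1 G2 \<pi>G y gact_closed[OF gact_Y] by simp
  also have "\<dots> = y" using \<pi>(2) gact_inv_act[OF gact_Y G2 y] by simp
  finally have "\<kappa> \<in> pstab D" using kP HD by (auto simp: stab_def)
  then have "\<forall>d\<in>D. inv \<rho>2 (\<pi> (\<rho>1 d)) = d" by (simp add: pstab_def \<kappa>_def)
  then have e: "\<forall>d\<in>D. \<pi> (\<rho>1 d) = \<rho>2 d" using G2 by (metis Gaut_f_inv_f)
  show ?thesis
  proof
    fix d assume d: "d \<in> D"
    have "sgn (\<rho>1 d - a) = sgn (\<rho>2 d - a)"
      using sgn_diff_Gaut[OF \<pi>G, of "\<rho>1 d" a] e d \<pi>a by simp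
    then have "sgn (d - inv \<rho>1 a) = sgn (d - inv \<rho>2 a)"
      using sgn_diff_Gaut_inv[OF G1] sgn_diff_Gaut_inv[OF G2] by simp
    moreover have "x < y \<longleftrightarrow> sgn (x - y) = -1" "x = y \<longleftrightarrow> sgn (x - y) = 0" for x y :: real
      by (auto simp: sgn_real_def)
    ultimately show "(d < inv \<rho>1 a \<longleftrightarrow> d < inv \<rho>2 a) \<and> (d = inv \<rho>1 a \<longleftrightarrow> d = inv \<rho>2 a)"
      by metis
  qed
qed

definition base_orbit where "base_orbit = orbit P act y"

definition fibre where "fibre = {Q \<in> orbits P' Y act. orbit P act (SOME z. z \<in> Q) = base_orbit}"

definition orbit_mover where "orbit_mover Q = (SOME \<rho>. \<rho> \<in> P \<and> (SOME z. z \<in> Q) = act \<rho> y)"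

definition orbit_point where "orbit_point Q = inv (orbit_mover Q) a"

definition codes :: "(real + real option) set" where
  "codes = Inl ` D_cut \<union> Inr ` (insert None (Some ` D_cut))"

lemma subgrp_P': "subgrp P'" by (rule subgrp_pstab)
lemma subgrp_P: "subgrp P" by (rule subgrp_pstab)

lemma fibre_mover:
  assumes Q: "Q \<in> fibre"
  shows "orbit_mover Q \<in> P" "(SOME z. z \<in> Q) = act (orbit_mover Q) y" "Q = orbit P' act (act (orbit_mover Q) y)"
proof -
  have QO: "Q \<in> orbits P' Y act" and eq: "orbit P act (SOME z. z \<in> Q) = base_orbit" using Q by (auto simp: fibre_def)
  have r: "(SOME z. z \<in> Q) \<in> Y" "Q = orbit P' act (SOME z. z \<in> Q)"
    using some_in_orbit[OF subgrp_P' gact_Y QO] by auto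
  have "(SOME z. z \<in> Q) \<in> orbit P act (SOME z. z \<in> Q)" using orbit_self[OF subgrp_P gact_Y r(1)] .
  then have "(SOME z. z \<in> Q) \<in> orbit P act y" using eq by (simp add: base_orbit_def)
  then have ex: "\<exists>\<rho>. \<rho> \<in> P \<and> (SOME z. z \<in> Q) = act \<rho> y" by (auto simp: orbit_def)
  have "orbit_mover Q \<in> P \<and> (SOME z. z \<in> Q) = act (orbit_mover Q) y"
    unfolding orbit_mover_def by (rule someI_ex[OF ex])
  then show "orbit_mover Q \<in> P" "(SOME z. z \<in> Q) = act (orbit_mover Q) y" by auto
  then show "Q = orbit P' act (act (orbit_mover Q) y)" using r(2) by simp
qed

lemma orbit_in_fibre:
  assumes \<rho>: "\<rho> \<in> P"
  shows "orbit P' act (act \<rho> y) \<in> fibre"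
proof -
  have \<rho>G: "\<rho> \<in> Gaut" using \<rho> by (simp add: pstab_def)
  have z: "act \<rho> y \<in> Y" using gact_closed[OF gact_Y \<rho>G y] .
  define Q where "Q = orbit P' act (act \<rho> y)"
  have QO: "Q \<in> orbits P' Y act" using z by (simp add: orbits_def Q_def)
  have "(SOME z. z \<in> Q) \<in> Q" using some_in_orbit[OF subgrp_P' gact_Y QO] by simp
  then have "(SOME z. z \<in> Q) \<in> orbit P act (act \<rho> y)" using P'_subset_P by (auto simp: Q_def orbit_def)
  then have "orbit P act (SOME z. z \<in> Q) = orbit P act (act \<rho> y)" using orbit_eq[OF subgrp_P gact_Y z] by simp
  also have "\<dots> = base_orbit" using orbit_move[OF subgrp_P gact_Y y \<rho>] by (simp add: base_orbit_def)
  finally show ?thesis using QO by (simp add: fibre_def Q_def)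
qed

lemma orbit_point_same_cut: "Q \<in> fibre \<Longrightarrow> orbit_point Q \<in> same_cut"
  using inv_a_same_cut fibre_mover(1) by (simp add: orbit_point_def)

lemma orbit_point_rel:
  assumes Q: "Q \<in> fibre" and \<rho>: "\<rho> \<in> P" and m: "act \<rho> y \<in> Q"
  shows "\<forall>d\<in>D. (d < inv \<rho> a \<longleftrightarrow> d < orbit_point Q) \<and> (d = inv \<rho> a \<longleftrightarrow> d = orbit_point Q)"
  using same_orbit_only_if[OF fibre_mover(1)[OF Q] \<rho>] m fibre_mover(3)[OF Q] by (auto simp: orbit_point_def)

lemma next_D_gap:
  assumes q: "q \<in> same_cut" "q \<notin> D" and q': "q' \<in> same_cut" "q' \<notin> D" and n: "next_D q = next_D q'"
    and d: "d \<in> D" "q < d" "d < q'"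
  shows False
proof -
  have "d \<in> same_cut" using same_cut_convex[OF q(1) q'(1)] d by simp
  then have dE: "d \<in> D_cut" using d(1) by (simp add: D_cut_def)
  have fin: "finite {e\<in>D_cut. q < e}" using finite_D_cut by simp
  have ne: "{e\<in>D_cut. q < e} \<noteq> {}" using dE d(2) by auto
  then have nq: "next_D q = Some (Min {e\<in>D_cut. q < e})" by (simp add: next_D_def)
  have mle: "Min {e\<in>D_cut. q < e} \<le> d" using Min_le[OF fin] dE d(2) by simp
  have ne': "{e\<in>D_cut. q' < e} \<noteq> {}" using n nq by (auto simp: next_D_def split: if_splits)
  have fin': "finite {e\<in>D_cut. q' < e}" using finite_D_cut by simp
  have "next_D q' = Some (Min {e\<in>D_cut. q' < e})" using ne' by (simp add: next_D_def)
  then have "Min {e\<in>D_cut. q' < e} = Min {e\<in>D_cut. q < e}" using n nq by simp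
  moreover have "q' < Min {e\<in>D_cut. q' < e}" using Min_in[OF fin' ne'] by simp
  ultimately show False using mle d(3) by simp
qed

lemma cut_code_eqI:
  assumes "q \<in> same_cut" "q' \<in> same_cut" and r: "\<forall>d\<in>D. (d < q \<longleftrightarrow> d < q') \<and> (d = q \<longleftrightarrow> d = q')"
  shows "cut_code q = cut_code q'"
proof (cases "q \<in> D")
  case True
  then have "q = q'" using r by blast
  then show ?thesis by simp
next
  case False
  then have nq': "q' \<notin> D" using r by blast
  have "\<forall>e\<in>D_cut. (q < e \<longleftrightarrow> q' < e)"
  proof
    fix e assume "e \<in> D_cut"
    then have e: "e \<in> D" by (simp add: D_cut_def)
    have ne: "e \<noteq> q" "e \<noteq> q'" using e False nq' by auto
    have "e < q \<longleftrightarrow> e < q'" using r e by blast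
    then show "q < e \<longleftrightarrow> q' < e" using ne by linarith
  qed
  then have "{e\<in>D_cut. q < e} = {e\<in>D_cut. q' < e}" by blast
  then show ?thesis using False nq' by (simp add: cut_code_def next_D_def)
qed

lemma cut_code_eqD:
  assumes q: "q \<in> same_cut" and q': "q' \<in> same_cut" and t: "cut_code q = cut_code q'"
  shows "\<forall>d\<in>D. (d < q \<longleftrightarrow> d < q') \<and> (d = q \<longleftrightarrow> d = q')"
proof (cases "q \<in> D")
  case True
  then have tq: "cut_code q = Inl q" by (simp add: cut_code_def)
  have "q' \<in> D"
  proof (rule ccontr)
    assume "q' \<notin> D"
    then have "cut_code q' = Inr (next_D q')" by (simp add: cut_code_def)
    then show False using t tq by simp
  qed
  then have "cut_code q' = Inl q'" by (simp add: cut_code_def)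
  then have "q' = q" using t tq by simp
  then show ?thesis by simp
next
  case False
  then have tq: "cut_code q = Inr (next_D q)" by (simp add: cut_code_def)
  have nq': "q' \<notin> D"
  proof
    assume "q' \<in> D"
    then have "cut_code q' = Inl q'" by (simp add: cut_code_def)
    then show False using t tq by simp
  qed
  then have "cut_code q' = Inr (next_D q')" by (simp add: cut_code_def)
  then have n: "next_D q = next_D q'" using t tq by simp
  show ?thesis
  proof
    fix d assume d: "d \<in> D"
    have ne: "d \<noteq> q" "d \<noteq> q'" using d False nq' by auto
    have "\<not> (q < d \<and> d < q')" using next_D_gap[OF q False q' nq' n d] by blast
    moreover have "\<not> (q' < d \<and> d < q)" using next_D_gap[OF q' nq' q False n[symmetric] d] by blast
    ultimately have "d < q \<longleftrightarrow> d < q'" using ne by linarith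
    then show "(d < q \<longleftrightarrow> d < q') \<and> (d = q \<longleftrightarrow> d = q')" using ne by simp
  qed
qed

lemma cut_code_in_codes: "q \<in> same_cut \<Longrightarrow> cut_code q \<in> codes"
proof -
  assume q: "q \<in> same_cut"
  show ?thesis
  proof (cases "q \<in> D")
    case True then show ?thesis using q by (simp add: cut_code_def codes_def D_cut_def)
  next
    case False
    have "next_D q \<in> insert None (Some ` D_cut)"
    proof (cases "{e\<in>D_cut. q < e} = {}")
      case True then show ?thesis by (simp add: next_D_def)
    next
      case ne: False
      have "Min {e\<in>D_cut. q < e} \<in> D_cut" using Min_in[OF _ ne] finite_D_cut by simp
      then show ?thesis using ne by (simp add: next_D_def)
    qed
    then have "Inr (next_D q) \<in> Inr ` (insert None (Some ` D_cut))" by (rule imageI)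
    then have "Inr (next_D q) \<in> codes" unfolding codes_def by (rule UnI2)
    moreover have "cut_code q = Inr (next_D q)" using False by (simp add: cut_code_def)
    ultimately show ?thesis by simp
  qed
qed

lemma cut_code_top_gap: "\<exists>q\<in>same_cut. cut_code q = Inr None"
proof -
  define M where "M = Max (insert a D_cut)"
  have MI: "M \<in> same_cut" using Max_in[of "insert a D_cut"] finite_D_cut a_same_cut by (auto simp: M_def D_cut_def)
  obtain v where v: "M < v" "v \<in> same_cut" using same_cut_right[OF MI] by blast
  obtain q where q: "M < q" "q < v" "q \<notin> D" using exists_between_notin[OF v(1) finD] by blast
  have qI: "q \<in> same_cut" using same_cut_convex[OF MI v(2)] q by simp
  have "{e\<in>D_cut. q < e} = {}"
  proof -
    have "e \<le> M" if "e \<in> D_cut" for e using Max_ge[of "insert a D_cut" e] finite_D_cut that by (simp add: M_def)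
    then show ?thesis using q(1) by force
  qed
  then have "cut_code q = Inr None" using q(3) by (simp add: cut_code_def next_D_def)
  then show ?thesis using qI by blast
qed

lemma cut_code_gap_below:
  assumes m: "m \<in> D_cut"
  shows "\<exists>q\<in>same_cut. cut_code q = Inr (Some m)"
proof -
  have mI: "m \<in> same_cut" using m by (simp add: D_cut_def)
  define L where "L = {e\<in>D_cut. e < m}"
  have finL: "finite L" using finite_D_cut by (simp add: L_def)
  obtain x where x: "x < m" "x \<in> same_cut" "\<forall>e\<in>L. e \<le> x"
  proof (cases "L = {}")
    case True
    obtain v where "v < m" "v \<in> same_cut" using same_cut_left[OF mI] by blast
    then show ?thesis using that True by blast
  next
    case False
    have "Max L \<in> L" using Max_in[OF finL False] .
    then have "Max L < m" "Max L \<in> same_cut" by (auto simp: L_def D_cut_def)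
    moreover have "\<forall>e\<in>L. e \<le> Max L" using Max_ge[OF finL] by blast
    ultimately show ?thesis using that by blast
  qed
  obtain q where q: "x < q" "q < m" "q \<notin> D" using exists_between_notin[OF x(1) finD] by blast
  have qI: "q \<in> same_cut" using same_cut_convex[OF x(2) mI] q by simp
  have fin: "finite {e\<in>D_cut. q < e}" using finite_D_cut by simp
  have mem: "m \<in> {e\<in>D_cut. q < e}" using m q(2) by simp
  have "Min {e\<in>D_cut. q < e} = m"
  proof (rule Min_eqI[OF fin _ mem])
    fix e assume e: "e \<in> {e\<in>D_cut. q < e}"
    show "m \<le> e"
    proof (rule ccontr)
      assume "\<not> m \<le> e"
      then have "e \<in> L" using e by (simp add: L_def)
      then have "e \<le> x" using x(3) by blast
      then show False using e q(1) by simp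
    qed
  qed
  then have "cut_code q = Inr (Some m)" using q(3) mem by (auto simp: cut_code_def next_D_def)
  then show ?thesis using qI by blast
qed

lemma cut_code_surj:
  assumes "t \<in> codes"
  shows "\<exists>q\<in>same_cut. cut_code q = t"
proof -
  have "\<exists>q\<in>same_cut. cut_code q = Inl e" if "e \<in> D_cut" for e
    using that by (auto simp: cut_code_def D_cut_def)
  then show ?thesis using assms cut_code_top_gap cut_code_gap_below by (auto simp: codes_def)
qed

definition orbit_code where "orbit_code Q = cut_code (orbit_point Q)"

lemma bij_orbit_code: "bij_betw orbit_code fibre codes"
  unfolding bij_betw_def
proof (intro conjI)
  show "inj_on orbit_code fibre"
  proof (rule inj_onI)
    fix Q1 Q2 assume Q1: "Q1 \<in> fibre" and Q2: "Q2 \<in> fibre" and e: "orbit_code Q1 = orbit_code Q2"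
    have r: "\<forall>d\<in>D. (d < orbit_point Q1 \<longleftrightarrow> d < orbit_point Q2) \<and> (d = orbit_point Q1 \<longleftrightarrow> d = orbit_point Q2)"
      using cut_code_eqD[OF orbit_point_same_cut[OF Q1] orbit_point_same_cut[OF Q2]] e by (simp add: orbit_code_def)
    have "act (orbit_mover Q2) y \<in> orbit P' act (act (orbit_mover Q1) y)"
      using same_orbit_if[OF fibre_mover(1)[OF Q1] fibre_mover(1)[OF Q2]] r by (simp add: orbit_point_def)
    then have "orbit P' act (act (orbit_mover Q2) y) = orbit P' act (act (orbit_mover Q1) y)"
      using orbit_eq[OF subgrp_P' gact_Y gact_closed[OF gact_Y _ y]] fibre_mover(1)[OF Q1] by (simp add: pstab_def)
    then show "Q1 = Q2" using fibre_mover(3)[OF Q1] fibre_mover(3)[OF Q2] by simp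
  qed
  show "orbit_code ` fibre = codes"
  proof
    show "orbit_code ` fibre \<subseteq> codes" using cut_code_in_codes orbit_point_same_cut by (auto simp: orbit_code_def)
    show "codes \<subseteq> orbit_code ` fibre"
    proof
      fix t assume "t \<in> codes"
      then obtain q where q: "q \<in> same_cut" "cut_code q = t" using cut_code_surj by blast
      obtain \<rho> where \<rho>: "\<rho> \<in> P" "inv \<rho> a = q" using same_cut_realize[OF q(1)] by blast
      define Q where "Q = orbit P' act (act \<rho> y)"
      have QS: "Q \<in> fibre" using orbit_in_fibre[OF \<rho>(1)] by (simp add: Q_def)
      have \<rho>G: "\<rho> \<in> Gaut" using \<rho>(1) by (simp add: pstab_def)
      have "act \<rho> y \<in> Q" using orbit_self[OF subgrp_P' gact_Y gact_closed[OF gact_Y \<rho>G y]] by (simp add: Q_def)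
      then have "\<forall>d\<in>D. (d < q \<longleftrightarrow> d < orbit_point Q) \<and> (d = q \<longleftrightarrow> d = orbit_point Q)"
        using orbit_point_rel[OF QS \<rho>(1)] \<rho>(2) by simp
      then have "cut_code q = orbit_code Q" using cut_code_eqI[OF q(1) orbit_point_same_cut[OF QS]] by (simp add: orbit_code_def)
      then show "t \<in> orbit_code ` fibre" using QS q(2) by blast
    qed
  qed
qed

lemma sum_code_weight: "(\<Sum>t\<in>codes. (code_weight t :: 'k::field)) = 1"
proof -
  have disj: "Inl ` D_cut \<inter> Inr ` (insert None (Some ` D_cut)) = {}" by auto
  have f1: "finite (Inl ` D_cut :: (real + real option) set)" using finite_D_cut by simp
  have f2: "finite (Inr ` (insert None (Some ` D_cut)) :: (real + real option) set)" using finite_D_cut by simp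
  have s1: "(\<Sum>t\<in>Inl ` D_cut. (code_weight t :: 'k)) = - of_nat (card D_cut)"
    by (simp add: sum.reindex code_weight_def)
  have "(\<Sum>t\<in>Inr ` (insert None (Some ` D_cut)). (code_weight t :: 'k)) = of_nat (card (insert None (Some ` D_cut)))"
  proof -
    have "(\<Sum>t\<in>Inr ` (insert None (Some ` D_cut)). (code_weight t :: 'k)) = (\<Sum>x\<in>insert None (Some ` D_cut). (code_weight (Inr x) :: 'k))"
      by (rule sum.reindex_cong[of Inr]) auto
    also have "\<dots> = (\<Sum>x\<in>insert None (Some ` D_cut). 1)" by (simp add: code_weight_def)
    finally show ?thesis by simp
  qed
  also have "card (insert None (Some ` D_cut)) = card D_cut + 1"
    using finite_D_cut by (simp add: card_image card_insert_if)
  finally have s2: "(\<Sum>t\<in>Inr ` (insert None (Some ` D_cut)). (code_weight t :: 'k)) = of_nat (card D_cut) + 1" by simp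
  have "(\<Sum>t\<in>codes. (code_weight t :: 'k)) = (\<Sum>t\<in>Inl ` D_cut. (code_weight t :: 'k)) + (\<Sum>t\<in>Inr ` (insert None (Some ` D_cut)). code_weight t)"
    unfolding codes_def by (rule sum.union_disjoint[OF f1 f2 disj])
  also have "\<dots> = - of_nat (card D_cut) + (of_nat (card D_cut) + 1)" using s1 s2 by argo
  also have "\<dots> = (1::'k)" by (simp add: algebra_simps)
  finally show ?thesis .
qed

lemma subset_image_D: "\<rho> \<in> P \<Longrightarrow> C \<subseteq> \<rho> ` D"
proof
  fix c assume \<rho>: "\<rho> \<in> P" and c: "c \<in> C"
  then have "\<rho> c = c" by (simp add: pstab_def)
  moreover have "c \<in> D" using c CD by auto
  ultimately show "c \<in> \<rho> ` D" by (metis image_eqI)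
qed

lemma orbit_term_fibre:
  fixes \<phi> :: "'y \<Rightarrow> 'k::field"
  assumes phi: "\<forall>\<rho>\<in>P. \<forall>z\<in>Y. \<phi> (act \<rho> z) = \<phi> z" and Q: "Q \<in> fibre"
  shows "orbit_term P' act \<phi> Q = \<phi> y * (-1) ^ card D * (-1) ^ card C * code_weight (orbit_code Q)"
proof -
  define \<rho> where "\<rho> = orbit_mover Q"
  have \<rho>P: "\<rho> \<in> P" and rep: "(SOME z. z \<in> Q) = act \<rho> y" using fibre_mover[OF Q] by (auto simp: \<rho>_def)
  have \<rho>G: "\<rho> \<in> Gaut" using \<rho>P by (simp add: pstab_def)
  have ph: "\<phi> (act \<rho> y) = \<phi> y" using phi \<rho>P y by blast
  have "stab P' act (act \<rho> y) = P' \<inter> stab P act (act \<rho> y)" using stab_subset_eq_inter[OF P'_subset_P] .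
  also have "\<dots> = P' \<inter> pstab (\<rho> ` D)" using stab_pstab_act[OF gact_Y y \<rho>P HD CD] by simp
  also have "\<dots> = pstab (insert a C \<union> \<rho> ` D)" by (simp add: Int_pstab)
  also have "insert a C \<union> \<rho> ` D = insert a (\<rho> ` D)" using subset_image_D[OF \<rho>P] by auto
  finally have st: "stab P' act (act \<rho> y) = pstab (insert a (\<rho> ` D))" .
  have fx: "fixpts (stab P' act (act \<rho> y)) = insert a (\<rho> ` D)"
    using st fixpts_pstab[of "insert a (\<rho> ` D)"] finD by simp
  have fxP': "fixpts P' = insert a C" using fixpts_pstab[of "insert a C"] finC by simp
  have cP': "card (fixpts P') = Suc (card C)" using fxP' finC aC by simp
  have aiff: "a \<in> \<rho> ` D \<longleftrightarrow> orbit_point Q \<in> D"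
  proof
    assume "a \<in> \<rho> ` D"
    then obtain d where d: "d \<in> D" "\<rho> d = a" by auto
    then have "inv \<rho> a = d" using \<rho>G by (metis Gaut_inv_f_f)
    then show "orbit_point Q \<in> D" using d(1) by (simp add: orbit_point_def \<rho>_def[symmetric])
  next
    assume "orbit_point Q \<in> D"
    then have "\<rho> (inv \<rho> a) \<in> \<rho> ` D" by (simp add: orbit_point_def \<rho>_def[symmetric])
    then show "a \<in> \<rho> ` D" using \<rho>G by simp
  qed
  have cD: "card (\<rho> ` D) = card D" using card_image_Gaut[OF \<rho>G] .
  have cfx: "card (fixpts (stab P' act (act \<rho> y))) = (if orbit_point Q \<in> D then card D else Suc (card D))"
    using fx cD aiff finD by (simp add: card_insert_if)
  have w: "code_weight (orbit_code Q) = (if orbit_point Q \<in> D then -1 else (1::'k))" by (simp add: code_weight_def orbit_code_def cut_code_def)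
  show ?thesis
    unfolding orbit_term_def rep ph cfx cP' w by (cases "orbit_point Q \<in> D") (simp_all add: algebra_simps)
qed

lemma orbit_term_base:
  fixes \<phi> :: "'y \<Rightarrow> 'k::field"
  assumes phi: "\<forall>\<rho>\<in>P. \<forall>z\<in>Y. \<phi> (act \<rho> z) = \<phi> z"
  shows "orbit_term P act \<phi> base_orbit = \<phi> y * (-1) ^ card D * (-1) ^ card C"
proof -
  have Ob: "base_orbit \<in> orbits P Y act" using y by (simp add: base_orbit_def orbits_def)
  have "(SOME z. z \<in> base_orbit) \<in> base_orbit" using some_in_orbit[OF subgrp_P gact_Y Ob] by simp
  then obtain \<rho> where \<rho>P: "\<rho> \<in> P" and rep: "(SOME z. z \<in> base_orbit) = act \<rho> y"
    by (auto simp: base_orbit_def orbit_def)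
  have \<rho>G: "\<rho> \<in> Gaut" using \<rho>P by (simp add: pstab_def)
  have ph: "\<phi> (act \<rho> y) = \<phi> y" using phi \<rho>P y by blast
  have "fixpts (stab P act (act \<rho> y)) = \<rho> ` D"
    using stab_pstab_act[OF gact_Y y \<rho>P HD CD] fixpts_pstab[of "\<rho> ` D"] finD by simp
  then have c1: "card (fixpts (stab P act (act \<rho> y))) = card D" using card_image_Gaut[OF \<rho>G] by simp
  have c2: "card (fixpts P) = card C" using fixpts_pstab[OF finC] by simp
  show ?thesis unfolding orbit_term_def rep ph c1 c2 by simp
qed

lemma sum_fibre:
  fixes \<phi> :: "'y \<Rightarrow> 'k::field"
  assumes phi: "\<forall>\<rho>\<in>P. \<forall>z\<in>Y. \<phi> (act \<rho> z) = \<phi> z"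
  shows "(\<Sum>Q\<in>fibre. orbit_term P' act \<phi> Q) = orbit_term P act \<phi> base_orbit"
proof -
  have "(\<Sum>Q\<in>fibre. orbit_term P' act \<phi> Q) = (\<Sum>Q\<in>fibre. (\<phi> y * (-1) ^ card D * (-1) ^ card C) * code_weight (orbit_code Q))"
    using orbit_term_fibre[OF phi] by (intro sum.cong) auto
  also have "\<dots> = (\<phi> y * (-1) ^ card D * (-1) ^ card C) * (\<Sum>Q\<in>fibre. code_weight (orbit_code Q))"
    by (simp add: sum_distrib_left)
  also have "\<dots> = (\<phi> y * (-1) ^ card D * (-1) ^ card C)"
  proof -
    have "(\<Sum>Q\<in>fibre. (code_weight (orbit_code Q) :: 'k)) = (\<Sum>t\<in>codes. code_weight t)"
      by (rule sum.reindex_bij_betw[OF bij_orbit_code])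
    also have "\<dots> = 1" by (rule sum_code_weight)
    finally show ?thesis by simp
  qed
  finally show ?thesis using orbit_term_base[OF phi] by simp
qed

end

lemma orbit_sum_insert:
  fixes \<phi> :: "'y \<Rightarrow> 'k::field"
  assumes u: "uset Gaut Y act" and C: "finite C" and aC: "a \<notin> C"
    and phi: "\<forall>\<rho>\<in>pstab C. \<forall>z\<in>Y. \<phi> (act \<rho> z) = \<phi> z"
  shows "orbit_sum (pstab C) Y act \<phi> = orbit_sum (pstab (insert a C)) Y act \<phi>"
proof -
  have g: "gact Y act" using u by (rule uset_gact)
  define P where "P = pstab C"
  define P' where "P' = pstab (insert a C)"
  have P: "subgrp P" and P': "subgrp P'" by (simp_all add: P_def P'_def subgrp_pstab)
  have finP: "finite (orbits P Y act)" using finite_orbits_pstab[OF u C] by (simp add: P_def)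
  have finP': "finite (orbits P' Y act)" using finite_orbits_pstab[OF u] C by (simp add: P'_def)
  define gq where "gq Q = orbit P act (SOME z. z \<in> Q)" for Q
  have img: "gq ` orbits P' Y act \<subseteq> orbits P Y act"
    using some_in_orbit(2)[OF P' g] by (auto simp: gq_def orbits_def)
  have "orbit_sum P' Y act \<phi> = (\<Sum>Ob\<in>orbits P Y act. \<Sum>Q\<in>{Q. Q \<in> orbits P' Y act \<and> gq Q = Ob}. orbit_term P' act \<phi> Q)"
    unfolding orbit_sum_def by (rule sum.group[OF finP' finP img, symmetric])
  also have "\<dots> = (\<Sum>Ob\<in>orbits P Y act. orbit_term P act \<phi> Ob)"
  proof (rule sum.cong[OF refl])
    fix Ob assume Ob: "Ob \<in> orbits P Y act"
    define y where "y = (SOME z. z \<in> Ob)"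
    have y: "y \<in> Y" "Ob = orbit P act y" using some_in_orbit[OF P g Ob] by (auto simp: y_def)
    define D where "D = fixpts (stab (pstab C) act y)"
    have HD: "stab (pstab C) act y = pstab D" "finite D" "C \<subseteq> D"
      using stab_pstab_eq_pstab_fixpts[OF u y(1) C] by (simp_all add: D_def)
    interpret os: orbit_refinement Y act C a y D
      by unfold_locales (simp_all add: u C aC y HD)
    have "{Q. Q \<in> orbits P' Y act \<and> gq Q = Ob} = os.fibre"
      by (auto simp: os.fibre_def os.base_orbit_def gq_def P'_def P_def y(2))
    then have "(\<Sum>Q\<in>{Q. Q \<in> orbits P' Y act \<and> gq Q = Ob}. orbit_term P' act \<phi> Q) = orbit_term P act \<phi> os.base_orbit"
      using os.sum_fibre[OF phi] by (simp add: P'_def P_def)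
    also have "os.base_orbit = Ob" by (simp add: os.base_orbit_def y(2) P_def)
    finally show "(\<Sum>Q\<in>{Q. Q \<in> orbits P' Y act \<and> gq Q = Ob}. orbit_term P' act \<phi> Q) = orbit_term P act \<phi> Ob" .
  qed
  also have "\<dots> = orbit_sum P Y act \<phi>" by (simp add: orbit_sum_def)
  finally show ?thesis by (simp add: P_def P'_def)
qed

lemma orbit_sum_union:
  fixes \<phi> :: "'y \<Rightarrow> 'k::field"
  assumes u: "uset Gaut Y act" and C: "finite C"
    and phi: "\<forall>\<rho>\<in>pstab C. \<forall>z\<in>Y. \<phi> (act \<rho> z) = \<phi> z"
  shows "finite F \<Longrightarrow> orbit_sum (pstab C) Y act \<phi> = orbit_sum (pstab (C \<union> F)) Y act \<phi>"
proof (induction F rule: finite_induct)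
  case empty then show ?case by simp
next
  case (insert a F)
  show ?case
  proof (cases "a \<in> C")
    case True
    then have "C \<union> insert a F = C \<union> F" by auto
    then show ?thesis using insert.IH by simp
  next
    case False
    then have aCF: "a \<notin> C \<union> F" using insert.hyps(2) by simp
    have phi': "\<forall>\<rho>\<in>pstab (C \<union> F). \<forall>z\<in>Y. \<phi> (act \<rho> z) = \<phi> z"
      using phi pstab_antimono[of C "C \<union> F"] by blast
    have "orbit_sum (pstab (C \<union> F)) Y act \<phi> = orbit_sum (pstab (insert a (C \<union> F))) Y act \<phi>"
      using orbit_sum_insert[OF u _ aCF phi'] C insert.hyps(1) by simp
    then show ?thesis using insert.IH by simp
  qed
qed

lemma orbit_sum_mono:
  fixes \<phi> :: "'y \<Rightarrow> 'k::field"
  assumes u: "uset Gaut Y act" and C: "finite C" and C': "finite C'" "C \<subseteq> C'"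
    and phi: "\<forall>\<rho>\<in>pstab C. \<forall>z\<in>Y. \<phi> (act \<rho> z) = \<phi> z"
  shows "orbit_sum (pstab C) Y act \<phi> = orbit_sum (pstab C') Y act \<phi>"
proof -
  have "orbit_sum (pstab C) Y act \<phi> = orbit_sum (pstab (C \<union> (C' - C))) Y act \<phi>"
    using orbit_sum_union[OF u C phi] C' by simp
  moreover have "C \<union> (C' - C) = C'" using C'(2) by auto
  ultimately show ?thesis by simp
qed

lemma orbit_sum_indep:
  fixes \<phi> :: "'y \<Rightarrow> 'k::field"
  assumes u: "uset Gaut Y act" and P: "subgrp P" and P': "subgrp P'"
    and F: "finite F" "pstab F \<subseteq> P" "pstab F \<subseteq> P'"
    and phiP: "\<forall>\<rho>\<in>P. \<forall>z\<in>Y. \<phi> (act \<rho> z) = \<phi> z"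
    and phiP': "\<forall>\<rho>\<in>P'. \<forall>z\<in>Y. \<phi> (act \<rho> z) = \<phi> z"
  shows "orbit_sum P Y act \<phi> = orbit_sum P' Y act \<phi>"
proof -
  have e1: "P = pstab (fixpts P)" "fixpts P \<subseteq> F" "finite (fixpts P)" using subgrp_eq_pstab_fixpts[OF P F(1,2)] by auto
  have e2: "P' = pstab (fixpts P')" "fixpts P' \<subseteq> F" "finite (fixpts P')" using subgrp_eq_pstab_fixpts[OF P' F(1,3)] by auto
  have "orbit_sum (pstab (fixpts P)) Y act \<phi> = orbit_sum (pstab F) Y act \<phi>"
    using orbit_sum_mono[OF u e1(3) F(1) e1(2)] phiP e1(1) by simp
  moreover have "orbit_sum (pstab (fixpts P')) Y act \<phi> = orbit_sum (pstab F) Y act \<phi>"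
    using orbit_sum_mono[OF u e2(3) F(1) e2(2)] phiP' e2(1) by simp
  ultimately show ?thesis using e1(1) e2(1) by simp
qed

section \<open>Translation invariance of the integral\<close>

definition conjg :: "(real \<Rightarrow> real) \<Rightarrow> (real \<Rightarrow> real) \<Rightarrow> (real \<Rightarrow> real)" where
  "conjg \<tau> \<kappa> = \<tau> \<circ> \<kappa> \<circ> inv \<tau>"

lemma fixpts_conjg_image:
  assumes \<tau>: "\<tau> \<in> Gaut" and K: "K \<subseteq> Gaut"
  shows "fixpts (conjg \<tau> ` K) = \<tau> ` fixpts K"
proof
  show "fixpts (conjg \<tau> ` K) \<subseteq> \<tau> ` fixpts K"
  proof
    fix t assume t: "t \<in> fixpts (conjg \<tau> ` K)"
    have "\<forall>\<kappa>\<in>K. \<kappa> (inv \<tau> t) = inv \<tau> t"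
    proof
      fix \<kappa> assume "\<kappa> \<in> K"
      then have "\<tau> (\<kappa> (inv \<tau> t)) = t" using t by (auto simp: fixpts_def conjg_def)
      then show "\<kappa> (inv \<tau> t) = inv \<tau> t" using \<tau> by (metis Gaut_inv_f_f)
    qed
    then have "inv \<tau> t \<in> fixpts K" by (simp add: fixpts_def)
    moreover have "t = \<tau> (inv \<tau> t)" using \<tau> by simp
    ultimately show "t \<in> \<tau> ` fixpts K" by blast
  qed
  show "\<tau> ` fixpts K \<subseteq> fixpts (conjg \<tau> ` K)"
    using \<tau> by (auto simp: fixpts_def conjg_def)
qed

lemma card_fixpts_conjg_image:
  assumes \<tau>: "\<tau> \<in> Gaut" and K: "K \<subseteq> Gaut"
  shows "card (fixpts (conjg \<tau> ` K)) = card (fixpts K)"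
  using fixpts_conjg_image[OF assms] card_image_Gaut[OF \<tau>] by simp

lemma stab_act_eq_conjg_image:
  assumes P: "subgrp P" and g: "gact Y act" and z: "z \<in> Y" and \<rho>: "\<rho> \<in> P"
  shows "stab P act (act \<rho> z) = conjg \<rho> ` stab P act z"
proof
  have \<rho>G: "\<rho> \<in> Gaut" using subgrp_imp_Gaut[OF P \<rho>] .
  show "stab P act (act \<rho> z) \<subseteq> conjg \<rho> ` stab P act z"
  proof
    fix \<sigma> assume s: "\<sigma> \<in> stab P act (act \<rho> z)"
    then have sP: "\<sigma> \<in> P" and sf: "act \<sigma> (act \<rho> z) = act \<rho> z" by (auto simp: stab_def)
    have sG: "\<sigma> \<in> Gaut" using subgrp_imp_Gaut[OF P sP] .
    define \<kappa> where "\<kappa> = inv \<rho> \<circ> \<sigma> \<circ> \<rho>"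
    have kP: "\<kappa> \<in> P" unfolding \<kappa>_def
      using subgrp_comp[OF P subgrp_comp[OF P subgrp_inv[OF P \<rho>] sP] \<rho>] .
    have "act \<kappa> z = act (inv \<rho>) (act \<sigma> (act \<rho> z))"
      unfolding \<kappa>_def using gact_comp[OF g] \<rho>G sG z gact_closed[OF g] by simp
    also have "\<dots> = z" using sf gact_inv_act[OF g \<rho>G z] by simp
    finally have "\<kappa> \<in> stab P act z" using kP by (simp add: stab_def)
    moreover have "\<sigma> = conjg \<rho> \<kappa>" using \<rho>G by (simp add: conjg_def \<kappa>_def fun_eq_iff)
    ultimately show "\<sigma> \<in> conjg \<rho> ` stab P act z" by blast
  qed
  show "conjg \<rho> ` stab P act z \<subseteq> stab P act (act \<rho> z)"
  proof
    fix \<sigma> assume "\<sigma> \<in> conjg \<rho> ` stab P act z"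
    then obtain \<kappa> where k: "\<kappa> \<in> P" "act \<kappa> z = z" "\<sigma> = conjg \<rho> \<kappa>" by (auto simp: stab_def)
    have kG: "\<kappa> \<in> Gaut" using subgrp_imp_Gaut[OF P k(1)] .
    have sP: "\<sigma> \<in> P" using k(3) subgrp_comp[OF P subgrp_comp[OF P \<rho> k(1)] subgrp_inv[OF P \<rho>]]
      by (simp add: conjg_def)
    have "\<sigma> \<circ> \<rho> = \<rho> \<circ> \<kappa>" using \<rho>G k(3) by (simp add: conjg_def fun_eq_iff)
    then have "act \<sigma> (act \<rho> z) = act \<rho> (act \<kappa> z)"
      using gact_comp[OF g subgrp_imp_Gaut[OF P sP] \<rho>G z] gact_comp[OF g \<rho>G kG z] by simp
    then show "\<sigma> \<in> stab P act (act \<rho> z)" using k(2) sP by (simp add: stab_def)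
  qed
qed

lemma orbit_term_any:
  assumes P: "subgrp P" and g: "gact Y act" and Ob: "Ob \<in> orbits P Y act" and z: "z \<in> Ob"
    and phi: "\<forall>\<rho>\<in>P. \<forall>y\<in>Y. \<phi> (act \<rho> y) = \<phi> y"
  shows "orbit_term P act \<phi> Ob = \<phi> z * (-1) ^ card (fixpts (stab P act z)) * (-1) ^ card (fixpts P)"
proof -
  define r where "r = (SOME y. y \<in> Ob)"
  have r: "r \<in> Y" "Ob = orbit P act r" using some_in_orbit[OF P g Ob] by (auto simp: r_def)
  obtain \<rho> where \<rho>: "\<rho> \<in> P" "z = act \<rho> r" using z r(2) by (auto simp: orbit_def)
  have "\<phi> z = \<phi> r" using phi \<rho> r(1) by simp
  moreover have "card (fixpts (stab P act z)) = card (fixpts (stab P act r))"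
  proof -
    have "stab P act z = conjg \<rho> ` stab P act r" using stab_act_eq_conjg_image[OF P g r(1) \<rho>(1)] \<rho>(2) by simp
    moreover have "stab P act r \<subseteq> Gaut" using P by (auto simp: stab_def subgrp_def)
    ultimately show ?thesis using card_fixpts_conjg_image[OF subgrp_imp_Gaut[OF P \<rho>(1)]] by simp
  qed
  ultimately show ?thesis by (simp add: orbit_term_def r_def)
qed

lemma conjg_Gaut: "\<tau> \<in> Gaut \<Longrightarrow> \<kappa> \<in> Gaut \<Longrightarrow> conjg \<tau> \<kappa> \<in> Gaut"
  by (simp add: conjg_def)

lemma conjg_conjg_inv: "\<tau> \<in> Gaut \<Longrightarrow> conjg \<tau> (conjg (inv \<tau>) \<sigma>) = \<sigma>"
  by (simp add: conjg_def fun_eq_iff)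

lemma act_conjg:
  assumes g: "gact Y act" and \<tau>: "\<tau> \<in> Gaut" and \<kappa>: "\<kappa> \<in> Gaut" and y: "y \<in> Y"
  shows "act (conjg \<tau> \<kappa>) (act \<tau> y) = act \<tau> (act \<kappa> y)"
proof -
  have "conjg \<tau> \<kappa> \<circ> \<tau> = \<tau> \<circ> \<kappa>" using \<tau> by (simp add: conjg_def fun_eq_iff)
  then show ?thesis
    using gact_comp[OF g conjg_Gaut[OF \<tau> \<kappa>] \<tau> y] gact_comp[OF g \<tau> \<kappa> y] by simp
qed

lemma fun_stab_translate:
  assumes g: "gact Y act" and \<tau>: "\<tau> \<in> Gaut"
  shows "fun_stab Gaut Y act \<psi> = conjg \<tau> ` fun_stab Gaut Y act (\<lambda>y. \<psi> (act \<tau> y))"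
proof
  have inv\<tau>: "inv \<tau> \<in> Gaut" using \<tau> by simp
  show "fun_stab Gaut Y act \<psi> \<subseteq> conjg \<tau> ` fun_stab Gaut Y act (\<lambda>y. \<psi> (act \<tau> y))"
  proof
    fix \<sigma> assume "\<sigma> \<in> fun_stab Gaut Y act \<psi>"
    then have \<sigma>: "\<sigma> \<in> Gaut" "\<forall>y\<in>Y. \<psi> (act \<sigma> y) = \<psi> y" by (auto simp: fun_stab_def)
    define \<kappa> where "\<kappa> = conjg (inv \<tau>) \<sigma>"
    have \<kappa>: "\<kappa> \<in> Gaut" and \<sigma>_eq: "\<sigma> = conjg \<tau> \<kappa>"
      using conjg_Gaut[OF inv\<tau> \<sigma>(1)] conjg_conjg_inv[OF \<tau>] by (simp_all add: \<kappa>_def)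
    have "\<psi> (act \<tau> (act \<kappa> y)) = \<psi> (act \<tau> y)" if y: "y \<in> Y" for y
      using act_conjg[OF g \<tau> \<kappa> y] \<sigma>(2) gact_closed[OF g \<tau> y] \<sigma>_eq by metis
    then have "\<kappa> \<in> fun_stab Gaut Y act (\<lambda>y. \<psi> (act \<tau> y))" using \<kappa> by (simp add: fun_stab_def)
    then show "\<sigma> \<in> conjg \<tau> ` fun_stab Gaut Y act (\<lambda>y. \<psi> (act \<tau> y))" using \<sigma>_eq by blast
  qed
  show "conjg \<tau> ` fun_stab Gaut Y act (\<lambda>y. \<psi> (act \<tau> y)) \<subseteq> fun_stab Gaut Y act \<psi>"
  proof
    fix \<sigma> assume "\<sigma> \<in> conjg \<tau> ` fun_stab Gaut Y act (\<lambda>y. \<psi> (act \<tau> y))"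
    then obtain \<kappa> where \<kappa>: "\<kappa> \<in> Gaut" "\<forall>y\<in>Y. \<psi> (act \<tau> (act \<kappa> y)) = \<psi> (act \<tau> y)"
      and \<sigma>_eq: "\<sigma> = conjg \<tau> \<kappa>" by (auto simp: fun_stab_def)
    have "\<psi> (act \<sigma> y) = \<psi> y" if y: "y \<in> Y" for y
    proof -
      define y' where "y' = act (inv \<tau>) y"
      have y': "y' \<in> Y" "act \<tau> y' = y"
        using gact_closed[OF g inv\<tau> y] gact_act_inv[OF g \<tau> y] by (simp_all add: y'_def)
      show ?thesis using act_conjg[OF g \<tau> \<kappa>(1) y'(1)] \<kappa>(2) y' \<sigma>_eq by metis
    qed
    then show "\<sigma> \<in> fun_stab Gaut Y act \<psi>" using conjg_Gaut[OF \<tau> \<kappa>(1)] \<sigma>_eq by (simp add: fun_stab_def)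
  qed
qed

locale orbit_transport =
  fixes Y :: "'y set" and act :: "(real \<Rightarrow> real) \<Rightarrow> 'y \<Rightarrow> 'y" and \<tau> :: "real \<Rightarrow> real"
    and V V' :: "(real \<Rightarrow> real) set"
  assumes gact_Y: "gact Y act" and \<tau>: "\<tau> \<in> Gaut" and subgrp_V: "subgrp V" and subgrp_V': "subgrp V'"
    and V_eq: "V = conjg \<tau> ` V'"
begin

lemma image_orbit: "y \<in> Y \<Longrightarrow> act \<tau> ` orbit V' act y = orbit V act (act \<tau> y)"
  using act_conjg[OF gact_Y \<tau> subgrp_imp_Gaut[OF subgrp_V']]
  by (simp add: orbit_def V_eq image_image)

lemma stab_act: 
  assumes z: "z \<in> Y"
  shows "stab V act (act \<tau> z) = conjg \<tau> ` stab V' act z"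
proof -
  have "act \<tau> (act \<kappa> z) = act \<tau> z \<longleftrightarrow> act \<kappa> z = z" if \<kappa>: "\<kappa> \<in> V'" for \<kappa>
    using gact_inv_act[OF gact_Y \<tau> gact_closed[OF gact_Y subgrp_imp_Gaut[OF subgrp_V' \<kappa>] z]]
      gact_inv_act[OF gact_Y \<tau> z] by metis
  then show ?thesis
    using act_conjg[OF gact_Y \<tau> subgrp_imp_Gaut[OF subgrp_V'] z] by (auto simp: stab_def V_eq)
qed

lemma bij_betw_image_orbits: "bij_betw (image (act \<tau>)) (orbits V' Y act) (orbits V Y act)"
proof (rule bij_betw_imageI)
  have "act (inv \<tau>) ` act \<tau> ` Ob = Ob" if "Ob \<in> orbits V' Y act" for Ob
  proof -
    have "Ob \<subseteq> Y" using that orbit_sub[OF subgrp_V' gact_Y] by (auto simp: orbits_def)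
    then show ?thesis using gact_inv_act[OF gact_Y \<tau>] by (force simp: image_image)
  qed
  then show "inj_on (image (act \<tau>)) (orbits V' Y act)" by (metis inj_onI)
  have "orbit V act y \<in> image (act \<tau>) ` orbits V' Y act" if y: "y \<in> Y" for y
    using image_orbit[OF gact_closed[OF gact_Y _ y]] gact_act_inv[OF gact_Y \<tau> y]
      gact_closed[OF gact_Y _ y] \<tau> by (metis Gaut_inv image_eqI orbits_def)
  then show "image (act \<tau>) ` orbits V' Y act = orbits V Y act"
    using image_orbit gact_closed[OF gact_Y \<tau>] by (auto simp: orbits_def)
qed

lemma orbit_sum_transport:
  assumes \<psi>: "\<forall>\<rho>\<in>V. \<forall>y\<in>Y. \<psi> (act \<rho> y) = \<psi> y"
  shows "orbit_sum V' Y act (\<lambda>y. \<psi> (act \<tau> y)) = orbit_sum V Y act \<psi>"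
proof -
  have "orbit_term V' act (\<lambda>y. \<psi> (act \<tau> y)) Ob = orbit_term V act \<psi> (act \<tau> ` Ob)"
    if Ob: "Ob \<in> orbits V' Y act" for Ob
  proof -
    define z where "z = (SOME y. y \<in> Ob)"
    have z: "z \<in> Ob" "z \<in> Y" using some_in_orbit[OF subgrp_V' gact_Y Ob] by (auto simp: z_def)
    have "act \<tau> ` Ob \<in> orbits V Y act" using bij_betw_image_orbits Ob by (auto simp: bij_betw_def)
    then have "orbit_term V act \<psi> (act \<tau> ` Ob)
        = \<psi> (act \<tau> z) * (-1) ^ card (fixpts (stab V act (act \<tau> z))) * (-1) ^ card (fixpts V)"
      using orbit_term_any[OF subgrp_V gact_Y _ _ \<psi>] z(1) by blast
    moreover have "stab V' act z \<subseteq> Gaut" using subgrp_imp_Gaut[OF subgrp_V'] by (auto simp: stab_def)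
    then have "card (fixpts (stab V act (act \<tau> z))) = card (fixpts (stab V' act z))"
      using stab_act[OF z(2)] card_fixpts_conjg_image[OF \<tau>] by simp
    moreover have "card (fixpts V) = card (fixpts V')"
      using V_eq card_fixpts_conjg_image[OF \<tau>] subgrp_imp_Gaut[OF subgrp_V'] by auto
    ultimately show ?thesis by (simp add: orbit_term_def z_def)
  qed
  then have "orbit_sum V' Y act (\<lambda>y. \<psi> (act \<tau> y)) = (\<Sum>Ob\<in>orbits V' Y act. orbit_term V act \<psi> (act \<tau> ` Ob))"
    unfolding orbit_sum_def by (rule sum.cong[OF refl])
  also have "\<dots> = orbit_sum V Y act \<psi>"
    unfolding orbit_sum_def by (rule sum.reindex_bij_betw[OF bij_betw_image_orbits])
  finally show ?thesis .
qed

end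

lemma integral_mu_translate:
  assumes g: "gact Y act" and \<tau>: "\<tau> \<in> Gaut"
  shows "integral_mu Gaut Y act (\<lambda>y. \<psi> (act \<tau> y)) = integral_mu Gaut Y act \<psi>"
proof -
  define V where "V = fun_stab Gaut Y act \<psi>"
  define V' where "V' = fun_stab Gaut Y act (\<lambda>y. \<psi> (act \<tau> y))"
  interpret orbit_transport Y act \<tau> V V'
    using fun_stab_subgrp[OF subgrp_Gaut g] fun_stab_translate[OF g \<tau>]
    by unfold_locales (simp_all add: g \<tau> V_def V'_def)
  have "orbit_sum V' Y act (\<lambda>y. \<psi> (act \<tau> y)) = orbit_sum V Y act \<psi>"
    by (rule orbit_sum_transport) (simp add: V_def fun_stab_def)
  then show ?thesis by (simp add: integral_mu_eq_orbit_sum V_def V'_def)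
qed

section \<open>Frobenius reciprocity\<close>

lemma coset_act_cancel:
  assumes "\<rho> \<in> Gaut" "coset_act \<rho> C1 = coset_act \<rho> C2"
  shows "C1 = C2"
proof -
  have "coset_act (inv \<rho>) (coset_act \<rho> C1) = coset_act (inv \<rho>) (coset_act \<rho> C2)" using assms(2) by simp
  then show ?thesis using assms(1) by (simp add: coset_act_comp[symmetric] coset_act_id)
qed

lemma coset_act_eq_fixed_iff:
  assumes "\<rho> \<in> Gaut" "coset_act \<rho> C0 = C0"
  shows "coset_act \<rho> C = C0 \<longleftrightarrow> C = C0"
  using coset_act_cancel[OF assms(1)] assms(2) by metis

lemma uset_unit: "uset Gaut {()} triv"
proof -
  have "pstab {} \<subseteq> stab Gaut triv ()" by (auto simp: pstab_def stab_def triv_def)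
  then show ?thesis unfolding uset_def orbits_def by (auto simp: triv_def)
qed

lemma comp_eq_integral_mu: "comp W Y a \<psi> \<phi> (z, x) = integral_mu W Y a (\<lambda>y. \<psi> (z, y) * \<phi> (y, x))"
  by (simp add: comp_def)

lemma comp_unit_m_ktensor:
  assumes "subgrp W"
  shows "comp W ({()} \<times> {()}) (pact triv triv) unit_m (ktensor h h) ((), (x1, x2)) = h ((), x1) * h ((), x2)"
proof -
  have "integral_mu W {((), ())} (pact triv triv) (\<lambda>q. unit_m ((), q) * ktensor h h (q, (x1, x2)))
      = unit_m ((), ((), ())) * ktensor h h (((), ()), (x1, x2))"
    by (rule integral_single[OF assms]) (simp add: pact_def triv_def)
  then show ?thesis by (simp add: comp_eq_integral_mu unit_m_def ktensor_def)
qed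

lemma pstab_UnD: "\<rho> \<in> pstab (A \<union> B) \<Longrightarrow> \<rho> \<in> pstab A \<and> \<rho> \<in> pstab B"
  by (auto simp: pstab_def)

lemma pstab_stab: "\<rho> \<in> pstab B \<Longrightarrow> pstab B \<subseteq> stab Gaut act y \<Longrightarrow> act \<rho> y = y"
  unfolding stab_def by blast

lemma pmor_inv: "pmor W X aX Y aY h \<Longrightarrow> \<sigma> \<in> W \<Longrightarrow> y \<in> Y \<Longrightarrow> x \<in> X \<Longrightarrow> h (aY \<sigma> y, aX \<sigma> x) = h (y, x)"
  unfolding pmor_def by blast

lemma pmor_zero: "pmor W X aX Y aY h \<Longrightarrow> y \<notin> Y \<or> x \<notin> X \<Longrightarrow> h (y, x) = 0"
  unfolding pmor_def by blast

lemma comp_eps_apply: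
  fixes h :: "(real \<Rightarrow> real) set \<times> 'x \<Rightarrow> 'k::field"
  assumes U: "open_subgroup U" and uX: "uset Gaut X act"
    and ph: "pmor Gaut X act (cosets U) coset_act h" and x: "x \<in> X"
  shows "comp U (cosets U) coset_act (eps U) h (w, x) = h (U, x)"
proof -
  obtain FU where FU: "finite FU" "pstab FU \<subseteq> U" using open_subgroup_pstab[OF U] by blast
  have Us: "subgrp U" using open_subgroup_subgrp[OF U] .
  obtain B where B: "finite B" "pstab B \<subseteq> stab Gaut act x" using uX x by (auto simp: uset_def)
  have "integral_mu U (cosets U) coset_act (\<lambda>C. eps U (w, C) * h (C, x)) = eps U (w, U) * h (U, x)"
  proof (rule integral_delta[OF Us uset_cosets[OF U] _ _ U_in_cosets])
    show "finite (FU \<union> B)" using FU B by simp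
    show "\<forall>\<rho>\<in>pstab (FU \<union> B). \<rho> \<in> U \<and> (\<forall>C\<in>cosets U. eps U (w, coset_act \<rho> C) * h (coset_act \<rho> C, x) = eps U (w, C) * h (C, x))"
    proof (intro ballI conjI)
      fix \<rho> assume \<rho>: "\<rho> \<in> pstab (FU \<union> B)"
      then have \<rho>1: "\<rho> \<in> pstab FU" and \<rho>2: "\<rho> \<in> pstab B" using pstab_UnD by blast+
      show \<rho>U: "\<rho> \<in> U" using \<rho>1 FU(2) by auto
      have \<rho>G: "\<rho> \<in> Gaut" using \<rho>1 by (simp add: pstab_def)
      have \<rho>x: "act \<rho> x = x" using pstab_stab[OF \<rho>2 B(2)] .
      have \<rho>U': "coset_act \<rho> U = U" using coset_of_mem[OF Us \<rho>U] by (simp add: coset_act_def)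
      fix C assume C: "C \<in> cosets U"
      have "h (coset_act \<rho> C, x) = h (C, x)" using pmor_inv[OF ph \<rho>G C x] \<rho>x by simp
      moreover have "coset_act \<rho> C = U \<longleftrightarrow> C = U" using coset_act_eq_fixed_iff[OF \<rho>G \<rho>U'] .
      ultimately show "eps U (w, coset_act \<rho> C) * h (coset_act \<rho> C, x) = eps U (w, C) * h (C, x)"
        by (simp add: eps_def)
    qed
    show "\<forall>C\<in>cosets U. C \<noteq> U \<longrightarrow> eps U (w, C) * h (C, x) = 0" by (simp add: eps_def)
  qed
  then show ?thesis by (simp add: comp_eq_integral_mu eps_def)
qed

lemma comp_CGU_e_apply:
  fixes h :: "(real \<Rightarrow> real) set \<times> 'x \<Rightarrow> 'k::field"
  assumes U: "open_subgroup U" and uX: "uset Gaut X act"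
    and ph: "pmor Gaut X act (cosets U) coset_act h" and C0: "C0 \<in> cosets U" and x: "x \<in> X"
  shows "comp Gaut (cosets U) coset_act (CGU_e U) h (C0, x) = h (C0, x)"
proof -
  have uC: "uset Gaut (cosets U) coset_act" using uset_cosets[OF U] .
  obtain B where B: "finite B" "pstab B \<subseteq> stab Gaut act x" using uX x by (auto simp: uset_def)
  obtain BC where BC: "finite BC" "pstab BC \<subseteq> stab Gaut coset_act C0" using uC C0 by (auto simp: uset_def)
  have "integral_mu Gaut (cosets U) coset_act (\<lambda>C. CGU_e U (C0, C) * h (C, x)) = CGU_e U (C0, C0) * h (C0, x)"
  proof (rule integral_delta[OF subgrp_Gaut uC _ _ C0])
    show "finite (BC \<union> B)" using BC B by simp
    show "\<forall>\<rho>\<in>pstab (BC \<union> B). \<rho> \<in> Gaut \<and> (\<forall>C\<in>cosets U. CGU_e U (C0, coset_act \<rho> C) * h (coset_act \<rho> C, x) = CGU_e U (C0, C) * h (C, x))"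
    proof (intro ballI conjI)
      fix \<rho> assume \<rho>: "\<rho> \<in> pstab (BC \<union> B)"
      then have \<rho>1: "\<rho> \<in> pstab BC" and \<rho>2: "\<rho> \<in> pstab B" using pstab_UnD by blast+
      show \<rho>G: "\<rho> \<in> Gaut" using \<rho>1 by (simp add: pstab_def)
      have \<rho>x: "act \<rho> x = x" using pstab_stab[OF \<rho>2 B(2)] .
      have \<rho>C: "coset_act \<rho> C0 = C0" using pstab_stab[OF \<rho>1 BC(2)] .
      fix C assume C: "C \<in> cosets U"
      have "h (coset_act \<rho> C, x) = h (C, x)" using pmor_inv[OF ph \<rho>G C x] \<rho>x by simp
      moreover have "coset_act \<rho> C = C0 \<longleftrightarrow> C = C0" using coset_act_eq_fixed_iff[OF \<rho>G \<rho>C] .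
      ultimately show "CGU_e U (C0, coset_act \<rho> C) * h (coset_act \<rho> C, x) = CGU_e U (C0, C) * h (C, x)"
        by (auto simp: CGU_e_def)
    qed
    show "\<forall>C\<in>cosets U. C \<noteq> C0 \<longrightarrow> CGU_e U (C0, C) * h (C, x) = 0" by (simp add: CGU_e_def)
  qed
  then show ?thesis using C0 by (simp add: comp_eq_integral_mu CGU_e_def)
qed

lemma comp_CGU_m_apply:
  fixes h :: "(real \<Rightarrow> real) set \<times> 'x \<Rightarrow> 'k::field"
  assumes U: "open_subgroup U" and uX: "uset Gaut X act"
    and ph: "pmor Gaut X act (cosets U) coset_act h" and C0: "C0 \<in> cosets U" and x1: "x1 \<in> X" and x2: "x2 \<in> X"
  shows "comp Gaut (cosets U \<times> cosets U) (pact coset_act coset_act) (CGU_m U) (ktensor h h) (C0, (x1, x2))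
    = h (C0, x1) * h (C0, x2)"
proof -
  have uC: "uset Gaut (cosets U) coset_act" using uset_cosets[OF U] .
  have uCC: "uset Gaut (cosets U \<times> cosets U) (pact coset_act coset_act)" using uset_prod[OF uC uC] .
  obtain B1 where B1: "finite B1" "pstab B1 \<subseteq> stab Gaut act x1" using uX x1 by (auto simp: uset_def)
  obtain B2 where B2: "finite B2" "pstab B2 \<subseteq> stab Gaut act x2" using uX x2 by (auto simp: uset_def)
  obtain BC where BC: "finite BC" "pstab BC \<subseteq> stab Gaut coset_act C0" using uC C0 by (auto simp: uset_def)
  define \<phi> where "\<phi> q = CGU_m U (C0, q) * ktensor h h (q, (x1, x2))" for q
  have \<phi>_eq: "\<phi> (A1, A2) = (if C0 = A1 \<and> C0 = A2 \<and> C0 \<in> cosets U then 1 else 0) * (h (A1, x1) * h (A2, x2))"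
    for A1 A2 by (simp add: \<phi>_def CGU_m_def ktensor_def)
  have "integral_mu Gaut (cosets U \<times> cosets U) (pact coset_act coset_act) \<phi> = \<phi> (C0, C0)"
  proof (rule integral_delta[OF subgrp_Gaut uCC])
    show "finite (BC \<union> (B1 \<union> B2))" using BC B1 B2 by simp
    show "(C0, C0) \<in> cosets U \<times> cosets U" using C0 by simp
    show "\<forall>\<rho>\<in>pstab (BC \<union> (B1 \<union> B2)). \<rho> \<in> Gaut \<and> (\<forall>q\<in>cosets U \<times> cosets U. \<phi> (pact coset_act coset_act \<rho> q) = \<phi> q)"
    proof (intro ballI conjI)
      fix \<rho> assume \<rho>: "\<rho> \<in> pstab (BC \<union> (B1 \<union> B2))"
      then have \<rho>1: "\<rho> \<in> pstab BC" and \<rho>2: "\<rho> \<in> pstab B1" and \<rho>3: "\<rho> \<in> pstab B2" using pstab_UnD by blast+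
      show \<rho>G: "\<rho> \<in> Gaut" using \<rho>1 by (simp add: pstab_def)
      have \<rho>C: "coset_act \<rho> C0 = C0" using pstab_stab[OF \<rho>1 BC(2)] .
      fix q assume q: "q \<in> cosets U \<times> cosets U"
      obtain C1 C2 where q12: "q = (C1, C2)" "C1 \<in> cosets U" "C2 \<in> cosets U" using q by auto
      have h1: "h (coset_act \<rho> C1, x1) = h (C1, x1)"
        using pmor_inv[OF ph \<rho>G q12(2) x1] pstab_stab[OF \<rho>2 B1(2)] by simp
      have h2: "h (coset_act \<rho> C2, x2) = h (C2, x2)"
        using pmor_inv[OF ph \<rho>G q12(3) x2] pstab_stab[OF \<rho>3 B2(2)] by simp
      have e1: "(C0 = coset_act \<rho> C1) = (C0 = C1)" and e2: "(C0 = coset_act \<rho> C2) = (C0 = C2)"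
        using coset_act_eq_fixed_iff[OF \<rho>G \<rho>C] by metis+
      show "\<phi> (pact coset_act coset_act \<rho> q) = \<phi> q"
        unfolding q12(1) pact_def fst_conv snd_conv \<phi>_eq h1 h2 e1 e2 ..
    qed
    show "\<forall>q\<in>cosets U \<times> cosets U. q \<noteq> (C0, C0) \<longrightarrow> \<phi> q = 0"
      using \<phi>_eq by auto
  qed
  then show ?thesis using C0 by (simp add: comp_eq_integral_mu \<phi>_def[symmetric] \<phi>_eq)
qed

text \<open>The transpose \<open>g (\<sigma>U, x) = f (\<sigma>\<^sup>-\<^sup>1 x)\<close> of \<open>f\<close>; by \<open>U\<close>-invariance of \<open>f\<close> the
  choice of the representative \<open>\<sigma>\<close> does not matter.\<close>

definition coset_rep :: "(real \<Rightarrow> real) set \<Rightarrow> (real \<Rightarrow> real) set \<Rightarrow> real \<Rightarrow> real" where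
  "coset_rep U C = (SOME \<sigma>. \<sigma> \<in> Gaut \<and> C = (\<lambda>\<tau>. \<sigma> \<circ> \<tau>) ` U)"

definition induced_mor :: "(real \<Rightarrow> real) set \<Rightarrow> 'x set \<Rightarrow> ((real \<Rightarrow> real) \<Rightarrow> 'x \<Rightarrow> 'x)
     \<Rightarrow> (unit \<times> 'x \<Rightarrow> 'k::field) \<Rightarrow> (real \<Rightarrow> real) set \<times> 'x \<Rightarrow> 'k" where
  "induced_mor U X act f p =
     (if fst p \<in> cosets U \<and> snd p \<in> X then f ((), act (inv (coset_rep U (fst p))) (snd p)) else 0)"

locale frobenius =
  fixes U :: "(real \<Rightarrow> real) set" and X :: "'x set" and act :: "(real \<Rightarrow> real) \<Rightarrow> 'x \<Rightarrow> 'x"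
    and f :: "unit \<times> 'x \<Rightarrow> 'k::field"
  assumes open_U: "open_subgroup U" and uset_X: "uset Gaut X act"
    and pmor_f: "pmor U X act {()} triv f"
begin

abbreviation g :: "(real \<Rightarrow> real) set \<times> 'x \<Rightarrow> 'k" where
  "g \<equiv> induced_mor U X act f"

lemma subgrp_U: "subgrp U"
  using open_subgroup_subgrp[OF open_U] .

lemma gact_X: "gact X act"
  using uset_X by (rule uset_gact)

lemma f_invariant: "\<rho> \<in> U \<Longrightarrow> y \<in> X \<Longrightarrow> f ((), act \<rho> y) = f ((), y)"
  using pmor_inv[OF pmor_f, of \<rho> "()" y] by (simp add: triv_def)

lemma induced_mor_coset:
  assumes \<sigma>: "\<sigma> \<in> Gaut" and x: "x \<in> X"
  shows "g ((\<lambda>\<tau>. \<sigma> \<circ> \<tau>) ` U, x) = f ((), act (inv \<sigma>) x)"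
proof -
  define C where "C = (\<lambda>\<tau>. \<sigma> \<circ> \<tau>) ` U"
  define \<rho> where "\<rho> = coset_rep U C"
  have "\<rho> \<in> Gaut \<and> C = (\<lambda>\<tau>. \<rho> \<circ> \<tau>) ` U"
    unfolding \<rho>_def coset_rep_def by (rule someI[of _ \<sigma>]) (use \<sigma> C_def in blast)
  then have \<rho>G: "\<rho> \<in> Gaut" and \<kappa>U: "inv \<rho> \<circ> \<sigma> \<in> U"
    using coset_eq_iff[OF subgrp_U \<sigma>] by (auto simp: C_def)
  have x': "act (inv \<rho>) x \<in> X" using gact_closed[OF gact_X Gaut_inv[OF \<rho>G] x] .
  have "act (inv \<sigma>) x = act (inv (inv \<rho> \<circ> \<sigma>)) (act (inv \<rho>) x)"
    using Gaut_inv_comp_distrib[OF Gaut_inv[OF \<rho>G] \<sigma>] \<rho>G \<sigma> x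
      gact_comp[OF gact_X Gaut_inv[OF \<sigma>] \<rho>G x'] gact_act_inv[OF gact_X \<rho>G x] by simp
  then have "f ((), act (inv \<sigma>) x) = f ((), act (inv \<rho>) x)"
    using f_invariant[OF subgrp_inv[OF subgrp_U \<kappa>U] x'] by simp
  moreover have "C \<in> cosets U" using \<sigma> by (auto simp: cosets_iff C_def)
  ultimately show ?thesis using x by (simp add: induced_mor_def C_def[symmetric] \<rho>_def)
qed

lemma induced_mor_outside: "C \<notin> cosets U \<or> x \<notin> X \<Longrightarrow> g (C, x) = 0"
  by (auto simp: induced_mor_def)

lemma pmor_induced_mor: "pmor Gaut X act (cosets U) coset_act g"
proof -
  have "g (coset_act \<sigma> C, act \<sigma> x) = g (C, x)" if \<sigma>: "\<sigma> \<in> Gaut" and C: "C \<in> cosets U" and x: "x \<in> X"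
    for \<sigma> C x
  proof -
    obtain \<rho> where \<rho>: "\<rho> \<in> Gaut" "C = (\<lambda>\<tau>. \<rho> \<circ> \<tau>) ` U" using C by (auto simp: cosets_iff)
    have "act (inv (\<sigma> \<circ> \<rho>)) (act \<sigma> x) = act (inv \<rho>) (act (inv \<sigma>) (act \<sigma> x))"
      using Gaut_inv_comp_distrib[OF \<sigma> \<rho>(1)]
        gact_comp[OF gact_X Gaut_inv[OF \<rho>(1)] Gaut_inv[OF \<sigma>] gact_closed[OF gact_X \<sigma> x]] by simp
    then have "act (inv (\<sigma> \<circ> \<rho>)) (act \<sigma> x) = act (inv \<rho>) x" using gact_inv_act[OF gact_X \<sigma> x] by simp
    then show ?thesis
      using induced_mor_coset[of "\<sigma> \<circ> \<rho>" "act \<sigma> x"] induced_mor_coset[OF \<rho>(1) x] \<sigma> \<rho>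
        gact_closed[OF gact_X \<sigma> x] by (simp add: coset_act_img)
  qed
  then show ?thesis unfolding pmor_def using induced_mor_outside by blast
qed

text \<open>After translating by \<open>\<sigma>\<close>, the integral over the \<open>Gaut\<close>-set \<open>X\<close> becomes one over \<open>X\<close>
  as a \<open>U\<close>-set; both are orbit sums over one small pointwise stabilizer.\<close>

lemma integral_mu_induced_mor:
  assumes \<sigma>: "\<sigma> \<in> Gaut" and Hrel: "\<forall>y\<in>X. H (act \<sigma> y) = H' y"
    and B: "finite B" and H'inv: "\<forall>\<rho>\<in>pstab B. \<forall>y\<in>X. H' (act \<rho> y) = H' y"
  shows "integral_mu Gaut X act (\<lambda>y. g ((\<lambda>\<tau>. \<sigma> \<circ> \<tau>) ` U, y) * H y)
    = integral_mu U X act (\<lambda>y. f ((), y) * H' y)"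
proof -
  define \<psi> where "\<psi> = (\<lambda>y. f ((), y) * H' y)"
  have iG: "inv \<sigma> \<in> Gaut" using \<sigma> by simp
  have "integral_mu Gaut X act (\<lambda>y. g ((\<lambda>\<tau>. \<sigma> \<circ> \<tau>) ` U, y) * H y)
      = integral_mu Gaut X act (\<lambda>y. \<psi> (act (inv \<sigma>) y))"
  proof (rule integral_cong[OF subgrp_Gaut gact_X], intro ballI)
    fix y assume y: "y \<in> X"
    have "H' (act (inv \<sigma>) y) = H y"
      using Hrel gact_closed[OF gact_X iG y] gact_act_inv[OF gact_X \<sigma> y] by metis
    then show "g ((\<lambda>\<tau>. \<sigma> \<circ> \<tau>) ` U, y) * H y = \<psi> (act (inv \<sigma>) y)"
      using induced_mor_coset[OF \<sigma> y] by (simp add: \<psi>_def)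
  qed
  also have "\<dots> = integral_mu Gaut X act \<psi>" by (rule integral_mu_translate[OF gact_X iG])
  also have "\<dots> = integral_mu U X act \<psi>"
  proof -
    obtain FU where FU: "finite FU" "pstab FU \<subseteq> U" using open_subgroup_pstab[OF open_U] by blast
    define P where "P = fun_stab Gaut X act \<psi>"
    define P' where "P' = fun_stab U X act \<psi>"
    have P: "subgrp P" using fun_stab_subgrp[OF subgrp_Gaut gact_X] by (simp add: P_def)
    have P': "subgrp P'" using fun_stab_subgrp[OF subgrp_U gact_X] by (simp add: P'_def)
    have inv: "\<rho> \<in> U \<and> (\<forall>y\<in>X. \<psi> (act \<rho> y) = \<psi> y)" if \<rho>: "\<rho> \<in> pstab (FU \<union> B)" for \<rho>
      using pstab_UnD[OF \<rho>] FU(2) f_invariant H'inv by (auto simp: \<psi>_def)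
    have "pstab (FU \<union> B) \<subseteq> P" "pstab (FU \<union> B) \<subseteq> P'"
      using inv pstab_subset_Gaut by (auto simp: P_def P'_def fun_stab_def)
    moreover have "finite (FU \<union> B)" using FU(1) B by simp
    ultimately have "orbit_sum P X act \<psi> = orbit_sum P' X act \<psi>"
      by (intro orbit_sum_indep[OF uset_X P P']) (auto simp: P_def P'_def fun_stab_def)
    then show ?thesis by (simp add: integral_mu_eq_orbit_sum P_def P'_def)
  qed
  finally show ?thesis unfolding \<psi>_def .
qed

text \<open>Precomposition with \<open>g\<close> is induction of precomposition with \<open>f\<close>.\<close>

lemma comp_induced_mor_eqI:
  assumes uZ: "uset Gaut Z actZ" and k: "pmor Gaut Z actZ X act k"
    and inside: "\<And>\<sigma> z. \<sigma> \<in> Gaut \<Longrightarrow> z \<in> Z \<Longrightarrow>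
      comp U X act f k ((), actZ (inv \<sigma>) z) = h ((\<lambda>\<tau>. \<sigma> \<circ> \<tau>) ` U, z)"
    and outside: "\<And>C z. C \<notin> cosets U \<or> z \<notin> Z \<Longrightarrow> h (C, z) = 0"
  shows "comp Gaut X act g k = h"
proof (rule ext, clarify)
  fix C z
  show "comp Gaut X act g k (C, z) = h (C, z)"
  proof (cases "C \<in> cosets U \<and> z \<in> Z")
    case False
    have "integral_mu Gaut X act (\<lambda>y. g (C, y) * k (y, z)) = 0"
      using False induced_mor_outside pmor_zero[OF k]
      by (intro integral_zero[OF subgrp_Gaut gact_X]) auto
    then show ?thesis using False outside by (simp add: comp_eq_integral_mu)
  next
    case True
    then obtain \<sigma> where \<sigma>: "\<sigma> \<in> Gaut" and C: "C = (\<lambda>\<tau>. \<sigma> \<circ> \<tau>) ` U" and z: "z \<in> Z"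
      by (auto simp: cosets_iff)
    have gZ: "gact Z actZ" using uZ by (rule uset_gact)
    define z' where "z' = actZ (inv \<sigma>) z"
    have z': "z' \<in> Z" using gact_closed[OF gZ Gaut_inv[OF \<sigma>] z] by (simp add: z'_def)
    obtain B where B: "finite B" "pstab B \<subseteq> stab Gaut actZ z'" using uZ z' by (auto simp: uset_def)
    have Hrel: "\<forall>y\<in>X. k (act \<sigma> y, z) = k (y, z')"
      using pmor_inv[OF k \<sigma> _ z'] gact_act_inv[OF gZ \<sigma> z] by (simp add: z'_def)
    have H'inv: "\<forall>\<rho>\<in>pstab B. \<forall>y\<in>X. k (act \<rho> y, z') = k (y, z')"
      using pmor_inv[OF k _ _ z'] pstab_stab[OF _ B(2)] pstab_subset_Gaut by fastforce
    have "comp Gaut X act g k (C, z) = integral_mu U X act (\<lambda>y. f ((), y) * k (y, z'))"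
      using integral_mu_induced_mor[OF \<sigma> Hrel B(1) H'inv] by (simp add: comp_eq_integral_mu C)
    also have "\<dots> = h (C, z)" using inside[OF \<sigma> z] by (simp add: comp_eq_integral_mu C z'_def)
    finally show ?thesis .
  qed
qed

lemma comp_CGU_e_induced_mor: "comp Gaut (cosets U) coset_act (CGU_e U) g = g"
proof (rule ext, clarify)
  fix C0 x
  show "comp Gaut (cosets U) coset_act (CGU_e U) g (C0, x) = g (C0, x)"
  proof (cases "C0 \<in> cosets U \<and> x \<in> X")
    case True
    then show ?thesis using comp_CGU_e_apply[OF open_U uset_X pmor_induced_mor] by blast
  next
    case False
    have "integral_mu Gaut (cosets U) coset_act (\<lambda>C. CGU_e U (C0, C) * g (C, x)) = 0"
      using False induced_mor_outside
      by (intro integral_zero[OF subgrp_Gaut gact_cosets]) (auto simp: CGU_e_def)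
    then show ?thesis using False induced_mor_outside by (simp add: comp_eq_integral_mu)
  qed
qed

lemma alg_hom_induced_mor:
  assumes A: "comm_alg Gaut X act e m u"
    and f: "alg_hom U X act e m u {()} triv unit_e unit_m unit_u f"
  shows "alg_hom Gaut X act e m u (cosets U) coset_act (CGU_e U) (CGU_m U) (CGU_u U) g"
proof -
  have pe: "pmor Gaut X act X act e" and pm: "pmor Gaut (X \<times> X) (pact act act) X act m"
    and pu: "pmor Gaut {()} triv X act u"
    using A by (simp_all add: comm_alg_def kobj_def kmor_def)
  have fe: "comp U X act f e = f"
    and fm: "comp U X act f m = comp U ({()} \<times> {()}) (pact triv triv) unit_m (ktensor f f)"
    and fu: "comp U X act f u = unit_u"
    using f by (simp_all add: alg_hom_def kmor_def)
  have "comp Gaut X act g e = g"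
    using fe induced_mor_coset induced_mor_outside
    by (intro comp_induced_mor_eqI[OF uset_X pe]) simp_all
  moreover have "comp Gaut X act g m
      = comp Gaut (cosets U \<times> cosets U) (pact coset_act coset_act) (CGU_m U) (ktensor g g)"
  proof (rule comp_induced_mor_eqI[OF uset_prod[OF uset_X uset_X] pm])
    fix \<sigma> z assume \<sigma>: "\<sigma> \<in> Gaut" and z: "z \<in> X \<times> X"
    obtain x1 x2 where x: "z = (x1, x2)" "x1 \<in> X" "x2 \<in> X" using z by auto
    have C: "(\<lambda>\<tau>. \<sigma> \<circ> \<tau>) ` U \<in> cosets U" using \<sigma> by (auto simp: cosets_iff)
    show "comp U X act f m ((), pact act act (inv \<sigma>) z)
        = comp Gaut (cosets U \<times> cosets U) (pact coset_act coset_act) (CGU_m U) (ktensor g g)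
            ((\<lambda>\<tau>. \<sigma> \<circ> \<tau>) ` U, z)"
      using comp_unit_m_ktensor[OF subgrp_U] induced_mor_coset[OF \<sigma>] x
        comp_CGU_m_apply[OF open_U uset_X pmor_induced_mor C] by (simp add: fm pact_def)
  next
    fix C z assume "C \<notin> cosets U \<or> z \<notin> X \<times> X"
    then show "comp Gaut (cosets U \<times> cosets U) (pact coset_act coset_act) (CGU_m U) (ktensor g g) (C, z) = 0"
      using induced_mor_outside
      by (simp add: comp_eq_integral_mu, intro integral_zero[OF subgrp_Gaut gact_pact[OF gact_cosets gact_cosets]])
        (auto simp: CGU_m_def ktensor_def mem_Times_iff)
  qed
  moreover have "comp Gaut X act g u = CGU_u U"
    using fu by (intro comp_induced_mor_eqI[OF uset_unit pu]) (auto simp: unit_u_def CGU_u_def cosets_iff)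
  ultimately show ?thesis
    using pmor_induced_mor comp_CGU_e_induced_mor by (simp add: alg_hom_def kmor_def)
qed

lemma comp_eps_induced_mor: "comp U (cosets U) coset_act (eps U) g = f"
proof (rule ext, clarify)
  fix w x
  show "comp U (cosets U) coset_act (eps U) g (w, x) = f (w, x)"
  proof (cases "x \<in> X")
    case True
    then show ?thesis
      using comp_eps_apply[OF open_U uset_X pmor_induced_mor True] induced_mor_coset[OF Gaut_id True]
        gact_id[OF gact_X True] by (simp add: image_comp)
  next
    case False
    have "integral_mu U (cosets U) coset_act (\<lambda>C. eps U (w, C) * g (C, x)) = 0"
      using False induced_mor_outside by (intro integral_zero[OF subgrp_U gact_cosets]) auto
    then show ?thesis using False pmor_zero[OF pmor_f] by (simp add: comp_eq_integral_mu)
  qed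
qed

lemma induced_mor_unique:
  assumes h: "pmor Gaut X act (cosets U) coset_act h" and eps_h: "comp U (cosets U) coset_act (eps U) h = f"
  shows "h = g"
proof (rule ext, clarify)
  fix C x
  show "h (C, x) = g (C, x)"
  proof (cases "C \<in> cosets U \<and> x \<in> X")
    case False
    then show ?thesis using induced_mor_outside pmor_zero[OF h] by auto
  next
    case True
    then obtain \<sigma> where \<sigma>: "\<sigma> \<in> Gaut" and C: "C = (\<lambda>\<tau>. \<sigma> \<circ> \<tau>) ` U" and x: "x \<in> X"
      by (auto simp: cosets_iff)
    have iG: "inv \<sigma> \<in> Gaut" using \<sigma> by simp
    have x': "act (inv \<sigma>) x \<in> X" using gact_closed[OF gact_X iG x] .
    have "h (C, x) = h (coset_act (inv \<sigma>) C, act (inv \<sigma>) x)"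
      using pmor_inv[OF h iG _ x, of C] True by simp
    also have "coset_act (inv \<sigma>) C = U" using \<sigma> by (simp add: C coset_act_img image_comp)
    also have "h (U, act (inv \<sigma>) x) = f ((), act (inv \<sigma>) x)"
      using comp_eps_apply[OF open_U uset_X h x', of "()"] eps_h by simp
    also have "\<dots> = g (C, x)" using induced_mor_coset[OF \<sigma> x] C by simp
    finally show ?thesis .
  qed
qed

end

theorem proposition3p7:
  fixes U :: "(real \<Rightarrow> real) set"
    and X :: "'x set" and act :: "(real \<Rightarrow> real) \<Rightarrow> 'x \<Rightarrow> 'x"
    and e :: "'x \<times> 'x \<Rightarrow> 'k::field" and m :: "'x \<times> ('x \<times> 'x) \<Rightarrow> 'k" and u :: "'x \<times> unit \<Rightarrow> 'k"
    and f :: "unit \<times> 'x \<Rightarrow> 'k"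
  assumes "open_subgroup U"
    and "comm_alg Gaut X act e m u"
    and "alg_hom U X act e m u {()} triv unit_e unit_m unit_u f"
  shows "\<exists>!g. alg_hom Gaut X act e m u (cosets U) coset_act (CGU_e U) (CGU_m U) (CGU_u U) g
              \<and> f = comp U (cosets U) coset_act (eps U) g"
proof -
  have "uset Gaut X act" using assms(2) by (simp add: comm_alg_def kobj_def)
  moreover have "pmor U X act {()} triv f" using assms(3) by (simp add: alg_hom_def kmor_def)
  ultimately interpret frobenius U X act f using assms(1) by unfold_locales
  show ?thesis
  proof (rule ex1I[of _ "induced_mor U X act f"])
    show "alg_hom Gaut X act e m u (cosets U) coset_act (CGU_e U) (CGU_m U) (CGU_u U) (induced_mor U X act f)
        \<and> f = comp U (cosets U) coset_act (eps U) (induced_mor U X act f)"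
      using alg_hom_induced_mor[OF assms(2,3)] comp_eps_induced_mor by simp
  next
    fix h
    assume "alg_hom Gaut X act e m u (cosets U) coset_act (CGU_e U) (CGU_m U) (CGU_u U) h
      \<and> f = comp U (cosets U) coset_act (eps U) h"
    then show "h = induced_mor U X act f"
      using induced_mor_unique by (simp add: alg_hom_def kmor_def)
  qed
qed

end
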